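(* For all (well-formed, possibly open) $\lambda$-terms $t$ and $s$, $t \approx_{\mathrm{nf}} s$ if and only if there exists a natural number $n > \max(\mathrm{fv}(t)\cup\mathrm{fv}(s))$ such that $[\![\langle t, [], n\rangle_{\mathrm{ev}}]\!] \approx_H [\![\langle s, [], n\rangle_{\mathrm{ev}}]\!]$, where $H = \{c, hd, b, k, init, rec, ch\}$.
   Context: HOcore: processes $P,Q ::= a(x).P \mid \overline{a}\langle P\rangle \mid P \parallel Q \mid x \mid 0$ ($a$ channel names, $x$ process variables, $a(x).P$ binds $x$, $a(\_).P$ when $x$ is unused, $\parallel$ associative and commutative with unit $0$, $\mathrm{fn}(P)$ the free names). LTS: $\overline{a}\langle P\rangle \xrightarrow{\overline{a}\langle P\rangle} 0$; $a(x).Q \xrightarrow{a(P)} Q\{P/x\}$; if $P \xrightarrow{l} P'$ then $P\parallel Q \xrightarrow{l} P'\parallel Q$ (and symmetrically); if $P \xrightarrow{\overline{a}\langle R\rangle} P'$ and $Q \xrightarrow{a(R)} Q'$ then $P \parallel Q \xrightarrow{\tau} P'\parallel Q'$ (and symmetrically). $\Rightarrow$ is the reflexive transitive closure of $\xrightarrow{\tau}$. For a finite set $H$: $P\downarrow^H_a$ (resp. $P\downarrow^H_{\overline a}$) if $a\notin H$ and $P\xrightarrow{a(Q)}R$ (resp. $P\xrightarrow{\overline a\langle Q\rangle}R$) for some $Q,R$; $P\Downarrow^H_\mu$ if $P\Rightarrow P'\downarrow^H_\mu$. A barbed bisimulation w.r.t. $H$ is a symmetric relation $\mathcal R$ such that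 $P\mathcal RQ$ implies: $P\downarrow^H_\mu$ implies $Q\Downarrow^H_\mu$; for all $R$ with $\mathrm{fn}(R)\cap H=\emptyset$, $(P\parallel R)\mathcal R(Q\parallel R)$; if $P\xrightarrow\tau P'$ then $Q\Rightarrow Q'$ with $P'\mathcal RQ'$. $\approx_H$ is the largest barbed bisimulation w.r.t. $H$. Terms: $t,s ::= f \mid x \mid \lambda x.t \mid t\,s$ ($f$ free variables identified with natural numbers, $x$ bound variables, terms well formed; $\mathrm{fv}(t)$ the free variables). Stacks $\pi ::= t::\pi\mid[]$. KAM: $\langle t\,s, \pi\rangle \to \langle t, s :: \pi\rangle$, $\langle \lambda x.t, s::\pi\rangle \to \langle t\{s/x\}, \pi\rangle$. Relations on terms extend to stacks pointwise (equal length, elementwise related). Normal-form bisimulation: symmetric $\mathcal R$ on terms with $t\mathcal Rs$ implying (1) if $\langle t, []\rangle \to^* \langle \lambda x.t', []\rangle$ then $\langle s,[]\rangle \to^* \langle \lambda x.s', []\rangle$ for some $s'$ with $t'\{f/x\} \mathcal R s'\{f/x\}$ for a fresh $f$; (2) if $\langle t, []\rangle \to^* \langle f, \pi\rangle$ then $\langle s,[]\rangle\to^*\langle f,\pi'\rangle$ for some $\pi'$ with $\pi\mathcal R\pi'$. $\approx_{\mathrm{nf}}$ is the largest normal-form bisimulation. NFB machine configurations: $\langle t,\pi,n\rangle_{\mathrm{ev}}$ and $\langle \pi, n\rangle_{\mathrm{cont}}$ ($n\in\mathbb N$). Translation into HOcore, using channel names $c, hd, b, k, init, rec, ch$ and flag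 names $\lambda, \mathsf{enter}, \mathsf{skip}, \mathsf{done}, suc, z$ ($p$ fresh). Internal choice: $P + Q = \overline{ch}\langle P\rangle \parallel \overline{ch}\langle Q\rangle \parallel ch(x).ch(\_).x$. Numbers: $[0] = z(\_).\overline{init}\langle 0\rangle$, $[n+1] = suc(\_).[n]$. $[\![t\,s]\!] = c(p).([\![t]\!] \parallel \overline{c}\langle \overline{hd}\langle[\![s]\!]\rangle \parallel \overline{c}\langle p\rangle\rangle)$; $[\![\lambda x.t]\!] = c(p).(p \parallel \overline{b}\langle \mathit{Restart}\rangle \parallel hd(x).b(\_).[\![t]\!])$; $[\![x]\!] = x$; $[\![f]\!] = [f]$; $\mathit{Restart} = \lambda(\_).k(x).(\overline{hd}\langle x\rangle \parallel \overline{k}\langle suc(\_).x\rangle \parallel \overline{c}\langle[\![[]]\!]\rangle \parallel \overline{b}\langle 0\rangle)$; $\mathit{Rec} = init(\_).rec(x).(x \parallel \overline{rec}\langle x\rangle \parallel \mathit{Cont})$; $\mathit{Cont} = c(p).(p \parallel \overline{b}\langle \mathsf{done}(\_).0\rangle \parallel hd(x).b(\_).\mathit{Choice}(x))$; $\mathit{Choice}(P) = \mathsf{enter}(\_).c(\_).(P \parallel \overline{c}\langle[\![[]]\!]\rangle) + \mathsf{skip}(\_).\overline{init}\langle 0\rangle$; $[\![[]]\!] = b(x).x$; $[\![t::\pi]\!] = \overline{hd}\langle[\![t]\!]\rangle \parallel \overline{c}\langle[\![\pi]\!]\rangle$; $[\![\langle t,\pi,n\rangle_{\mathrm{ev}}]\!]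 = [\![t]\!] \parallel \overline{c}\langle[\![\pi]\!]\rangle \parallel \overline{k}\langle [n]\rangle \parallel \mathit{Rec} \parallel \overline{rec}\langle\mathit{Rec}\rangle$. *)

theory Defs
  imports Main
begin

type_synonym name = string

text \<open>Process variables: PL d are the variables coming from lambda binders (de Bruijn level d),
  PP is the variable p of the translation, PX the variable x used in Restart/Rec/Cont/plus,
  PW the wildcard used for binders whose variable is unused.\<close>
datatype pvar = PL nat | PP | PX | PW

datatype proc =
    Inp name pvar proc
  | Out name proc
  | Par proc proc
  | Var pvar
  | Nil

fun fvp :: "proc \<Rightarrow> pvar set" where
  "fvp (Inp a x P) = fvp P - {x}"
| "fvp (Out a P) = fvp P"
| "fvp (Par P Q) = fvp P \<union> fvp Q"
| "fvp (Var x) = {x}"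
| "fvp Nil = {}"

definition closed :: "proc \<Rightarrow> bool" where
  "closed P \<longleftrightarrow> fvp P = {}"

fun fn :: "proc \<Rightarrow> name set" where
  "fn (Inp a x P) = insert a (fn P)"
| "fn (Out a P) = insert a (fn P)"
| "fn (Par P Q) = fn P \<union> fn Q"
| "fn (Var x) = {}"
| "fn Nil = {}"

text \<open>subst Q x P is Q{P/x}. Substituted processes are always closed in our use,
  so no capture can occur.\<close>
fun subst :: "proc \<Rightarrow> pvar \<Rightarrow> proc \<Rightarrow> proc" where
  "subst (Inp a y Q) x P = Inp a y (if y = x then Q else subst Q x P)"
| "subst (Out a Q) x P = Out a (subst Q x P)"
| "subst (Par Q1 Q2) x P = Par (subst Q1 x P) (subst Q2 x P)"
| "subst (Var y) x P = (if y = x then P else Var y)"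
| "subst Nil x P = Nil"

datatype label = LIn name proc | LOut name proc | Tau

inductive step :: "proc \<Rightarrow> label \<Rightarrow> proc \<Rightarrow> bool" where
  out: "step (Out a P) (LOut a P) Nil"
| inp: "step (Inp a x Q) (LIn a P) (subst Q x P)"
| parL: "step P l P' \<Longrightarrow> step (Par P Q) l (Par P' Q)"
| parR: "step Q l Q' \<Longrightarrow> step (Par P Q) l (Par P Q')"
| comL: "step P (LOut a R) P' \<Longrightarrow> step Q (LIn a R) Q' \<Longrightarrow> step (Par P Q) Tau (Par P' Q')"
| comR: "step P (LIn a R) P' \<Longrightarrow> step Q (LOut a R) Q' \<Longrightarrow> step (Par P Q) Tau (Par P' Q')"

abbreviation tau_steps :: "proc \<Rightarrow> proc \<Rightarrow> bool" where
  "tau_steps \<equiv> (\<lambda>P Q. step P Tau Q)\<^sup>*\<^sup>*"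

datatype barb = BIn name | BOut name

fun has_barb :: "name set \<Rightarrow> proc \<Rightarrow> barb \<Rightarrow> bool" where
  "has_barb H P (BIn a) \<longleftrightarrow> a \<notin> H \<and> (\<exists>Q R. step P (LIn a Q) R)"
| "has_barb H P (BOut a) \<longleftrightarrow> a \<notin> H \<and> (\<exists>Q R. step P (LOut a Q) R)"

definition has_wbarb :: "name set \<Rightarrow> proc \<Rightarrow> barb \<Rightarrow> bool" where
  "has_wbarb H P \<mu> \<longleftrightarrow> (\<exists>P'. tau_steps P P' \<and> has_barb H P' \<mu>)"

definition barbed_bisim :: "name set \<Rightarrow> (proc \<Rightarrow> proc \<Rightarrow> bool) \<Rightarrow> bool" where
  "barbed_bisim H \<R> \<longleftrightarrow> symp \<R> \<and>
     (\<forall>P Q. \<R> P Q \<longrightarrow>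
        (\<forall>\<mu>. has_barb H P \<mu> \<longrightarrow> has_wbarb H Q \<mu>) \<and>
        (\<forall>R. closed R \<and> fn R \<inter> H = {} \<longrightarrow> \<R> (Par P R) (Par Q R)) \<and>
        (\<forall>P'. step P Tau P' \<longrightarrow> (\<exists>Q'. tau_steps Q Q' \<and> \<R> P' Q')))"

definition hbisim :: "name set \<Rightarrow> proc \<Rightarrow> proc \<Rightarrow> bool" where
  "hbisim H P Q \<longleftrightarrow> (\<exists>\<R>. barbed_bisim H \<R> \<and> \<R> P Q)"

section \<open>Lambda terms (locally nameless: free variables are naturals, bound ones de Bruijn)\<close>

datatype lterm = FVar nat | BVar nat | Abs lterm | App lterm lterm

fun lc_at :: "nat \<Rightarrow> lterm \<Rightarrow> bool" where
  "lc_at d (FVar f) = True"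
| "lc_at d (BVar i) = (i < d)"
| "lc_at d (Abs t) = lc_at (Suc d) t"
| "lc_at d (App t s) = (lc_at d t \<and> lc_at d s)"

definition well_formed :: "lterm \<Rightarrow> bool" where
  "well_formed t \<longleftrightarrow> lc_at 0 t"

fun fv :: "lterm \<Rightarrow> nat set" where
  "fv (FVar f) = {f}"
| "fv (BVar i) = {}"
| "fv (Abs t) = fv t"
| "fv (App t s) = fv t \<union> fv s"

fun open_at :: "nat \<Rightarrow> lterm \<Rightarrow> lterm \<Rightarrow> lterm" where
  "open_at k u (FVar f) = FVar f"
| "open_at k u (BVar i) = (if i = k then u else BVar i)"
| "open_at k u (Abs t) = Abs (open_at (Suc k) u t)"
| "open_at k u (App t s) = App (open_at k u t) (open_at k u s)"

text \<open>For Abs t, the term t{s/x} is open_at 0 s t.\<close>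

inductive kam :: "lterm \<times> lterm list \<Rightarrow> lterm \<times> lterm list \<Rightarrow> bool" where
  push: "kam (App t s, \<pi>) (t, s # \<pi>)"
| grab: "kam (Abs t, s # \<pi>) (open_at 0 s t, \<pi>)"

definition nf_bisim :: "(lterm \<Rightarrow> lterm \<Rightarrow> bool) \<Rightarrow> bool" where
  "nf_bisim \<R> \<longleftrightarrow> symp \<R> \<and>
     (\<forall>t s. \<R> t s \<longrightarrow>
        (\<forall>t'. kam\<^sup>*\<^sup>* (t, []) (Abs t', []) \<longrightarrow>
           (\<exists>s'. kam\<^sup>*\<^sup>* (s, []) (Abs s', []) \<and>
              (\<exists>f. f \<notin> fv t' \<union> fv s' \<and> \<R> (open_at 0 (FVar f) t') (open_at 0 (FVar f) s')))) \<and>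
        (\<forall>f \<pi>. kam\<^sup>*\<^sup>* (t, []) (FVar f, \<pi>) \<longrightarrow>
           (\<exists>\<pi>'. kam\<^sup>*\<^sup>* (s, []) (FVar f, \<pi>') \<and> list_all2 \<R> \<pi> \<pi>')))"

definition nf_equiv :: "lterm \<Rightarrow> lterm \<Rightarrow> bool" where
  "nf_equiv t s \<longleftrightarrow> (\<exists>\<R>. nf_bisim \<R> \<and> \<R> t s)"

definition H :: "name set" where
  "H = {''c'', ''hd'', ''b'', ''k'', ''init'', ''rec'', ''ch''}"

definition plus :: "proc \<Rightarrow> proc \<Rightarrow> proc" where
  "plus P Q = Par (Out ''ch'' P) (Par (Out ''ch'' Q) (Inp ''ch'' PX (Inp ''ch'' PW (Var PX))))"

fun num :: "nat \<Rightarrow> proc" where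
  "num 0 = Inp ''z'' PW (Out ''init'' Nil)"
| "num (Suc n) = Inp ''suc'' PW (num n)"

definition tr_empty :: proc where
  "tr_empty = Inp ''b'' PX (Var PX)"

definition restart :: proc where
  "restart = Inp ''lambda'' PW (Inp ''k'' PX
     (Par (Out ''hd'' (Var PX)) (Par (Out ''k'' (Inp ''suc'' PW (Var PX)))
        (Par (Out ''c'' tr_empty) (Out ''b'' Nil)))))"

text \<open>tr d t: translation of a term under d enclosing lambda binders;
  the bound variable BVar i is the process variable PL (d - 1 - i).\<close>
fun tr :: "nat \<Rightarrow> lterm \<Rightarrow> proc" where
  "tr d (App t s) = Inp ''c'' PP (Par (tr d t) (Out ''c'' (Par (Out ''hd'' (tr d s)) (Out ''c'' (Var PP)))))"
| "tr d (Abs t) = Inp ''c'' PP (Par (Var PP) (Par (Out ''b'' restart)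
      (Inp ''hd'' (PL d) (Inp ''b'' PW (tr (Suc d) t)))))"
| "tr d (BVar i) = Var (PL (d - Suc i))"
| "tr d (FVar f) = num f"

fun tr_stack :: "lterm list \<Rightarrow> proc" where
  "tr_stack [] = tr_empty"
| "tr_stack (t # \<pi>) = Par (Out ''hd'' (tr 0 t)) (Out ''c'' (tr_stack \<pi>))"

definition choice :: "proc \<Rightarrow> proc" where
  "choice P = plus (Inp ''enter'' PW (Inp ''c'' PW (Par P (Out ''c'' tr_empty))))
                   (Inp ''skip'' PW (Out ''init'' Nil))"

definition cont :: proc where
  "cont = Inp ''c'' PP (Par (Var PP) (Par (Out ''b'' (Inp ''done'' PW Nil))
      (Inp ''hd'' PX (Inp ''b'' PW (choice (Var PX))))))"

definition rec_proc :: proc where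
  "rec_proc = Inp ''init'' PW (Inp ''rec'' PX (Par (Var PX) (Par (Out ''rec'' (Var PX)) cont)))"

definition tr_ev :: "lterm \<Rightarrow> lterm list \<Rightarrow> nat \<Rightarrow> proc" where
  "tr_ev t \<pi> n = Par (tr 0 t) (Par (Out ''c'' (tr_stack \<pi>))
      (Par (Out ''k'' (num n)) (Par rec_proc (Out ''rec'' rec_proc))))"

end

theory Submission
  imports Defs "HOL-Library.Multiset"
begin

(*
  Processes are compared through the multisets of their parallel threads, on which a tau-step
  is a single communication; the translation of a configuration then evolves through a few
  explicit thread multisets whose reductions are computed symbolically.

  Soundness: pairing the states of the translations of normal-form bisimilar terms (during
  evaluation, while a head variable is counted down, and while the stacks are traversed) gives
  a bisimulation up to parallel contexts on thread multisets.  The only barbs are the input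
  flags lambda, z, suc, enter, skip and done, all of which discard their argument, so a context
  can do no more than trigger the next phase.

  Completeness: conversely, relating two terms whenever some states of their translations are
  barbed bisimilar gives a normal-form bisimulation.  Evaluation is deterministic up to the
  internal choice of continuation mode, so a bisimilar partner must expose the same flags in
  the same order: a lambda-flag forces a head abstraction on the other side, both bodies being
  opened with the counter n, which exceeds all free variables and so is fresh; a sequence of
  suc-flags ending in z forces the same head variable; and the enter and skip flags of the
  stack traversal relate the stacks componentwise.
*)

section \<open>Processes as multisets of threads\<close>

fun threads :: "proc \<Rightarrow> proc multiset" where
  "threads (Par P Q) = threads P + threads Q"
| "threads Nil = {#}"
| "threads (Inp a x P) = {#Inp a x P#}"
| "threads (Out a P) = {#Out a P#}"
| "threads (Var x) = {#Var x#}"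

lemma subst_fresh[simp]: "x \<notin> fvp Q \<Longrightarrow> subst Q x P = Q"
  by (induction Q x P rule: subst.induct) auto

lemma fvp_subst: "fvp P = {} \<Longrightarrow> fvp (subst Q x P) = fvp Q - {x}"
  by (induction Q x P rule: subst.induct) auto

lemma fn_subst: "fn (subst Q x P) \<subseteq> fn Q \<union> fn P"
  by (induction Q x P rule: subst.induct) auto

lemma threads_fvp: "T \<in># threads P \<Longrightarrow> fvp T \<subseteq> fvp P"
  by (induction P) auto

lemma threads_fn: "T \<in># threads P \<Longrightarrow> fn T \<subseteq> fn P"
  by (induction P) auto

lemma step_out_threads:
  "step P (LOut a R) P' \<Longrightarrow> \<exists>M. threads P = add_mset (Out a R) M \<and> threads P' = M"
proof (induction P "LOut a R" P' rule: step.induct)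
  case (parL P P' Q) then show ?case by auto
next
  case (parR Q Q' P) then show ?case by auto
qed auto

lemma step_inp_threads:
  "step P (LIn a R) P' \<Longrightarrow>
   \<exists>x Q M. threads P = add_mset (Inp a x Q) M \<and> threads P' = M + threads (subst Q x R)"
proof (induction P "LIn a R" P' rule: step.induct)
  case (inp x Q) then show ?case by auto
next
  case (parL P P' Q)
  then obtain x Q1 M where "threads P = add_mset (Inp a x Q1) M"
    "threads P' = M + threads (subst Q1 x R)"
    by auto
  then show ?case by (intro exI[of _ x] exI[of _ Q1] exI[of _ "M + threads Q"]) (simp add: add_ac)
next
  case (parR Q Q' P)
  then obtain x Q1 M where "threads Q = add_mset (Inp a x Q1) M"
    "threads Q' = M + threads (subst Q1 x R)"
    by auto
  then show ?case by (intro exI[of _ x] exI[of _ Q1] exI[of _ "M + threads P"]) (simp add: add_ac)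
qed

lemma step_tau_threads:
  "step P Tau P' \<Longrightarrow>
   \<exists>a R x Q M. threads P = add_mset (Out a R) (add_mset (Inp a x Q) M) \<and>
     threads P' = M + threads (subst Q x R)"
proof (induction P "Tau" P' rule: step.induct)
  case (parL P P' Q)
  then obtain a R x Q1 M where "threads P = add_mset (Out a R) (add_mset (Inp a x Q1) M)"
      "threads P' = M + threads (subst Q1 x R)" by blast
  then show ?case
    by (intro exI[of _ a] exI[of _ R] exI[of _ x] exI[of _ Q1] exI[of _ "M + threads Q"])
      (simp add: add_ac)
next
  case (parR Q Q' P)
  then obtain a R x Q1 M where "threads Q = add_mset (Out a R) (add_mset (Inp a x Q1) M)"
      "threads Q' = M + threads (subst Q1 x R)" by blast
  then show ?case
    by (intro exI[of _ a] exI[of _ R] exI[of _ x] exI[of _ Q1] exI[of _ "M + threads P"])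
      (simp add: add_ac)
next
  case (comL P a R P' Q Q')
  obtain M1 where 1: "threads P = add_mset (Out a R) M1" "threads P' = M1"
    using step_out_threads[OF comL(1)] by blast
  obtain x Q1 M2 where 2: "threads Q = add_mset (Inp a x Q1) M2"
    "threads Q' = M2 + threads (subst Q1 x R)"
    using step_inp_threads[OF comL(2)] by blast
  show ?case using 1 2
    by (intro exI[of _ a] exI[of _ R] exI[of _ x] exI[of _ Q1] exI[of _ "M1 + M2"])
      (simp add: add_ac)
next
  case (comR P a R P' Q Q')
  obtain M1 where 1: "threads Q = add_mset (Out a R) M1" "threads Q' = M1"
    using step_out_threads[OF comR(2)] by blast
  obtain x Q1 M2 where 2: "threads P = add_mset (Inp a x Q1) M2"
    "threads P' = M2 + threads (subst Q1 x R)"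
    using step_inp_threads[OF comR(1)] by blast
  show ?case using 1 2
    by (intro exI[of _ a] exI[of _ R] exI[of _ x] exI[of _ Q1] exI[of _ "M1 + M2"])
      (simp add: add_ac)
qed

lemma threads_out_step:
  "Out a R \<in># threads P \<Longrightarrow> \<exists>P'. step P (LOut a R) P' \<and> threads P' = threads P - {#Out a R#}"
proof (induction P)
  case (Par P1 P2)
  show ?case
  proof (cases "Out a R \<in># threads P1")
    case True
    then obtain P' where "step P1 (LOut a R) P'" "threads P' = threads P1 - {#Out a R#}"
      using Par by auto
    then show ?thesis using True by (intro exI[of _ "Par P' P2"]) (auto intro: step.parL)
  next
    case False
    then have "Out a R \<in># threads P2" using Par by auto
    then obtain P' where "step P2 (LOut a R) P'" "threads P' = threads P2 - {#Out a R#}"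
      using Par by auto
    then show ?thesis using False \<open>Out a R \<in># threads P2\<close>
      by (intro exI[of _ "Par P1 P'"]) (auto intro: step.parR)
  qed
qed (auto intro: step.out)

lemma threads_inp_step:
  "Inp a x Q \<in># threads P \<Longrightarrow>
   \<exists>P'. step P (LIn a R) P' \<and> threads P' = threads P - {#Inp a x Q#} + threads (subst Q x R)"
proof (induction P)
  case (Par P1 P2)
  show ?case
  proof (cases "Inp a x Q \<in># threads P1")
    case True
    then obtain P' where "step P1 (LIn a R) P'"
        "threads P' = threads P1 - {#Inp a x Q#} + threads (subst Q x R)"
      using Par by auto
    then show ?thesis using True
      by (intro exI[of _ "Par P' P2"]) (auto intro: step.parL simp: add_ac)
  next
    case False
    then have "Inp a x Q \<in># threads P2" using Par by auto
    then obtain P' where "step P2 (LIn a R) P'"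
        "threads P' = threads P2 - {#Inp a x Q#} + threads (subst Q x R)"
      using Par by auto
    then show ?thesis using False \<open>Inp a x Q \<in># threads P2\<close>
      by (intro exI[of _ "Par P1 P'"]) (auto intro: step.parR simp: add_ac)
  qed
qed (auto intro: step.inp)

lemma diff_two_plus: "A \<in># M \<Longrightarrow> B \<in># M - {#A#} \<Longrightarrow> M + N - {#A, B#} = (M - {#A, B#}) + N"
proof -
  assume "A \<in># M" "B \<in># M - {#A#}"
  then obtain M' where "M = add_mset A (add_mset B M')" by (metis insert_DiffM)
  then show ?thesis by simp
qed

lemma plus_diff_two: "A \<in># M \<Longrightarrow> B \<in># N \<Longrightarrow> M + N - {#A, B#} = (M - {#A#}) + (N - {#B#})"
proof -
  assume "A \<in># M" "B \<in># N"
  then obtain M' N' where "M = add_mset A M'" "N = add_mset B N'" by (metis insert_DiffM)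
  then show ?thesis by simp
qed

lemma threads_comm_step:
  assumes "Out a R \<in># threads P1" and "Inp a x Q \<in># threads P2"
  shows "\<exists>P'. step (Par P1 P2) Tau P' \<and>
           threads P' = threads (Par P1 P2) - {#Out a R, Inp a x Q#} + threads (subst Q x R)"
    and "\<exists>P'. step (Par P2 P1) Tau P' \<and>
           threads P' = threads (Par P2 P1) - {#Out a R, Inp a x Q#} + threads (subst Q x R)"
proof -
  obtain P1' where 1: "step P1 (LOut a R) P1'" "threads P1' = threads P1 - {#Out a R#}"
    using threads_out_step[OF assms(1)] by blast
  obtain P2' where 2: "step P2 (LIn a R) P2'"
    "threads P2' = threads P2 - {#Inp a x Q#} + threads (subst Q x R)"
    using threads_inp_step[OF assms(2)] by blast
  have "threads P1' + threads P2' =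
    threads P1 + threads P2 - {#Out a R, Inp a x Q#} + threads (subst Q x R)"
    using 1(2) 2(2) plus_diff_two[OF assms] by (simp add: add_ac)
  then show "\<exists>P'. step (Par P1 P2) Tau P' \<and>
      threads P' = threads (Par P1 P2) - {#Out a R, Inp a x Q#} + threads (subst Q x R)"
    and "\<exists>P'. step (Par P2 P1) Tau P' \<and>
      threads P' = threads (Par P2 P1) - {#Out a R, Inp a x Q#} + threads (subst Q x R)"
    using 1(1) 2(1) by (auto intro!: exI step.comL step.comR simp: add_ac)
qed

lemma threads_tau_step:
  "Out a R \<in># threads P \<Longrightarrow> Inp a x Q \<in># threads P - {#Out a R#} \<Longrightarrow>
   \<exists>P'. step P Tau P' \<and> threads P' = threads P - {#Out a R, Inp a x Q#} + threads (subst Q x R)"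
proof (induction P)
  case (Par P1 P2)
  let ?O = "Out a R" and ?I = "Inp a x Q"
  consider (left) "?O \<in># threads P1" "?I \<in># threads P1 - {#?O#}"
    | (right) "?O \<in># threads P2" "?I \<in># threads P2 - {#?O#}"
    | (out_in) "?O \<in># threads P1" "?I \<in># threads P2"
    | (in_out) "?I \<in># threads P1" "?O \<in># threads P2"
  proof (cases "?O \<in># threads P1")
    case True
    then obtain P1' where eq: "threads P1 = add_mset ?O P1'" by (metis insert_DiffM)
    then have "?I \<in># threads P1 - {#?O#} \<or> ?I \<in># threads P2" using Par.prems by simp
    then show thesis using True that(1,3) by blast
  next
    case False
    then have O2: "?O \<in># threads P2" using Par.prems by simp
    then have "threads P1 + threads P2 - {#?O#} = threads P1 + (threads P2 - {#?O#})"
      by (rule diff_union_single_conv)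
    then have "?I \<in># threads P1 \<or> ?I \<in># threads P2 - {#?O#}" using Par.prems(2) by simp
    then show thesis using O2 that(2,4) by blast
  qed
  then show ?case
  proof cases
    case left
    then obtain P' where "step P1 Tau P'"
      "threads P' = threads P1 - {#?O, ?I#} + threads (subst Q x R)"
      using Par.IH(1) by blast
    then show ?thesis using diff_two_plus[OF left, of "threads P2"]
      by (intro exI[of _ "Par P' P2"]) (auto intro: step.parL simp: add_ac)
  next
    case right
    then obtain P' where "step P2 Tau P'"
      "threads P' = threads P2 - {#?O, ?I#} + threads (subst Q x R)"
      using Par.IH(2) by blast
    then show ?thesis using diff_two_plus[OF right, of "threads P1"]
      by (intro exI[of _ "Par P1 P'"]) (auto intro: step.parR simp: add_ac)
  next
    case out_in
    then show ?thesis by (rule threads_comm_step(1))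
  next
    case in_out
    from threads_comm_step(2)[OF in_out(2,1)] show ?thesis .
  qed
qed auto

definition mtau :: "proc multiset \<Rightarrow> proc multiset \<Rightarrow> bool" where
  "mtau M M' \<longleftrightarrow> (\<exists>a R x Q N. M = add_mset (Out a R) (add_mset (Inp a x Q) N) \<and>
     M' = N + threads (subst Q x R))"

lemma mtauI:
  "M = add_mset (Out a R) (add_mset (Inp a x Q) N) \<Longrightarrow> M' = N + threads (subst Q x R) \<Longrightarrow> mtau M M'"
  unfolding mtau_def by blast

fun mbarb :: "name set \<Rightarrow> proc multiset \<Rightarrow> barb \<Rightarrow> bool" where
  "mbarb Hs M (BIn a) \<longleftrightarrow> a \<notin> Hs \<and> (\<exists>x Q. Inp a x Q \<in># M)"
| "mbarb Hs M (BOut a) \<longleftrightarrow> a \<notin> Hs \<and> (\<exists>R. Out a R \<in># M)"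

lemma step_tau_mtau: "step P Tau P' \<Longrightarrow> mtau (threads P) (threads P')"
  using step_tau_threads unfolding mtau_def by blast

lemma mtau_step: "mtau (threads P) M' \<Longrightarrow> \<exists>P'. step P Tau P' \<and> threads P' = M'"
proof -
  assume "mtau (threads P) M'"
  then obtain a R x Q N where e: "threads P = add_mset (Out a R) (add_mset (Inp a x Q) N)"
      "M' = N + threads (subst Q x R)"
    unfolding mtau_def by blast
  then have "Out a R \<in># threads P" "Inp a x Q \<in># threads P - {#Out a R#}" by auto
  from threads_tau_step[OF this] obtain P' where
    "step P Tau P'" "threads P' = threads P - {#Out a R, Inp a x Q#} + threads (subst Q x R)"
    by blast
  then show ?thesis using e by (intro exI[of _ P']) (simp add: add_mset_commute)
qed

lemma mtaus_steps: "mtau\<^sup>*\<^sup>* M M' \<Longrightarrow> threads P = M \<Longrightarrow> \<exists>P'. tau_steps P P' \<and> threads P' = M'"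
proof (induction rule: rtranclp_induct)
  case (step M1 M2)
  then obtain P1 where P1: "tau_steps P P1" "threads P1 = M1" by blast
  moreover obtain P2 where "step P1 Tau P2" "threads P2 = M2"
    using mtau_step step(2) P1(2) by blast
  ultimately show ?case using rtranclp.rtrancl_into_rtrancl[of _ P P1 P2] by blast
qed auto

lemma steps_mtaus: "tau_steps P P' \<Longrightarrow> mtau\<^sup>*\<^sup>* (threads P) (threads P')"
  by (induction rule: rtranclp_induct) (auto intro: rtranclp.rtrancl_into_rtrancl step_tau_mtau)

lemma has_barb_mbarb: "has_barb Hs P \<mu> \<longleftrightarrow> mbarb Hs (threads P) \<mu>"
proof (cases \<mu>)
  case (BIn a)
  show ?thesis
  proof
    assume "has_barb Hs P \<mu>"
    then show "mbarb Hs (threads P) \<mu>" using BIn step_inp_threads by fastforce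
  next
    assume "mbarb Hs (threads P) \<mu>"
    then show "has_barb Hs P \<mu>" using BIn threads_inp_step by fastforce
  qed
next
  case (BOut a)
  show ?thesis
  proof
    assume "has_barb Hs P \<mu>"
    then show "mbarb Hs (threads P) \<mu>" using BOut step_out_threads by fastforce
  next
    assume "mbarb Hs (threads P) \<mu>"
    then show "has_barb Hs P \<mu>" using BOut threads_out_step by fastforce
  qed
qed

lemma mtau_plus_left: "mtau A A1 \<Longrightarrow> mtau (C + A) (C + A1)"
  unfolding mtau_def by (metis union_assoc union_mset_add_mset_right)

lemma mtaus_plus_left: "mtau\<^sup>*\<^sup>* A A1 \<Longrightarrow> mtau\<^sup>*\<^sup>* (C + A) (C + A1)"
  by (induction rule: rtranclp_induct) (auto intro: rtranclp.rtrancl_into_rtrancl mtau_plus_left)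

lemma add_mset_eq_plus:
  "add_mset x N = C + A \<Longrightarrow> (x \<in># C \<and> N = (C - {#x#}) + A) \<or> (x \<in># A \<and> N = C + (A - {#x#}))"
proof -
  assume e: "add_mset x N = C + A"
  then have "x \<in># C \<or> x \<in># A" by (metis union_iff union_single_eq_member)
  then show ?thesis
  proof
    assume "x \<in># C"
    then obtain C' where "C = add_mset x C'" by (metis insert_DiffM)
    then show ?thesis using e by auto
  next
    assume "x \<in># A"
    then obtain A' where "A = add_mset x A'" by (metis insert_DiffM)
    then show ?thesis using e by auto
  qed
qed

lemma mset_two_elems: "A \<in># M \<Longrightarrow> B \<in># M - {#A#} \<Longrightarrow> M = add_mset A (add_mset B (M - {#A#} - {#B#}))"
  by (metis insert_DiffM)

lemma mtau_split: "mtau (C + A) M' \<Longrightarrow>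
   (\<exists>C'. mtau C C' \<and> M' = C' + A) \<or> (\<exists>A1. mtau A A1 \<and> M' = C + A1) \<or>
   (\<exists>a R x Q C1 A1. C = add_mset (Out a R) C1 \<and> A = add_mset (Inp a x Q) A1 \<and>
     M' = C1 + A1 + threads (subst Q x R)) \<or>
   (\<exists>a R x Q C1 A1. C = add_mset (Inp a x Q) C1 \<and> A = add_mset (Out a R) A1 \<and>
     M' = C1 + A1 + threads (subst Q x R))"
proof -
  assume "mtau (C + A) M'"
  then obtain a R x Q N where e: "C + A = add_mset (Out a R)
    (add_mset (Inp a x Q) N)" and m: "M' = N + threads (subst Q x R)"
    unfolding mtau_def by blast
  from add_mset_eq_plus[OF e[symmetric]]
  show ?thesis
  proof (elim disjE conjE)
    assume o: "Out a R \<in># C" and n1: "add_mset (Inp a x Q) N = C - {#Out a R#} + A"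
    from add_mset_eq_plus[OF n1] show ?thesis
    proof (elim disjE conjE)
      assume i: "Inp a x Q \<in># C - {#Out a R#}" and n2: "N = C - {#Out a R#} - {#Inp a x Q#} + A"
      have "mtau C (C - {#Out a R#} - {#Inp a x Q#} + threads (subst Q x R))"
        by (rule mtauI[of _ a R x Q]) (use mset_two_elems[OF o i] in \<open>auto simp: insert_DiffM\<close>)
      then show ?thesis using m n2 by (auto simp: add_ac)
    next
      assume i: "Inp a x Q \<in># A" and n2: "N = C - {#Out a R#} + (A - {#Inp a x Q#})"
      show ?thesis using o i m n2
        by (intro disjI2 disjI1 exI[of _ a] exI[of _ R] exI[of _ x] exI[of _ Q] exI[of _ "C - {#Out
          a R#}"] exI[of _ "A - {#Inp a x Q#}"])
          (auto simp: insert_DiffM)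
    qed
  next
    assume o: "Out a R \<in># A" and n1: "add_mset (Inp a x Q) N = C + (A - {#Out a R#})"
    from add_mset_eq_plus[OF n1] show ?thesis
    proof (elim disjE conjE)
      assume i: "Inp a x Q \<in># C" and n2: "N = C - {#Inp a x Q#} + (A - {#Out a R#})"
      show ?thesis using o i m n2
        by (intro disjI2 disjI2 disjI2 exI[of _ a] exI[of _ R] exI[of _ x] exI[of _ Q] exI[of _ "C -
          {#Inp a x Q#}"] exI[of _ "A - {#Out a R#}"])
          (auto simp: insert_DiffM)
    next
      assume i: "Inp a x Q \<in># A - {#Out a R#}" and n2: "N = C + (A - {#Out a R#} - {#Inp a x Q#})"
      have "mtau A (A - {#Out a R#} - {#Inp a x Q#} + threads (subst Q x R))"
        by (rule mtauI[of _ a R x Q]) (use mset_two_elems[OF o i] in \<open>auto simp: insert_DiffM\<close>)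
      then show ?thesis using m n2 by (auto simp: add_ac)
    qed
  qed
qed

section \<open>Bisimulations on thread multisets up to parallel contexts\<close>

definition ctx_threads :: "name set \<Rightarrow> proc multiset \<Rightarrow> bool" where
  "ctx_threads Hs C \<longleftrightarrow> (\<forall>T \<in># C. fvp T = {} \<and> fn T \<inter> Hs = {})"

lemma ctx_threads_of_closed: "fvp R = {} \<Longrightarrow> fn R \<inter> Hs = {} \<Longrightarrow> ctx_threads Hs (threads R)"
  unfolding ctx_threads_def using threads_fvp threads_fn by blast

lemma ctx_threads_plus[simp]: "ctx_threads Hs (A + B) \<longleftrightarrow> ctx_threads Hs A \<and> ctx_threads Hs B"
  unfolding ctx_threads_def by auto

lemma ctx_threads_add_mset[simp]:
  "ctx_threads Hs (add_mset T B) \<longleftrightarrow> fvp T = {} \<and> fn T \<inter> Hs = {} \<and> ctx_threads Hs B"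
  unfolding ctx_threads_def by auto

lemma ctx_threads_mtau: "ctx_threads Hs C \<Longrightarrow> mtau C C' \<Longrightarrow> ctx_threads Hs C'"
proof -
  assume "ctx_threads Hs C" "mtau C C'"
  then obtain a R x Q N where "C = add_mset (Out a R) (add_mset (Inp a x Q) N)"
      "C' = N + threads (subst Q x R)" and cl: "fvp R = {}" "fvp Q \<subseteq> {x}" "fn R \<inter> Hs = {}"
        "fn Q \<inter> Hs = {}"
      "ctx_threads Hs N"
    unfolding mtau_def by auto
  moreover have "ctx_threads Hs (threads (subst Q x R))"
    using cl fvp_subst[of R Q x] fn_subst[of Q x R] by (intro ctx_threads_of_closed) blast+
  ultimately show ?thesis by simp
qed

text \<open>Clause three quantifies over the inputs a context may trigger, clause four forbids
  outputs that a context could consume; together they make the closure of the relation under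
  parallel composition with contexts a barbed bisimulation.\<close>

definition ctx_bisim :: "name set \<Rightarrow> (proc multiset \<Rightarrow> proc multiset \<Rightarrow> bool) \<Rightarrow> bool" where
  "ctx_bisim Hs Rel \<longleftrightarrow> symp Rel \<and> (\<forall>A A'. Rel A A' \<longrightarrow>
     (\<forall>\<mu>. mbarb Hs A \<mu> \<longrightarrow> (\<exists>A''. mtau\<^sup>*\<^sup>* A' A'' \<and> mbarb Hs A'' \<mu>)) \<and>
     (\<forall>A1. mtau A A1 \<longrightarrow> (\<exists>A1'. mtau\<^sup>*\<^sup>* A' A1' \<and> Rel A1 A1')) \<and>
     (\<forall>a x Q N R. A = add_mset (Inp a x Q) N \<longrightarrow> a \<notin> Hs \<longrightarrow> fvp R = {} \<longrightarrow> fn R \<inter> Hs = {} \<longrightarrow>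
        (\<exists>x' Q' N'. mtau\<^sup>*\<^sup>* A' (add_mset (Inp a x' Q') N') \<and>
           Rel (N + threads (subst Q x R)) (N' + threads (subst Q' x' R)))) \<and>
     (\<forall>a R. Out a R \<in># A \<longrightarrow> a \<in> Hs))"

definition ctx_closure ::
  "name set \<Rightarrow> (proc multiset \<Rightarrow> proc multiset \<Rightarrow> bool) \<Rightarrow> proc \<Rightarrow> proc \<Rightarrow> bool" where
  "ctx_closure Hs Rel P Q \<longleftrightarrow>
     (\<exists>C A A'. threads P = C + A \<and> threads Q = C + A' \<and> ctx_threads Hs C \<and> Rel A A')"

lemma ctx_closure_mtaus:
  "ctx_closure Hs Rel P Q \<Longrightarrow> threads P = C + A \<Longrightarrow> threads Q = C + A' \<Longrightarrow> mtau\<^sup>*\<^sup>* A' A1' \<Longrightarrow>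
   \<exists>Q'. tau_steps Q Q' \<and> threads Q' = C + A1'"
  using mtaus_steps[OF mtaus_plus_left] by blast

lemma ctx_closure_barb:
  assumes g: "ctx_bisim Hs Rel" and c: "ctx_closure Hs Rel P Q" and b: "has_barb Hs P \<mu>"
  shows "has_wbarb Hs Q \<mu>"
proof -
  obtain C A A' where e: "threads P = C + A" "threads Q = C + A'" "ctx_threads Hs C" "Rel A A'"
    using c unfolding ctx_closure_def by blast
  have mb: "mbarb Hs (C + A) \<mu>" using b e by (simp add: has_barb_mbarb)
  show ?thesis
  proof (cases "mbarb Hs C \<mu>")
    case True
    then have "mbarb Hs (threads Q) \<mu>" using e by (cases \<mu>) auto
    then show ?thesis unfolding has_wbarb_def by (auto simp: has_barb_mbarb)
  next
    case False
    then have "mbarb Hs A \<mu>" using mb by (cases \<mu>) auto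
    then obtain A'' where "mtau\<^sup>*\<^sup>* A' A''" "mbarb Hs A'' \<mu>" using g e(4) unfolding ctx_bisim_def
      by blast
    moreover obtain Q'' where "tau_steps Q Q''" "threads Q'' = C + A''"
      using ctx_closure_mtaus[OF c e(1,2) calculation(1)] by blast
    moreover have "mbarb Hs (C + A'') \<mu>" using \<open>mbarb Hs A'' \<mu>\<close> by (cases \<mu>) auto
    ultimately show ?thesis unfolding has_wbarb_def by (auto simp: has_barb_mbarb)
  qed
qed

lemma ctx_closure_par:
  assumes "ctx_closure Hs Rel P Q" and "closed R" and "fn R \<inter> Hs = {}"
  shows "ctx_closure Hs Rel (Par P R) (Par Q R)"
proof -
  obtain C A A' where e: "threads P = C + A" "threads Q = C + A'" "ctx_threads Hs C" "Rel A A'"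
    using assms(1) unfolding ctx_closure_def by blast
  have "ctx_threads Hs (threads R)" using assms(2,3) ctx_threads_of_closed unfolding closed_def
    by blast
  then show ?thesis unfolding ctx_closure_def using e
    by (intro exI[of _ "C + threads R"] exI[of _ A] exI[of _ A']) (auto simp: add_ac)
qed

text \<open>The one synchronisation not covered by the relation itself: a context output feeding
  an input of the related part.\<close>

lemma ctx_closure_ctx_input:
  assumes g: "ctx_bisim Hs Rel" and r: "Rel (add_mset (Inp a x Q0) A1) A'"
    and q: "threads Q = add_mset (Out a R) C1 + A'" and c: "ctx_threads Hs (add_mset (Out a R) C1)"
  shows "\<exists>Q' A1'. tau_steps Q Q' \<and> threads Q' = C1 + A1' \<and> Rel (A1 + threads (subst Q0 x R)) A1'"
proof -
  have "a \<notin> Hs" "fvp R = {}" "fn R \<inter> Hs = {}" using c by auto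
  then obtain x' Q' N' where m: "mtau\<^sup>*\<^sup>* A' (add_mset (Inp a x' Q') N')"
      "Rel (A1 + threads (subst Q0 x R)) (N' + threads (subst Q' x' R))"
    using g r unfolding ctx_bisim_def by blast
  obtain Q1 where q1: "tau_steps Q Q1"
    "threads Q1 = add_mset (Out a R) C1 + add_mset (Inp a x' Q') N'"
    using mtaus_steps[OF mtaus_plus_left[OF m(1)]] q by blast
  have "mtau (threads Q1) (C1 + (N' + threads (subst Q' x' R)))"
    by (rule mtauI[of _ a R x' Q' "C1 + N'"]) (auto simp: q1 add_ac)
  then obtain Q2 where "step Q1 Tau Q2" "threads Q2 = C1 + (N' + threads (subst Q' x' R))"
    using mtau_step by blast
  then show ?thesis using q1 m(2)
    by (intro exI[of _ Q2] exI[of _ "N' + threads (subst Q' x' R)"])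
      (auto intro: rtranclp.rtrancl_into_rtrancl)
qed

lemma ctx_closure_tau:
  assumes g: "ctx_bisim Hs Rel" and c: "ctx_closure Hs Rel P Q" and st: "step P Tau P'"
  shows "\<exists>Q'. tau_steps Q Q' \<and> ctx_closure Hs Rel P' Q'"
proof -
  obtain C A A' where e: "threads P = C + A" "threads Q = C + A'" "ctx_threads Hs C" "Rel A A'"
    using c unfolding ctx_closure_def by blast
  have "mtau (C + A) (threads P')" using step_tau_mtau[OF st] e by simp
  from mtau_split[OF this] show ?thesis
  proof (elim disjE exE conjE)
    fix C' assume "mtau C C'" "threads P' = C' + A"
    moreover obtain Q' where "step Q Tau Q'" "threads Q' = C' + A'"
      using mtau_step[of Q "C' + A'"] e mtau_plus_left[of C C' A'] \<open>mtau C C'\<close>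
        by (auto simp: add_ac)
    ultimately show ?thesis unfolding ctx_closure_def using e ctx_threads_mtau[OF e(3)]
      by (intro exI[of _ Q']) auto
  next
    fix A1 assume "mtau A A1" "threads P' = C + A1"
    then obtain A1' where "mtau\<^sup>*\<^sup>* A' A1'" "Rel A1 A1'" using g e(4) unfolding ctx_bisim_def
      by blast
    moreover obtain Q' where "tau_steps Q Q'" "threads Q' = C + A1'"
      using ctx_closure_mtaus[OF c e(1,2) calculation(1)] by blast
    ultimately show ?thesis unfolding ctx_closure_def using e \<open>threads P' = C + A1\<close> by blast
  next
    fix a R x Q0 C1 A1
    assume "C = add_mset (Out a R) C1" "A = add_mset (Inp a x Q0) A1"
      "threads P' = C1 + A1 + threads (subst Q0 x R)"
    then show ?thesis using ctx_closure_ctx_input[OF g, of a x Q0 A1 A' Q R C1] e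
      unfolding ctx_closure_def by (auto simp: add_ac)
  next
    fix a R x Q0 C1 A1
    assume "C = add_mset (Inp a x Q0) C1" "A = add_mset (Out a R) A1"
    then have "Out a R \<in># A" "a \<notin> Hs" using e(3) by auto
    moreover have "a \<in> Hs" using g e(4) calculation(1) unfolding ctx_bisim_def by blast
    ultimately show ?thesis by blast
  qed
qed

lemma ctx_bisim_hbisim:
  assumes "ctx_bisim Hs Rel" and "Rel (threads P) (threads Q)"
  shows "hbisim Hs P Q"
proof -
  have "symp (ctx_closure Hs Rel)"
    using assms(1) unfolding ctx_bisim_def ctx_closure_def symp_def by metis
  then have "barbed_bisim Hs (ctx_closure Hs Rel)"
    unfolding barbed_bisim_def
    using ctx_closure_barb[OF assms(1)] ctx_closure_par ctx_closure_tau[OF assms(1)] by blast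
  moreover have "ctx_closure Hs Rel P Q"
    unfolding ctx_closure_def using assms(2)
    by (intro exI[of _ "{#}"] exI[of _ "threads P"] exI[of _ "threads Q"])
      (auto simp: ctx_threads_def)
  ultimately show ?thesis unfolding hbisim_def by blast
qed

lemma hbisim_sym: "hbisim Hs P Q \<Longrightarrow> hbisim Hs Q P"
proof -
  assume "hbisim Hs P Q"
  then obtain R where "barbed_bisim Hs R" "R P Q" unfolding hbisim_def by blast
  moreover then have "symp R" unfolding barbed_bisim_def by blast
  ultimately show ?thesis unfolding hbisim_def by (meson sympD)
qed

lemma hbisim_tau: "hbisim Hs P Q \<Longrightarrow> step P Tau P' \<Longrightarrow> \<exists>Q'. tau_steps Q Q' \<and> hbisim Hs P' Q'"
  unfolding hbisim_def barbed_bisim_def by blast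

lemma hbisim_taus: "tau_steps P P' \<Longrightarrow> hbisim Hs P Q \<Longrightarrow> \<exists>Q'. tau_steps Q Q' \<and> hbisim Hs P' Q'"
proof (induction rule: rtranclp_induct)
  case base then show ?case by auto
next
  case (step y z)
  then obtain Q1 where "tau_steps Q Q1" "hbisim Hs y Q1" by blast
  moreover from hbisim_tau[OF this(2) step(2)] obtain Q2 where "tau_steps Q1 Q2" "hbisim Hs z Q2"
    by blast
  ultimately show ?case using rtranclp_trans[of _ Q Q1 Q2] by blast
qed

lemma hbisim_barb: "hbisim Hs P Q \<Longrightarrow> has_barb Hs P \<mu> \<Longrightarrow> has_wbarb Hs Q \<mu>"
  unfolding hbisim_def barbed_bisim_def by blast

lemma hbisim_ctx: "hbisim Hs P Q \<Longrightarrow> closed R \<Longrightarrow> fn R \<inter> Hs = {} \<Longrightarrow> hbisim Hs (Par P R) (Par Q R)"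
  unfolding hbisim_def barbed_bisim_def by blast

definition hbisim_mset :: "name set \<Rightarrow> proc multiset \<Rightarrow> proc multiset \<Rightarrow> bool" where
  "hbisim_mset Hs M N \<longleftrightarrow> (\<exists>X Y. threads X = M \<and> threads Y = N \<and> hbisim Hs X Y)"

lemma hbisim_mset_sym: "hbisim_mset Hs M N \<Longrightarrow> hbisim_mset Hs N M"
  unfolding hbisim_mset_def using hbisim_sym by blast

lemma hbisim_mset_taus: "hbisim_mset Hs M N \<Longrightarrow> mtau\<^sup>*\<^sup>* M M' \<Longrightarrow>
  \<exists>N'. mtau\<^sup>*\<^sup>* N N' \<and> hbisim_mset Hs M' N'"
proof -
  assume "hbisim_mset Hs M N" "mtau\<^sup>*\<^sup>* M M'"
  then obtain X Y where xy: "threads X = M" "threads Y = N" "hbisim Hs X Y"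
    unfolding hbisim_mset_def by blast
  obtain X' where "tau_steps X X'" "threads X' = M'" using mtaus_steps \<open>mtau\<^sup>*\<^sup>* M M'\<close> xy(1)
    by blast
  from hbisim_taus[OF this(1) xy(3)] obtain Y' where "tau_steps Y Y'" "hbisim Hs X' Y'" by blast
  then show ?thesis unfolding hbisim_mset_def using steps_mtaus xy(2) \<open>threads X' = M'\<close> by blast
qed

lemma hbisim_mset_barb: "hbisim_mset Hs M N \<Longrightarrow> mbarb Hs M \<mu> \<Longrightarrow> \<exists>N'. mtau\<^sup>*\<^sup>* N N' \<and> mbarb Hs N' \<mu>"
proof -
  assume "hbisim_mset Hs M N" "mbarb Hs M \<mu>"
  then obtain X Y where xy: "threads X = M" "threads Y = N" "hbisim Hs X Y"
    unfolding hbisim_mset_def by blast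
  then have "has_wbarb Hs Y \<mu>" using hbisim_barb \<open>mbarb Hs M \<mu>\<close> has_barb_mbarb by blast
  then show ?thesis unfolding has_wbarb_def using steps_mtaus has_barb_mbarb xy(2) by blast
qed

lemma hbisim_mset_wbarb: "hbisim_mset Hs M N \<Longrightarrow> mtau\<^sup>*\<^sup>* M M' \<Longrightarrow> mbarb Hs M' \<mu> \<Longrightarrow>
  \<exists>N'. mtau\<^sup>*\<^sup>* N N' \<and> mbarb Hs N' \<mu>"
proof -
  assume a: "hbisim_mset Hs M N" "mtau\<^sup>*\<^sup>* M M'" "mbarb Hs M' \<mu>"
  obtain N1 where "mtau\<^sup>*\<^sup>* N N1" "hbisim_mset Hs M' N1" using hbisim_mset_taus[OF a(1,2)] by blast
  moreover obtain N2 where "mtau\<^sup>*\<^sup>* N1 N2" "mbarb Hs N2 \<mu>"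
    using hbisim_mset_barb[OF \<open>hbisim_mset Hs M' N1\<close> a(3)] by blast
  ultimately show ?thesis using rtranclp_trans[of _ N N1 N2] by blast
qed

lemma hbisim_mset_add: "hbisim_mset Hs M N \<Longrightarrow> fvp R = {} \<Longrightarrow> fn R \<inter> Hs = {} \<Longrightarrow>
  hbisim_mset Hs (M + threads R) (N + threads R)"
proof -
  assume "hbisim_mset Hs M N" "fvp R = {}" "fn R \<inter> Hs = {}"
  then obtain X Y where xy: "threads X = M" "threads Y = N" "hbisim Hs X Y"
    unfolding hbisim_mset_def by blast
  then have "hbisim Hs (Par X R) (Par Y R)" using hbisim_ctx \<open>fvp R = {}\<close> \<open>fn R \<inter> Hs = {}\<close>
    unfolding closed_def by blast
  then show ?thesis unfolding hbisim_mset_def using xy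
    by (intro exI[of _ "Par X R"] exI[of _ "Par Y R"]) auto
qed

lemma mtaus_from_stuck: "mtau\<^sup>*\<^sup>* W X \<Longrightarrow> (\<And>M. \<not> mtau W M) \<Longrightarrow> X = W"
  by (induction rule: converse_rtranclp_induct) auto

lemma mtaus_from_deterministic: "mtau\<^sup>*\<^sup>* Y0 Y \<Longrightarrow> (\<And>M. mtau Y0 M \<longleftrightarrow> M = Y1) \<Longrightarrow> Y = Y0 \<or> mtau\<^sup>*\<^sup>* Y1 Y"
  by (induction rule: converse_rtranclp_induct) auto

lemma hbisim_mset_stuck: "hbisim_mset Hs X Y \<Longrightarrow> mtau\<^sup>*\<^sup>* Y Y' \<Longrightarrow> (\<And>M. \<not> mtau X M) \<Longrightarrow>
  hbisim_mset Hs X Y'"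
proof -
  assume a: "hbisim_mset Hs X Y" "mtau\<^sup>*\<^sup>* Y Y'" "\<And>M. \<not> mtau X M"
  obtain X' where "mtau\<^sup>*\<^sup>* X X'" "hbisim_mset Hs Y' X'"
    using hbisim_mset_taus[OF hbisim_mset_sym[OF a(1)] a(2)] by blast
  moreover then have "X' = X" using mtaus_from_stuck a(3) by blast
  ultimately show ?thesis using hbisim_mset_sym by blast
qed

lemma hbisim_mset_sync: "hbisim_mset Hs X0 Y0 \<Longrightarrow> mtau X0 X1 \<Longrightarrow> (\<And>M. mtau Y0 M \<longleftrightarrow> M = Y1) \<Longrightarrow>
   \<exists>X Y. mtau\<^sup>*\<^sup>* X1 X \<and> mtau\<^sup>*\<^sup>* Y1 Y \<and> hbisim_mset Hs X Y"
proof -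
  assume a: "hbisim_mset Hs X0 Y0" "mtau X0 X1" "\<And>M. mtau Y0 M \<longleftrightarrow> M = Y1"
  obtain Y where y: "mtau\<^sup>*\<^sup>* Y0 Y" "hbisim_mset Hs X1 Y"
    using hbisim_mset_taus[OF a(1) r_into_rtranclp[of mtau, OF a(2)]] by blast
  from mtaus_from_deterministic[OF y(1) a(3)] show ?thesis
  proof
    assume "Y = Y0"
    then have "hbisim_mset Hs Y0 X1" using y(2) hbisim_mset_sym by blast
    moreover have "mtau\<^sup>*\<^sup>* Y0 Y1" using a(3) r_into_rtranclp by blast
    ultimately obtain X where "mtau\<^sup>*\<^sup>* X1 X" "hbisim_mset Hs Y1 X" using hbisim_mset_taus by blast
    then show ?thesis using hbisim_mset_sym by blast
  next
    assume "mtau\<^sup>*\<^sup>* Y1 Y" then show ?thesis using y(2) by blast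
  qed
qed

section \<open>Processes representing \<lambda>-terms\<close>

definition tr_app :: "proc \<Rightarrow> proc \<Rightarrow> proc" where
  "tr_app P Q = Inp ''c'' PP (Par P (Out ''c'' (Par (Out ''hd'' Q) (Out ''c'' (Var PP)))))"

definition tr_abs :: "nat \<Rightarrow> proc \<Rightarrow> proc" where
  "tr_abs j B = Inp ''c'' PP (Par (Var PP) (Par (Out ''b'' restart) (Inp ''hd'' (PL j)
    (Inp ''b'' PW B))))"

definition restart_body :: proc where
  "restart_body = Inp ''k'' PX (Par (Out ''hd'' (Var PX)) (Par (Out ''k'' (Inp ''suc'' PW (Var PX)))
        (Par (Out ''c'' tr_empty) (Out ''b'' Nil))))"

definition rec_body :: proc where
  "rec_body = Inp ''rec'' PX (Par (Var PX) (Par (Out ''rec'' (Var PX)) cont))"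

definition done_wait :: proc where "done_wait = Inp ''done'' PW Nil"

definition cont_hd :: proc where "cont_hd = Inp ''hd'' PX (Inp ''b'' PW (choice (Var PX)))"

definition enter_branch :: "proc \<Rightarrow> proc" where
  "enter_branch P = Inp ''enter'' PW (Inp ''c'' PW (Par P (Out ''c'' tr_empty)))"

definition skip_branch :: proc where "skip_branch = Inp ''skip'' PW (Out ''init'' Nil)"

definition ch_select :: proc where "ch_select = Inp ''ch'' PX (Inp ''ch'' PW (Var PX))"

lemma restart_eq: "restart = Inp ''lambda'' PW restart_body"
  by (simp add: restart_def restart_body_def)

lemma rec_proc_eq: "rec_proc = Inp ''init'' PW rec_body" by (simp add: rec_proc_def rec_body_def)

lemma cont_eq: "cont = Inp ''c'' PP (Par (Var PP) (Par (Out ''b'' done_wait) cont_hd))"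
  by (simp add: cont_def done_wait_def cont_hd_def)

lemma choice_eq: "choice P = Par (Out ''ch'' (enter_branch P))
  (Par (Out ''ch'' skip_branch) ch_select)"
  by (simp add: choice_def plus_def enter_branch_def skip_branch_def ch_select_def)

lemma fvp_num[simp]: "fvp (num n) = {}" by (induction n) auto

lemma fvp_consts[simp]: "fvp tr_empty = {}" "fvp restart_body = {}" "fvp restart = {}"
  "fvp done_wait = {}"
  "fvp cont_hd = {}" "fvp cont = {}" "fvp rec_body = {}" "fvp rec_proc = {}" "fvp skip_branch = {}"
    "fvp ch_select = {}"
  by (auto simp: tr_empty_def restart_body_def restart_def done_wait_def cont_hd_def cont_def
    rec_body_def rec_proc_def
      skip_branch_def ch_select_def choice_def plus_def)

lemma threads_num[simp]: "threads (num n) = {#num n#}" by (cases n) auto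

text \<open>The list e assigns the process variable PL (e ! i) to the de Bruijn index i.  Unlike
  tr, whose environment is fixed by the binding depth, arbitrary distinct indices are allowed,
  which makes the relation stable under the substitutions performed by communication.\<close>

inductive represents :: "nat list \<Rightarrow> proc \<Rightarrow> lterm \<Rightarrow> bool" where
  rep_num: "represents e (num f) (FVar f)"
| rep_var: "i < length e \<Longrightarrow> represents e (Var (PL (e ! i))) (BVar i)"
| rep_app: "represents e P t \<Longrightarrow> represents e Q s \<Longrightarrow> represents e (tr_app P Q) (App t s)"
| rep_abs: "represents (j # e) B t \<Longrightarrow> j \<notin> set e \<Longrightarrow> represents e (tr_abs j B) (Abs t)"
| rep_closed: "represents [] P t \<Longrightarrow> represents e P t"

lemma lc_at_mono: "lc_at k t \<Longrightarrow> k \<le> k' \<Longrightarrow> lc_at k' t"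
  by (induction t arbitrary: k k') auto

lemma represents_fvp: "represents e P t \<Longrightarrow> fvp P \<subseteq> PL ` set e"
  by (induction rule: represents.induct) (auto simp: tr_app_def tr_abs_def)

lemma represents_closed: "represents [] P t \<Longrightarrow> fvp P = {}"
  using represents_fvp by fastforce

lemma represents_lc: "represents e P t \<Longrightarrow> lc_at (length e) t"
  by (induction rule: represents.induct) (auto intro: lc_at_mono)

lemma open_lc: "lc_at k t \<Longrightarrow> open_at k u t = t"
  by (induction t arbitrary: k) auto

lemma represents_threads: "represents e P t \<Longrightarrow> threads P = {#P#}"
  by (induction rule: represents.induct) (auto simp: tr_app_def tr_abs_def)

lemma represents_subst: "represents e' B t \<Longrightarrow> e' = e @ [j] \<Longrightarrow> j \<notin> set e \<Longrightarrow> represents [] P u \<Longrightarrow>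
   represents e (subst B (PL j) P) (open_at (length e) u t)"
proof (induction arbitrary: e rule: represents.induct)
  case (rep_num e f) then show ?case by (auto intro: represents.intros)
next
  case (rep_var i e')
  show ?case
  proof (cases "i = length e")
    case True
    then show ?thesis using rep_var by (auto intro: represents.rep_closed)
  next
    case False
    then have "i < length e" using rep_var by auto
    moreover then have "e' ! i = e ! i" using rep_var by (simp add: nth_append)
    moreover have "e ! i \<noteq> j" using rep_var \<open>i < length e\<close> by (metis nth_mem)
    ultimately show ?thesis using rep_var False by (auto intro: represents.rep_var)
  qed
next
  case (rep_app e P t Q s)
  then show ?case by (auto simp: tr_app_def intro!: represents.rep_app[unfolded tr_app_def])
next
  case (rep_abs k e' B t)
  have "k \<noteq> j" using rep_abs by auto
  have "represents (k # e) (subst B (PL j) P) (open_at (length (k # e)) u t)"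
    using rep_abs by auto
  then have "represents e (tr_abs k (subst B (PL j) P)) (Abs (open_at (Suc (length e)) u t))"
    using rep_abs by (auto intro: represents.rep_abs)
  then show ?case using \<open>k \<noteq> j\<close> by (simp add: tr_abs_def)
next
  case (rep_closed P' t e')
  have "fvp P' = {}" using represents_closed[OF rep_closed(1)] .
  moreover have "open_at (length e) u t = t"
    using represents_lc[OF rep_closed(1)] open_lc lc_at_mono by fastforce
  ultimately show ?case using rep_closed by (auto intro: represents.rep_closed)
qed

lemma represents_subst0: "represents [j] B t \<Longrightarrow> represents [] P u \<Longrightarrow> represents [] (subst B (PL j) P)
  (open_at 0 u t)"
  using represents_subst[of "[j]" B t "[]" j P u] by simp

lemma represents_tr: "lc_at d t \<Longrightarrow> represents (rev [0..<d]) (tr d t) t"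
proof (induction t arbitrary: d)
  case (FVar f) then show ?case by (auto intro: represents.rep_num)
next
  case (BVar i)
  then have "rev [0..<d] ! i = d - Suc i" by (simp add: rev_nth)
  then show ?case using BVar represents.rep_var[of i "rev [0..<d]"] by auto
next
  case (Abs t)
  have "represents (rev [0..<Suc d]) (tr (Suc d) t) t" using Abs.IH[of "Suc d"] Abs.prems by simp
  then have "represents (d # rev [0..<d]) (tr (Suc d) t) t" by simp
  then show ?case by (auto intro!: represents.rep_abs[unfolded tr_abs_def])
next
  case (App t s)
  then show ?case by (auto intro!: represents.rep_app[unfolded tr_app_def])
qed

lemma represents_tr0: "well_formed t \<Longrightarrow> represents [] (tr 0 t) t"
  using represents_tr[of 0 t] unfolding well_formed_def by simp

lemma represents_inv: "represents e P t \<Longrightarrow> e = [] \<Longrightarrow>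
   (\<exists>f. t = FVar f \<and> P = num f) \<or>
   (\<exists>t1 t2 P1 P2. t = App t1 t2 \<and> P = tr_app P1 P2 \<and> represents [] P1 t1 \<and> represents [] P2 t2) \<or>
   (\<exists>t1 j B. t = Abs t1 \<and> P = tr_abs j B \<and> represents [j] B t1)"
  by (induction rule: represents.induct) auto

inductive represents_stack :: "proc \<Rightarrow> lterm list \<Rightarrow> bool" where
  rep_nil: "represents_stack tr_empty []"
| rep_cons: "represents [] P t \<Longrightarrow> represents_stack S \<pi> \<Longrightarrow> represents_stack (Par (Out ''hd'' P)
  (Out ''c'' S)) (t # \<pi>)"

lemma represents_stack_closed: "represents_stack S \<pi> \<Longrightarrow> fvp S = {}"
  by (induction rule: represents_stack.induct) (auto simp: represents_closed)

lemmas represents_cases = represents_inv[OF _ refl]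

lemma represents_abs_body: "represents [j] B t \<Longrightarrow> PP \<notin> fvp B"
  using represents_fvp by fastforce

lemma represents_closed_thread: "represents [] P t \<Longrightarrow> fvp P = {} \<and> threads P = {#P#}"
  using represents_closed represents_threads by blast

lemma represents_not_Out: "represents [] P t \<Longrightarrow> P \<noteq> Out a R"
  using represents_cases[of P t]
    by (auto simp: tr_app_def tr_abs_def) (metis num.elims proc.distinct(1))

lemma represents_well_formed: "represents [] P t \<Longrightarrow> well_formed t"
  using represents_lc unfolding well_formed_def by fastforce

section \<open>Reductions of translated configurations\<close>

text \<open>comm_successors enumerates the one-step reducts of a list of threads, which makes the
  reductions of the concrete thread multisets below computable by the simplifier.\<close>

fun picks :: "'a list \<Rightarrow> ('a \<times> 'a list) list" where
  "picks [] = []"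
| "picks (x # xs) = (x, xs) # map (\<lambda>(y, ys). (y, x # ys)) (picks xs)"

lemma picks_sound: "(y, ys) \<in> set (picks xs) \<Longrightarrow> y \<in> set xs \<and> mset xs = add_mset y (mset ys)"
  by (induction xs arbitrary: y ys) auto

lemma picks_complete: "y \<in> set xs \<Longrightarrow> \<exists>ys. (y, ys) \<in> set (picks xs) \<and> mset xs = add_mset y (mset ys)"
proof (induction xs)
  case Nil then show ?case by simp
next
  case (Cons x xs)
  show ?case
  proof (cases "y = x")
    case True then show ?thesis by (intro exI[of _ xs]) auto
  next
    case False
    then obtain ys where "(y, ys) \<in> set (picks xs)" "mset xs = add_mset y (mset ys)" using Cons
      by auto
    then show ?thesis by (intro exI[of _ "x # ys"]) (auto simp: add_mset_commute)
  qed
qed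

fun comm_result :: "proc \<Rightarrow> proc \<Rightarrow> proc multiset option" where
  "comm_result (Out a R) (Inp b x Q) = (if a = b then Some (threads (subst Q x R)) else None)"
| "comm_result _ _ = None"

lemma comm_result_Some: "comm_result Ot It = Some r \<longleftrightarrow>
  (\<exists>a R x Q. Ot = Out a R \<and> It = Inp a x Q \<and> r = threads (subst Q x R))"
  by (cases "(Ot, It)" rule: comm_result.cases) auto

definition comm_successors :: "proc list \<Rightarrow> proc multiset list" where
  "comm_successors xs = concat (map (\<lambda>(Ot, rest1). concat (map (\<lambda>(It, rest2).
       (case comm_result Ot It of Some r \<Rightarrow> [mset rest2 + r] | None \<Rightarrow> [])) (picks rest1)))
         (picks xs))"

lemma mtau_iff_successors: "mtau (mset xs) M' \<longleftrightarrow> M' \<in> set (comm_successors xs)"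
proof
  assume "mtau (mset xs) M'"
  then obtain a R x Q N where e: "mset xs = add_mset (Out a R) (add_mset (Inp a x Q) N)"
    "M' = N + threads (subst Q x R)"
    unfolding mtau_def by blast
  have "Out a R \<in># mset xs" using e(1) by simp
  then have "Out a R \<in> set xs" by simp
  from picks_complete[OF this] obtain rest1 where rest1: "(Out a R, rest1) \<in> set (picks xs)"
    "mset xs = add_mset (Out a R) (mset rest1)"
    by blast
  have "mset rest1 = add_mset (Inp a x Q) N" using rest1(2) e(1) by simp
  then have "Inp a x Q \<in># mset rest1" by simp
  then have "Inp a x Q \<in> set rest1" by simp
  from picks_complete[OF this] obtain rest2 where rest2: "(Inp a x Q, rest2) \<in> set (picks rest1)"
    "mset rest1 = add_mset (Inp a x Q) (mset rest2)"
    by blast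
  have "mset rest2 = N" using rest2(2) \<open>mset rest1 = add_mset (Inp a x Q) N\<close> by simp
  have c: "M' \<in> set (case comm_result (Out a R)
    (Inp a x Q) of None \<Rightarrow> [] | Some r \<Rightarrow> [mset rest2 + r])"
    using e(2) \<open>mset rest2 = N\<close> by simp
  show "M' \<in> set (comm_successors xs)" unfolding comm_successors_def set_concat set_map
    apply (rule UN_I[OF imageI[OF rest1(1)]])
    apply (simp only: prod.case set_concat set_map)
    apply (rule UN_I[OF imageI[OF rest2(1)]])
    using c by simp
next
  assume "M' \<in> set (comm_successors xs)"
  then obtain Ot rest1 It rest2 r where p: "(Ot, rest1) \<in> set (picks xs)"
    "(It, rest2) \<in> set (picks rest1)"
    "comm_result Ot It = Some r" "M' = mset rest2 + r"
    unfolding comm_successors_def by (auto split: prod.splits option.splits) (metis that)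
  obtain a R x Q where "Ot = Out a R" "It = Inp a x Q" "r = threads (subst Q x R)"
    using comm_result_Some[THEN iffD1, OF p(3)] by blast
  moreover have "mset xs = add_mset Ot (add_mset It (mset rest2))"
    using picks_sound[OF p(1)] picks_sound[OF p(2)] by simp
  ultimately show "mtau (mset xs) M'" using p(4) unfolding mtau_def by blast
qed

text \<open>The thread multisets through which the translation of a configuration evolves.
  Besides the threads machine_threads n (the counter on k, Rec and its copy on rec; in rec_st,
  Rec has fired), they record the process P representing the current term, or the body B of an
  abstraction under binder PL j, the stack process S and the counter n.  The states eval, grab,
  abs_nil and lambda_wait follow the KAM, the restart states answer a \<lambda>-flag by substituting
  the fresh variable n, and the remaining ones traverse the stack in continuation mode.\<close>

definition machine_threads :: "nat \<Rightarrow> proc list" where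
  "machine_threads n = [Out ''k'' (num n), rec_proc, Out ''rec'' rec_proc]"

definition eval_st :: "proc \<Rightarrow> proc \<Rightarrow> nat \<Rightarrow> proc multiset" where
  "eval_st P S n = mset ([P, Out ''c'' S] @ machine_threads n)"

definition grab1_st :: "nat \<Rightarrow> proc \<Rightarrow> proc \<Rightarrow> proc \<Rightarrow> nat \<Rightarrow> proc multiset" where
  "grab1_st j B P2 S1 n = mset ([Out ''hd'' P2, Out ''c'' S1, Out ''b'' restart, Inp ''hd'' (PL j)
    (Inp ''b'' PW B)] @ machine_threads n)"

definition grab2_st :: "proc \<Rightarrow> proc \<Rightarrow> nat \<Rightarrow> proc multiset" where
  "grab2_st B' S1 n = mset ([Out ''c'' S1, Out ''b'' restart, Inp ''b'' PW B'] @ machine_threads n)"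

definition abs_nil_st :: "nat \<Rightarrow> proc \<Rightarrow> nat \<Rightarrow> proc multiset" where
  "abs_nil_st j B n = mset ([Out ''b'' restart, Inp ''hd'' (PL j)
    (Inp ''b'' PW B), tr_empty] @ machine_threads n)"

definition lambda_wait_st :: "nat \<Rightarrow> proc \<Rightarrow> nat \<Rightarrow> proc multiset" where
  "lambda_wait_st j B n = mset ([restart, Inp ''hd'' (PL j) (Inp ''b'' PW B)] @ machine_threads n)"

definition restart1_st :: "nat \<Rightarrow> proc \<Rightarrow> nat \<Rightarrow> proc multiset" where
  "restart1_st j B n = mset ([restart_body, Inp ''hd'' (PL j)
    (Inp ''b'' PW B)] @ machine_threads n)"

definition restart2_st :: "nat \<Rightarrow> proc \<Rightarrow> nat \<Rightarrow> proc multiset" where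
  "restart2_st j B n =
    mset ([Out ''hd'' (num n), Out ''c'' tr_empty, Out ''b'' Nil, Inp ''hd'' (PL j)
    (Inp ''b'' PW B)] @ machine_threads (Suc n))"

definition restart3_st :: "proc \<Rightarrow> nat \<Rightarrow> proc multiset" where
  "restart3_st B' n = mset ([Out ''c'' tr_empty, Out ''b'' Nil, Inp ''b'' PW B']
    @ machine_threads (Suc n))"

definition init_st :: "proc \<Rightarrow> nat \<Rightarrow> proc multiset" where
  "init_st S n = mset ([Out ''init'' Nil, Out ''c'' S] @ machine_threads n)"

definition rec_st :: "proc \<Rightarrow> nat \<Rightarrow> proc multiset" where
  "rec_st S n = mset [rec_body, Out ''c'' S, Out ''k'' (num n), Out ''rec'' rec_proc]"

definition cont_st :: "proc \<Rightarrow> nat \<Rightarrow> proc multiset" where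
  "cont_st S n = mset ([cont, Out ''c'' S] @ machine_threads n)"

definition cont_hd_st :: "proc \<Rightarrow> proc \<Rightarrow> nat \<Rightarrow> proc multiset" where
  "cont_hd_st P S1 n = mset ([Out ''hd'' P, Out ''c'' S1, Out ''b'' done_wait, cont_hd]
    @ machine_threads n)"

definition cont_b_st :: "proc \<Rightarrow> proc \<Rightarrow> nat \<Rightarrow> proc multiset" where
  "cont_b_st P S1 n = mset ([Out ''c'' S1, Out ''b'' done_wait, Inp ''b'' PW (choice P)]
    @ machine_threads n)"

definition choice_st :: "proc \<Rightarrow> proc \<Rightarrow> nat \<Rightarrow> proc multiset" where
  "choice_st P S1 n =
    mset ([Out ''ch'' (enter_branch P), Out ''ch'' skip_branch, ch_select, Out ''c'' S1]
    @ machine_threads n)"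

definition chose_enter_st :: "proc \<Rightarrow> proc \<Rightarrow> nat \<Rightarrow> proc multiset" where
  "chose_enter_st P S1 n =
    mset ([Out ''ch'' skip_branch, Inp ''ch'' PW (enter_branch P), Out ''c'' S1]
    @ machine_threads n)"

definition chose_skip_st :: "proc \<Rightarrow> proc \<Rightarrow> nat \<Rightarrow> proc multiset" where
  "chose_skip_st P S1 n =
    mset ([Out ''ch'' (enter_branch P), Inp ''ch'' PW skip_branch, Out ''c'' S1]
    @ machine_threads n)"

definition enter_wait_st :: "proc \<Rightarrow> proc \<Rightarrow> nat \<Rightarrow> proc multiset" where
  "enter_wait_st P S1 n = mset ([enter_branch P, Out ''c'' S1] @ machine_threads n)"

definition skip_wait_st :: "proc \<Rightarrow> nat \<Rightarrow> proc multiset" where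
  "skip_wait_st S1 n = mset ([skip_branch, Out ''c'' S1] @ machine_threads n)"

definition enter_st :: "proc \<Rightarrow> proc \<Rightarrow> nat \<Rightarrow> proc multiset" where
  "enter_st P S1 n = mset ([Inp ''c'' PW (Par P (Out ''c'' tr_empty)), Out ''c'' S1]
    @ machine_threads n)"

definition done_b_st :: "nat \<Rightarrow> proc multiset" where
  "done_b_st n = mset ([Out ''b'' done_wait, cont_hd, tr_empty] @ machine_threads n)"

definition done_wait_st :: "nat \<Rightarrow> proc multiset" where
  "done_wait_st n = mset ([done_wait, cont_hd] @ machine_threads n)"

definition dead_st :: "nat \<Rightarrow> proc multiset" where
  "dead_st n = mset ([cont_hd] @ machine_threads n)"

lemmas st_defs =
  eval_st_def grab1_st_def grab2_st_def abs_nil_st_def lambda_wait_st_def restart1_st_def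
  restart2_st_def restart3_st_def init_st_def rec_st_def cont_st_def
  cont_hd_st_def cont_b_st_def choice_st_def chose_enter_st_def chose_skip_st_def enter_wait_st_def
    skip_wait_st_def enter_st_def done_b_st_def done_wait_st_def dead_st_def machine_threads_def

lemmas proc_defs =
  restart_eq rec_proc_eq cont_eq restart_body_def rec_body_def done_wait_def cont_hd_def choice_eq
  enter_branch_def
  skip_branch_def ch_select_def tr_empty_def tr_app_def tr_abs_def

lemma eval_app_step: "fvp P1 = {} \<Longrightarrow> fvp P2 = {} \<Longrightarrow> fvp S = {} \<Longrightarrow> threads P1 = {#P1#} \<Longrightarrow>
  mtau (eval_st (tr_app P1 P2) S n) M' \<longleftrightarrow> M' = eval_st P1 (Par (Out ''hd'' P2) (Out ''c'' S)) n"
  unfolding st_defs mtau_iff_successors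
    by (simp add: comm_successors_def proc_defs add_mset_commute)

lemma eval_abs_cons_step: "PP \<notin> fvp B \<Longrightarrow>
  mtau (eval_st (tr_abs j B) (Par (Out ''hd'' P2) (Out ''c'' S1)) n) M' \<longleftrightarrow> M' = grab1_st j B P2 S1 n"
  unfolding st_defs mtau_iff_successors
    by (simp add: comm_successors_def proc_defs add_mset_commute)

lemma eval_abs_nil_step: "PP \<notin> fvp B \<Longrightarrow> mtau (eval_st (tr_abs j B) tr_empty n) M' \<longleftrightarrow>
  M' = abs_nil_st j B n"
  unfolding st_defs mtau_iff_successors
    by (simp add: comm_successors_def proc_defs add_mset_commute)

lemma eval_num_stuck: "\<not> mtau (eval_st (num f) S n) M'"
  unfolding st_defs mtau_iff_successors
    by (cases f) (simp_all add: comm_successors_def proc_defs add_mset_commute)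

lemma grab1_step: "mtau (grab1_st j B P2 S1 n) M' \<longleftrightarrow> M' = grab2_st (subst B (PL j) P2) S1 n"
  unfolding st_defs mtau_iff_successors
    by (simp add: comm_successors_def proc_defs add_mset_commute)

lemma grab2_step: "fvp B' = {} \<Longrightarrow> threads B' = {#B'#} \<Longrightarrow> mtau (grab2_st B' S1 n) M' \<longleftrightarrow>
  M' = eval_st B' S1 n"
  unfolding st_defs mtau_iff_successors
    by (simp add: comm_successors_def proc_defs add_mset_commute)

lemma abs_nil_step: "mtau (abs_nil_st j B n) M' \<longleftrightarrow> M' = lambda_wait_st j B n"
  unfolding st_defs mtau_iff_successors
    by (simp add: comm_successors_def proc_defs add_mset_commute)

lemma lambda_wait_stuck: "\<not> mtau (lambda_wait_st j B n) M'"
  unfolding st_defs mtau_iff_successors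
    by (simp add: comm_successors_def proc_defs add_mset_commute)

lemma restart1_step: "mtau (restart1_st j B n) M' \<longleftrightarrow> M' = restart2_st j B n"
  unfolding st_defs mtau_iff_successors
    by (simp add: comm_successors_def proc_defs add_mset_commute)

lemma restart2_step: "mtau (restart2_st j B n) M' \<longleftrightarrow> M' = restart3_st (subst B (PL j) (num n)) n"
  unfolding st_defs mtau_iff_successors
    by (simp add: comm_successors_def proc_defs add_mset_commute)

lemma restart3_step: "fvp B' = {} \<Longrightarrow> threads B' = {#B'#} \<Longrightarrow> mtau (restart3_st B' n) M' \<longleftrightarrow>
  M' = eval_st B' tr_empty (Suc n)"
  unfolding st_defs mtau_iff_successors
    by (simp add: comm_successors_def proc_defs add_mset_commute)

lemma init_step: "mtau (init_st S n) M' \<longleftrightarrow> M' = rec_st S n"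
  unfolding st_defs mtau_iff_successors
    by (simp add: comm_successors_def proc_defs add_mset_commute)

lemma rec_step: "mtau (rec_st S n) M' \<longleftrightarrow> M' = cont_st S n"
  unfolding st_defs mtau_iff_successors
    by (simp add: comm_successors_def proc_defs add_mset_commute)

lemma cont_cons_step: "mtau (cont_st (Par (Out ''hd'' P) (Out ''c'' S1)) n) M' \<longleftrightarrow>
  M' = cont_hd_st P S1 n"
  unfolding st_defs mtau_iff_successors
    by (simp add: comm_successors_def proc_defs add_mset_commute)

lemma cont_nil_step: "mtau (cont_st tr_empty n) M' \<longleftrightarrow> M' = done_b_st n"
  unfolding st_defs mtau_iff_successors
    by (simp add: comm_successors_def proc_defs add_mset_commute)

lemma cont_hd_step: "mtau (cont_hd_st P S1 n) M' \<longleftrightarrow> M' = cont_b_st P S1 n"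
  unfolding st_defs mtau_iff_successors
    by (simp add: comm_successors_def proc_defs add_mset_commute)

lemma cont_b_step: "mtau (cont_b_st P S1 n) M' \<longleftrightarrow> M' = choice_st P S1 n"
  unfolding st_defs mtau_iff_successors
    by (simp add: comm_successors_def proc_defs add_mset_commute)

lemma choice_step: "mtau (choice_st P S1 n) M' \<longleftrightarrow>
  M' = chose_enter_st P S1 n \<or> M' = chose_skip_st P S1 n"
  unfolding st_defs mtau_iff_successors
    by (simp add: comm_successors_def proc_defs add_mset_commute)

lemma chose_enter_step: "mtau (chose_enter_st P S1 n) M' \<longleftrightarrow> M' = enter_wait_st P S1 n"
  unfolding st_defs mtau_iff_successors
    by (simp add: comm_successors_def proc_defs add_mset_commute)

lemma chose_skip_step: "mtau (chose_skip_st P S1 n) M' \<longleftrightarrow> M' = skip_wait_st S1 n"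
  unfolding st_defs mtau_iff_successors
    by (simp add: comm_successors_def proc_defs add_mset_commute)

lemma enter_wait_stuck: "\<not> mtau (enter_wait_st P S1 n) M'"
  unfolding st_defs mtau_iff_successors
    by (simp add: comm_successors_def proc_defs add_mset_commute)

lemma skip_wait_stuck: "\<not> mtau (skip_wait_st S1 n) M'"
  unfolding st_defs mtau_iff_successors
    by (simp add: comm_successors_def proc_defs add_mset_commute)

lemma enter_step: "fvp P = {} \<Longrightarrow> threads P = {#P#} \<Longrightarrow> mtau (enter_st P S1 n) M' \<longleftrightarrow>
  M' = eval_st P tr_empty n"
  unfolding st_defs mtau_iff_successors
    by (simp add: comm_successors_def proc_defs add_mset_commute)

lemma done_b_step: "mtau (done_b_st n) M' \<longleftrightarrow> M' = done_wait_st n"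
  unfolding st_defs mtau_iff_successors
    by (simp add: comm_successors_def proc_defs add_mset_commute)

lemma done_wait_stuck: "\<not> mtau (done_wait_st n) M'"
  unfolding st_defs mtau_iff_successors
    by (simp add: comm_successors_def proc_defs add_mset_commute)

lemma dead_stuck: "\<not> mtau (dead_st n) M'"
  unfolding st_defs mtau_iff_successors
    by (simp add: comm_successors_def proc_defs add_mset_commute)

lemma lambda_wait_fire: "mtau (add_mset (Out ''lambda'' Nil) (lambda_wait_st j B n)) M \<longleftrightarrow>
  M = restart1_st j B n"
  unfolding st_defs mset.simps(2)[symmetric] mtau_iff_successors
    by (simp add: comm_successors_def proc_defs add_mset_commute)

lemma eval_zero_fire: "mtau (add_mset (Out ''z'' Nil) (eval_st (num 0) S n)) M \<longleftrightarrow> M = init_st S n"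
  unfolding st_defs mset.simps(2)[symmetric] mtau_iff_successors
    by (simp add: comm_successors_def proc_defs add_mset_commute)

lemma eval_suc_fire: "mtau (add_mset (Out ''suc'' Nil) (eval_st (num (Suc g)) S n)) M \<longleftrightarrow>
  M = eval_st (num g) S n"
  unfolding st_defs mset.simps(2)[symmetric] mtau_iff_successors
    by (simp add: comm_successors_def proc_defs add_mset_commute)

lemma enter_wait_fire: "fvp P = {} \<Longrightarrow> threads P = {#P#} \<Longrightarrow> mtau (add_mset (Out ''enter'' Nil)
  (enter_wait_st P S1 n)) M \<longleftrightarrow> M = enter_st P S1 n"
  unfolding st_defs mset.simps(2)[symmetric] mtau_iff_successors
    by (simp add: comm_successors_def proc_defs add_mset_commute)

lemma skip_wait_fire: "mtau (add_mset (Out ''skip'' Nil) (skip_wait_st S1 n)) M \<longleftrightarrow> M = init_st S1 n"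
  unfolding st_defs mset.simps(2)[symmetric] mtau_iff_successors
    by (simp add: comm_successors_def proc_defs add_mset_commute)

definition flags :: "proc multiset \<Rightarrow> (name \<times> pvar \<times> proc) set" where
  "flags M = {(a, x, Q). Inp a x Q \<in># M \<and> a \<notin> H}"

definition outs_in_H :: "proc multiset \<Rightarrow> bool" where
  "outs_in_H M \<longleftrightarrow> (\<forall>a R. Out a R \<in># M \<longrightarrow> a \<in> H)"

lemmas flag_simps = flags_def outs_in_H_def st_defs H_def proc_defs

lemma flags_silent:
  "flags (eval_st (tr_app P1 P2) S n) = {}" "flags (eval_st (tr_abs j B) S n) = {}"
  "flags (grab1_st j B P2 S1 n) = {}" "flags (grab2_st B' S1 n) = {}"
    "flags (abs_nil_st j B n) = {}"
  "flags (restart1_st j B n) = {}" "flags (restart2_st j B n) = {}" "flags (restart3_st B' n) = {}"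
  "flags (init_st S n) = {}" "flags (rec_st S n) = {}" "flags (cont_st S n) = {}"
    "flags (cont_hd_st P S1 n) = {}"
  "flags (cont_b_st P S1 n) = {}" "flags (choice_st P S1 n) = {}"
    "flags (chose_enter_st P S1 n) = {}" "flags (chose_skip_st P S1 n) = {}"
  "flags (enter_st P S1 n) = {}" "flags (done_b_st n) = {}" "flags (dead_st n) = {}"
  by (auto simp: flag_simps)

lemma flags_lambda_wait: "flags (lambda_wait_st j B n) = {(''lambda'', PW, restart_body)}"
  by (auto simp: flag_simps)

lemma flags_eval_zero: "flags (eval_st (num 0) S n) = {(''z'', PW, Out ''init'' Nil)}"
  by (auto simp: flag_simps)

lemma flags_eval_suc: "flags (eval_st (num (Suc g)) S n) = {(''suc'', PW, num g)}"
  by (auto simp: flag_simps)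

lemma flags_enter_wait: "flags (enter_wait_st P S1 n) =
  {(''enter'', PW, Inp ''c'' PW (Par P (Out ''c'' tr_empty)))}"
  by (auto simp: flag_simps)

lemma flags_skip_wait: "flags (skip_wait_st S1 n) = {(''skip'', PW, Out ''init'' Nil)}"
  by (auto simp: flag_simps)

lemma flags_done_wait: "flags (done_wait_st n) = {(''done'', PW, Nil)}"
  by (auto simp: flag_simps)

lemma outs_in_H_states:
  "outs_in_H (grab1_st j B P2 S1 n)" "outs_in_H (grab2_st B' S1 n)" "outs_in_H (abs_nil_st j B n)"
  "outs_in_H (lambda_wait_st j B n)" "outs_in_H (restart1_st j B n)" "outs_in_H (restart2_st j B n)"
    "outs_in_H (restart3_st B' n)"
  "outs_in_H (init_st S n)" "outs_in_H (rec_st S n)" "outs_in_H (cont_st S n)"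
    "outs_in_H (cont_hd_st P S1 n)"
  "outs_in_H (cont_b_st P S1 n)" "outs_in_H (choice_st P S1 n)" "outs_in_H (chose_enter_st P S1 n)"
    "outs_in_H (chose_skip_st P S1 n)"
  "outs_in_H (enter_wait_st P S1 n)" "outs_in_H (skip_wait_st S1 n)" "outs_in_H (enter_st P S1 n)"
    "outs_in_H (done_b_st n)" "outs_in_H (done_wait_st n)" "outs_in_H (dead_st n)"
  by (auto simp: flag_simps)

lemma outs_in_H_eval: "(\<And>a R. P \<noteq> Out a R) \<Longrightarrow> outs_in_H (eval_st P S n)"
  by (auto simp: flag_simps)

lemma lambda_wait_input:
  "lambda_wait_st j B n - {#Inp ''lambda'' PW restart_body#} + threads restart_body =
    restart1_st j B n"
  by (simp add: st_defs proc_defs add_mset_commute)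

lemma eval_zero_input:
  "eval_st (num 0) S n - {#Inp ''z'' PW (Out ''init'' Nil)#} + threads (Out ''init'' Nil) =
    init_st S n"
  by (simp add: st_defs proc_defs add_mset_commute)

lemma eval_suc_input:
  "eval_st (num (Suc g)) S n - {#Inp ''suc'' PW (num g)#} + threads (num g) = eval_st (num g) S n"
  by (simp add: st_defs proc_defs add_mset_commute)

lemma enter_wait_input:
  "enter_wait_st P S1 n - {#Inp ''enter'' PW (Inp ''c'' PW (Par P (Out ''c'' tr_empty)))#}
     + threads (Inp ''c'' PW (Par P (Out ''c'' tr_empty))) = enter_st P S1 n"
  by (simp add: st_defs proc_defs add_mset_commute)

lemma skip_wait_input:
  "skip_wait_st S1 n - {#Inp ''skip'' PW (Out ''init'' Nil)#} + threads (Out ''init'' Nil) =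
    init_st S1 n"
  by (simp add: st_defs proc_defs add_mset_commute)

lemma done_wait_input: "done_wait_st n - {#Inp ''done'' PW Nil#} + threads Nil = dead_st n"
  by (simp add: st_defs proc_defs add_mset_commute)

section \<open>The Krivine machine and normal-form bisimilarity\<close>

lemma kam_det: "kam a b \<Longrightarrow> kam a c \<Longrightarrow> b = c"
  by (induction rule: kam.induct) (auto elim: kam.cases)

lemma kam_abs_nil_final: "\<not> kam (Abs t, []) c"
  by (auto elim: kam.cases)

lemma kam_fvar_final: "\<not> kam (FVar f, \<pi>) c"
  by (auto elim: kam.cases)

lemma kam_rtc_det: "kam\<^sup>*\<^sup>* a b \<Longrightarrow> kam\<^sup>*\<^sup>* a c \<Longrightarrow> kam\<^sup>*\<^sup>* b c \<or> kam\<^sup>*\<^sup>* c b"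
proof (induction arbitrary: c rule: converse_rtranclp_induct)
  case base then show ?case by auto
next
  case (step a a1)
  note st = step
  from st(4) show ?case
  proof (cases rule: converse_rtranclpE)
    case base then show ?thesis using st(1,2) by (meson converse_rtranclp_into_rtranclp)
  next
    case (step a2)
    then have "a2 = a1" using kam_det st(1) by blast
    then show ?thesis using st(3)[of c] step(2) by blast
  qed
qed

lemma kam_final: "kam\<^sup>*\<^sup>* a b \<Longrightarrow> kam\<^sup>*\<^sup>* a c \<Longrightarrow> (\<And>d. \<not> kam c d) \<Longrightarrow> kam\<^sup>*\<^sup>* b c"
  using kam_rtc_det by (metis converse_rtranclpE)

lemma fv_open: "fv (open_at k u t) \<subseteq> fv u \<union> fv t"
  by (induction t arbitrary: k) auto

lemma kam_fv: "kam (t, \<pi>) (t', \<pi>') \<Longrightarrow> fv t' \<union> \<Union>(fv ` set \<pi>') \<subseteq> fv t \<union> \<Union>(fv ` set \<pi>)"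
  by (induction "(t, \<pi>)" "(t', \<pi>')" arbitrary: t \<pi> t' \<pi>' rule: kam.induct) (use fv_open in auto)

lemma kams_fv: "kam\<^sup>*\<^sup>* c c' \<Longrightarrow>
  fv (fst c') \<union> \<Union>(fv ` set (snd c')) \<subseteq> fv (fst c) \<union> \<Union>(fv ` set (snd c))"
proof (induction rule: rtranclp_induct)
  case base then show ?case by simp
next
  case (step y z)
  have "fv (fst z) \<union> \<Union>(fv ` set (snd z)) \<subseteq> fv (fst y) \<union> \<Union>(fv ` set (snd y))"
    using kam_fv[of "fst y" "snd y" "fst z" "snd z"] step(2) by simp
  then show ?case using step(3) by (rule subset_trans)
qed

lemma kams_fv_pairs: "kam\<^sup>*\<^sup>* (t, \<pi>) (t', \<pi>') \<Longrightarrow> fv t' \<union> \<Union>(fv ` set \<pi>') \<subseteq> fv t \<union> \<Union>(fv ` set \<pi>)"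
  using kams_fv[of "(t, \<pi>)" "(t', \<pi>')"] by simp

definition fv_list :: "lterm list \<Rightarrow> nat set" where
  "fv_list \<pi> = \<Union>(fv ` set \<pi>)"

lemma fv_list_Cons: "fv_list (u # \<pi>) = fv u \<union> fv_list \<pi>"
  by (simp add: fv_list_def)

lemma kams_var_fv_list: "kam\<^sup>*\<^sup>* (t, []) (FVar f, \<pi>) \<Longrightarrow> fv_list \<pi> \<subseteq> fv t"
  using kams_fv_pairs[of t "[]" "FVar f" \<pi>] unfolding fv_list_def by simp

lemma kams_abs_fv: "kam\<^sup>*\<^sup>* (t, []) (Abs t', []) \<Longrightarrow> fv t' \<subseteq> fv t"
  using kams_fv_pairs[of t "[]" "Abs t'" "[]"] by simp

definition swap_nat :: "nat \<Rightarrow> nat \<Rightarrow> nat \<Rightarrow> nat" where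
  "swap_nat f g x = (if x = f then g else if x = g then f else x)"

fun swap_fv :: "nat \<Rightarrow> nat \<Rightarrow> lterm \<Rightarrow> lterm" where
  "swap_fv f g (FVar x) = FVar (swap_nat f g x)"
| "swap_fv f g (BVar i) = BVar i"
| "swap_fv f g (Abs t) = Abs (swap_fv f g t)"
| "swap_fv f g (App t s) = App (swap_fv f g t) (swap_fv f g s)"

lemma swap_nat_inv[simp]: "swap_nat f g (swap_nat f g x) = x" by (simp add: swap_nat_def)

lemma swap_fv_inv[simp]: "swap_fv f g (swap_fv f g t) = t" by (induction t) auto

lemma swap_fv_open: "swap_fv f g (open_at k u t) = open_at k (swap_fv f g u) (swap_fv f g t)"
  by (induction t arbitrary: k) auto

lemma fv_swap_fv: "fv (swap_fv f g t) = swap_nat f g ` fv t" by (induction t) auto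

lemma swap_fv_fresh: "f \<notin> fv t \<Longrightarrow> g \<notin> fv t \<Longrightarrow> swap_fv f g t = t"
  by (induction t) (auto simp: swap_nat_def)

lemma kam_swap_fv: "kam (t, \<pi>) (t', \<pi>') \<Longrightarrow> kam (swap_fv f g t, map (swap_fv f g) \<pi>)
  (swap_fv f g t', map (swap_fv f g) \<pi>')"
  by (induction "(t, \<pi>)" "(t', \<pi>')" arbitrary: t \<pi> t' \<pi>' rule: kam.induct)
    (auto simp: swap_fv_open intro: kam.intros)

lemma kams_swap_fv: "kam\<^sup>*\<^sup>* c c' \<Longrightarrow> kam\<^sup>*\<^sup>* (swap_fv f g (fst c), map (swap_fv f g) (snd c))
  (swap_fv f g (fst c'), map (swap_fv f g) (snd c'))"
proof (induction rule: rtranclp_induct)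
  case base then show ?case by simp
next
  case (step y z)
  then show ?case using kam_swap_fv[of "fst y" "snd y" "fst z" "snd z" f g]
    by (metis prod.collapse rtranclp.rtrancl_into_rtrancl)
qed

lemma kams_swap_fv_pairs: "kam\<^sup>*\<^sup>* (t, \<pi>) (t', \<pi>') \<Longrightarrow> kam\<^sup>*\<^sup>* (swap_fv f g t, map (swap_fv f g) \<pi>)
  (swap_fv f g t', map (swap_fv f g) \<pi>')"
  using kams_swap_fv[of "(t, \<pi>)" "(t', \<pi>')"] by simp

lemma nf_bisim_imp_nf_equiv: "nf_bisim R \<Longrightarrow> R t s \<Longrightarrow> nf_equiv t s"
  unfolding nf_equiv_def by blast

lemma nf_equiv_sym: "nf_equiv t s \<Longrightarrow> nf_equiv s t"
proof -
  assume "nf_equiv t s"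
  then obtain R where "nf_bisim R" "R t s" unfolding nf_equiv_def by blast
  moreover then have "symp R" unfolding nf_bisim_def by blast
  ultimately show ?thesis unfolding nf_equiv_def by (meson sympD)
qed

lemma list_all2_nf_equiv_sym: "list_all2 nf_equiv \<pi> \<pi>' \<Longrightarrow> list_all2 nf_equiv \<pi>' \<pi>"
  by (simp add: list_all2_conv_all_nth nf_equiv_sym)

lemma nf_equiv_abs: "nf_equiv t s \<Longrightarrow> kam\<^sup>*\<^sup>* (t, []) (Abs t', []) \<Longrightarrow>
   \<exists>s'. kam\<^sup>*\<^sup>* (s, []) (Abs s', []) \<and> (\<exists>f. f \<notin> fv t' \<union> fv s' \<and> nf_equiv (open_at 0 (FVar f) t')
     (open_at 0 (FVar f) s'))"
proof -
  assume a: "nf_equiv t s" "kam\<^sup>*\<^sup>* (t, []) (Abs t', [])"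
  then obtain R where r: "nf_bisim R" "R t s" unfolding nf_equiv_def by blast
  then show ?thesis using a(2) nf_bisim_imp_nf_equiv[OF r(1)] unfolding nf_bisim_def by blast
qed

lemma nf_equiv_var: "nf_equiv t s \<Longrightarrow> kam\<^sup>*\<^sup>* (t, []) (FVar f, \<pi>) \<Longrightarrow>
   \<exists>\<pi>'. kam\<^sup>*\<^sup>* (s, []) (FVar f, \<pi>') \<and> list_all2 nf_equiv \<pi> \<pi>'"
proof -
  assume a: "nf_equiv t s" "kam\<^sup>*\<^sup>* (t, []) (FVar f, \<pi>)"
  then obtain R where r: "nf_bisim R" "R t s" unfolding nf_equiv_def by blast
  then obtain \<pi>' where "kam\<^sup>*\<^sup>* (s, []) (FVar f, \<pi>')" "list_all2 R \<pi> \<pi>'" using a(2)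
    unfolding nf_bisim_def by blast
  moreover then have "list_all2 nf_equiv \<pi> \<pi>'" using nf_bisim_imp_nf_equiv[OF r(1)] list_all2_mono
    by blast
  ultimately show ?thesis by blast
qed

text \<open>Normal-form bisimilarity is equivariant under swapping free variables, so the fresh
  variable in the \<lambda>-clause can be chosen at will.\<close>

lemma nf_equiv_swap_fv: "nf_equiv t s \<Longrightarrow> nf_equiv (swap_fv f g t) (swap_fv f g s)"
proof -
  define R where "R a b \<longleftrightarrow> (\<exists>t s. nf_equiv t s \<and> a = swap_fv f g t \<and> b = swap_fv f g s)" for a b
  have "nf_bisim R"
    unfolding nf_bisim_def
  proof (intro conjI allI impI)
    show "symp R" unfolding R_def symp_def using nf_equiv_sym by blast
  next
    fix a b a' assume "R a b" "kam\<^sup>*\<^sup>* (a, []) (Abs a', [])"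
    then obtain t s where ts: "nf_equiv t s" "a = swap_fv f g t" "b = swap_fv f g s" unfolding R_def
      by blast
    have "kam\<^sup>*\<^sup>* (t, []) (Abs (swap_fv f g a'), [])"
      using kams_swap_fv_pairs[OF \<open>kam\<^sup>*\<^sup>* (a, []) (Abs a', [])\<close>, of f g] ts by simp
    from nf_equiv_abs[OF ts(1) this] obtain s1 h where
      s1: "kam\<^sup>*\<^sup>* (s, []) (Abs s1, [])" "h \<notin> fv (swap_fv f g a') \<union> fv s1"
      "nf_equiv (open_at 0 (FVar h) (swap_fv f g a')) (open_at 0 (FVar h) s1)" by blast
    have "kam\<^sup>*\<^sup>* (b, []) (Abs (swap_fv f g s1), [])" using kams_swap_fv_pairs[OF s1(1), of f g] ts
      by simp
    moreover have "swap_nat f g h \<notin> fv a' \<union> fv (swap_fv f g s1)" using s1(2)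
      by (auto simp: fv_swap_fv) (metis image_eqI swap_nat_inv)+
    moreover have "R (open_at 0 (FVar (swap_nat f g h)) a') (open_at 0 (FVar (swap_nat f g h))
      (swap_fv f g s1))"
      unfolding R_def using s1(3)
        by (intro exI[of _ "open_at 0 (FVar h) (swap_fv f g a')"] exI[of _ "open_at 0 (FVar h) s1"])
        (simp add: swap_fv_open)
    ultimately show "\<exists>b'. kam\<^sup>*\<^sup>* (b, [])
      (Abs b', []) \<and> (\<exists>h. h \<notin> fv a' \<union> fv b' \<and> R (open_at 0 (FVar h) a') (open_at 0 (FVar h) b'))"
      by blast
  next
    fix a b x \<pi> assume "R a b" "kam\<^sup>*\<^sup>* (a, []) (FVar x, \<pi>)"
    then obtain t s where ts: "nf_equiv t s" "a = swap_fv f g t" "b = swap_fv f g s" unfolding R_def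
      by blast
    have "kam\<^sup>*\<^sup>* (t, []) (FVar (swap_nat f g x), map (swap_fv f g) \<pi>)"
      using kams_swap_fv_pairs[OF \<open>kam\<^sup>*\<^sup>* (a, []) (FVar x, \<pi>)\<close>, of f g] ts by simp
    from nf_equiv_var[OF ts(1) this] obtain \<pi>' where p: "kam\<^sup>*\<^sup>* (s, [])
      (FVar (swap_nat f g x), \<pi>')" "list_all2 nf_equiv (map (swap_fv f g) \<pi>) \<pi>'"
      by blast
    have "kam\<^sup>*\<^sup>* (b, []) (FVar x, map (swap_fv f g) \<pi>')"
      using kams_swap_fv_pairs[OF p(1), of f g] ts by simp
    moreover have "list_all2 R \<pi> (map (swap_fv f g) \<pi>')"
      using p(2) unfolding R_def list_all2_map1 list_all2_map2
      by (rule list_all2_mono) (metis swap_fv_inv)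
    ultimately show "\<exists>\<pi>'. kam\<^sup>*\<^sup>* (b, []) (FVar x, \<pi>') \<and> list_all2 R \<pi> \<pi>'" by blast
  qed
  moreover have "R (swap_fv f g t) (swap_fv f g s)" if "nf_equiv t s" unfolding R_def using that
    by blast
  ultimately show "nf_equiv t s \<Longrightarrow> nf_equiv (swap_fv f g t) (swap_fv f g s)"
    using nf_bisim_imp_nf_equiv by blast
qed

lemma nf_equiv_rename: "nf_equiv (open_at 0 (FVar f) t') (open_at 0 (FVar f) s') \<Longrightarrow>
  f \<notin> fv t' \<union> fv s' \<Longrightarrow>
   g \<notin> fv t' \<union> fv s' \<Longrightarrow> nf_equiv (open_at 0 (FVar g) t') (open_at 0 (FVar g) s')"
  using nf_equiv_swap_fv[of "open_at 0 (FVar f) t'" "open_at 0 (FVar f) s'" f g]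
  by (simp add: swap_fv_open swap_fv_fresh swap_nat_def)

lemma nf_equiv_abs_fresh: "nf_equiv t s \<Longrightarrow> kam\<^sup>*\<^sup>* (t, []) (Abs t', []) \<Longrightarrow> g \<notin> fv t \<Longrightarrow> g \<notin> fv s \<Longrightarrow>
   \<exists>s'. kam\<^sup>*\<^sup>* (s, []) (Abs s', []) \<and> nf_equiv (open_at 0 (FVar g) t') (open_at 0 (FVar g) s')"
proof -
  assume a: "nf_equiv t s" "kam\<^sup>*\<^sup>* (t, []) (Abs t', [])" "g \<notin> fv t" "g \<notin> fv s"
  from nf_equiv_abs[OF a(1,2)] obtain s' f where s': "kam\<^sup>*\<^sup>* (s, []) (Abs s', [])"
    "f \<notin> fv t' \<union> fv s'"
    "nf_equiv (open_at 0 (FVar f) t') (open_at 0 (FVar f) s')" by blast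
  have "fv t' \<subseteq> fv t" using kams_fv_pairs[OF a(2)] by simp
  moreover have "fv s' \<subseteq> fv s" using kams_fv_pairs[OF s'(1)] by simp
  ultimately have "g \<notin> fv t' \<union> fv s'" using a(3,4) by blast
  then show ?thesis using nf_equiv_rename[OF s'(3) s'(2)] s'(1) by blast
qed

abbreviation opn :: "nat \<Rightarrow> lterm \<Rightarrow> lterm" where "opn m t \<equiv> open_at 0 (FVar m) t"

section \<open>Families of states reached by the translation\<close>

text \<open>kam_states t \<pi> n collects the eval state representing the configuration (t, \<pi>) and the
  intermediate states of the communications that perform its next KAM step.\<close>

definition kam_states :: "lterm \<Rightarrow> lterm list \<Rightarrow> nat \<Rightarrow> proc multiset set" where
  "kam_states t \<pi> n = {eval_st P S n | P S. represents [] P t \<and> represents_stack S \<pi>}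
   \<union> {M. \<exists>t1 u \<pi>2 j B P2 S1. t = Abs t1 \<and> \<pi> = u # \<pi>2 \<and> represents [j] B t1 \<and> represents [] P2 u \<and>
         represents_stack S1 \<pi>2 \<and> (M = grab1_st j B P2 S1 n \<or>
           M = grab2_st (subst B (PL j) P2) S1 n)}
   \<union> {M. \<exists>t1 j B. t = Abs t1 \<and> \<pi> = [] \<and> represents [j] B t1 \<and>
         (M = abs_nil_st j B n \<or> M = lambda_wait_st j B n)}"

lemma kam_states_eval: "represents [] P t \<Longrightarrow> represents_stack S \<pi> \<Longrightarrow> eval_st P S n \<in> kam_states t \<pi> n"
  unfolding kam_states_def by blast

lemma kam_App: "kam (App t s, \<pi>) c \<longleftrightarrow> c = (t, s # \<pi>)"
  by (auto elim: kam.cases intro: kam.push)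

lemma kam_Abs_Cons: "kam (Abs t, u # \<pi>) c \<longleftrightarrow> c = (open_at 0 u t, \<pi>)"
  by (auto elim: kam.cases intro: kam.grab)

lemma grab2_to_eval:
  "represents [j] B t \<Longrightarrow> represents [] P2 u \<Longrightarrow>
   mtau (grab2_st (subst B (PL j) P2) S1 n) (eval_st (subst B (PL j) P2) S1 n)"
  using grab2_step represents_closed_thread[OF represents_subst0] by blast

lemma eval_st_step:
  assumes P: "represents [] P t1" and S: "represents_stack S \<pi>1" and st: "mtau (eval_st P S n) M'"
  shows "M' \<in> kam_states t1 \<pi>1 n \<or> (\<exists>t2 \<pi>2. kam (t1, \<pi>1) (t2, \<pi>2) \<and> M' \<in> kam_states t2 \<pi>2 n)"
  using represents_cases[OF P]
proof (elim disjE exE conjE)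
  fix f assume "P = num f"
  then show ?thesis using st eval_num_stuck by blast
next
  fix ta tb P1 P2 assume a: "t1 = App ta tb" "P = tr_app P1 P2" "represents [] P1 ta"
    "represents [] P2 tb"
  have "M' = eval_st P1 (Par (Out ''hd'' P2) (Out ''c'' S)) n"
    using st a eval_app_step represents_closed_thread[OF a(3)] represents_closed_thread[OF a(4)]
      represents_stack_closed[OF S] by auto
  moreover have "represents_stack (Par (Out ''hd'' P2) (Out ''c'' S)) (tb # \<pi>1)"
    using a S by (auto intro: represents_stack.rep_cons)
  ultimately show ?thesis using kam_states_eval[OF a(3)] a(1) kam_App by blast
next
  fix ta j B assume a: "t1 = Abs ta" "P = tr_abs j B" "represents [j] B ta"
  from S show ?thesis
  proof cases
    case rep_nil
    then show ?thesis using st a eval_abs_nil_step represents_abs_body unfolding kam_states_def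
      by auto
  next
    case (rep_cons P2 u S1 \<pi>2)
    then show ?thesis using st a eval_abs_cons_step represents_abs_body unfolding kam_states_def
      by auto
  qed
qed

lemma kam_states_step:
  assumes M: "M \<in> kam_states t1 \<pi>1 n" and st: "mtau M M'"
  shows "M' \<in> kam_states t1 \<pi>1 n \<or> (\<exists>t2 \<pi>2. kam (t1, \<pi>1) (t2, \<pi>2) \<and> M' \<in> kam_states t2 \<pi>2 n)"
  using M[unfolded kam_states_def]
proof (elim UnE CollectE exE conjE disjE)
  fix P S assume "M = eval_st P S n" "represents [] P t1" "represents_stack S \<pi>1"
  then show ?thesis using eval_st_step st by blast
next
  fix ta u \<pi>2 j B P2 S1 assume "t1 = Abs ta" "\<pi>1 = u # \<pi>2" "represents [j] B ta"
    "represents [] P2 u"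
    "represents_stack S1 \<pi>2" "M = grab1_st j B P2 S1 n"
  then show ?thesis using st grab1_step unfolding kam_states_def by auto
next
  fix ta u \<pi>2 j B P2 S1 assume a: "t1 = Abs ta" "\<pi>1 = u # \<pi>2" "represents [j] B ta"
    "represents [] P2 u"
    "represents_stack S1 \<pi>2" "M = grab2_st (subst B (PL j) P2) S1 n"
  have c: "represents [] (subst B (PL j) P2) (open_at 0 u ta)" using represents_subst0 a by blast
  then have "M' = eval_st (subst B (PL j) P2) S1 n"
    using a st grab2_step represents_closed_thread[OF c] by auto
  then show ?thesis using a c kam_states_eval kam_Abs_Cons by blast
next
  fix ta j B assume "t1 = Abs ta" "\<pi>1 = []" "represents [j] B ta" "M = abs_nil_st j B n"
  then show ?thesis using st abs_nil_step unfolding kam_states_def by auto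
next
  fix ta j B assume "M = lambda_wait_st j B n"
  then show ?thesis using st lambda_wait_stuck by auto
qed

lemma eval_st_progress:
  assumes P: "represents [] P t1" and S: "represents_stack S \<pi>1" and k: "kam (t1, \<pi>1) (t2, \<pi>2)"
  shows "\<exists>M2 \<in> kam_states t2 \<pi>2 n. mtau\<^sup>*\<^sup>* (eval_st P S n) M2"
  using represents_cases[OF P]
proof (elim disjE exE conjE)
  fix f assume "t1 = FVar f"
  then show ?thesis using k kam_fvar_final by blast
next
  fix ta tb P1 P2 assume a: "t1 = App ta tb" "P = tr_app P1 P2" "represents [] P1 ta"
    "represents [] P2 tb"
  have "mtau (eval_st P S n) (eval_st P1 (Par (Out ''hd'' P2) (Out ''c'' S)) n)"
    using a eval_app_step represents_closed_thread[OF a(3)] represents_closed_thread[OF a(4)]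
      represents_stack_closed[OF S] by auto
  moreover have "represents_stack (Par (Out ''hd'' P2) (Out ''c'' S)) (tb # \<pi>1)"
    using a S by (auto intro: represents_stack.rep_cons)
  moreover have "(t2, \<pi>2) = (ta, tb # \<pi>1)" using k a(1) kam_App by simp
  ultimately show ?thesis using kam_states_eval[OF a(3)] by auto
next
  fix ta j B assume a: "t1 = Abs ta" "P = tr_abs j B" "represents [j] B ta"
  from S show ?thesis
  proof cases
    case rep_nil
    then show ?thesis using k a kam_abs_nil_final by blast
  next
    case (rep_cons P2 u S1 \<pi>3)
    then have P2: "represents [] P2 u" and S1: "represents_stack S1 \<pi>3" and \<pi>1: "\<pi>1 = u # \<pi>3"
      and "S = Par (Out ''hd'' P2) (Out ''c'' S1)" by auto
    then have 1: "mtau (eval_st P S n) (grab1_st j B P2 S1 n)"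
      using a eval_abs_cons_step represents_abs_body by auto
    have 2: "mtau (grab1_st j B P2 S1 n) (grab2_st (subst B (PL j) P2) S1 n)" using grab1_step
      by auto
    have "mtau\<^sup>*\<^sup>* (eval_st P S n) (eval_st (subst B (PL j) P2) S1 n)"
      using r_into_rtranclp[of mtau, OF 1] 2 grab2_to_eval[OF a(3) P2]
      by (blast intro: rtranclp.rtrancl_into_rtrancl)
    moreover have "(t2, \<pi>2) = (open_at 0 u ta, \<pi>3)" using k a(1) \<pi>1 kam_Abs_Cons by simp
    ultimately show ?thesis using kam_states_eval[OF represents_subst0[OF a(3) P2] S1] by auto
  qed
qed

lemma kam_states_progress:
  assumes M: "M \<in> kam_states t1 \<pi>1 n" and k: "kam (t1, \<pi>1) (t2, \<pi>2)"
  shows "\<exists>M2 \<in> kam_states t2 \<pi>2 n. mtau\<^sup>*\<^sup>* M M2"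
  using M[unfolded kam_states_def]
proof (elim UnE CollectE exE conjE)
  fix P S assume "M = eval_st P S n" "represents [] P t1" "represents_stack S \<pi>1"
  then show ?thesis using eval_st_progress k by blast
next
  fix ta u \<pi>3 j B P2 S1 assume a: "t1 = Abs ta" "\<pi>1 = u # \<pi>3" "represents [j] B ta"
    "represents [] P2 u"
    "represents_stack S1 \<pi>3" and M: "M = grab1_st j B P2 S1 n \<or>
      M = grab2_st (subst B (PL j) P2) S1 n"
  have c: "represents [] (subst B (PL j) P2) (open_at 0 u ta)" using represents_subst0 a by blast
  have 2: "mtau (grab2_st (subst B (PL j) P2) S1 n) (eval_st (subst B (PL j) P2) S1 n)"
    using grab2_to_eval[OF a(3,4)] .
  have 1: "mtau (grab1_st j B P2 S1 n) (grab2_st (subst B (PL j) P2) S1 n)" using grab1_step by auto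
  have "mtau\<^sup>*\<^sup>* M (eval_st (subst B (PL j) P2) S1 n)"
    using M r_into_rtranclp[of mtau, OF 1] r_into_rtranclp[of mtau, OF 2] 2
    by (blast intro: rtranclp.rtrancl_into_rtrancl)
  moreover have "(t2, \<pi>2) = (open_at 0 u ta, \<pi>3)" using k a(1,2) kam_Abs_Cons by simp
  ultimately show ?thesis using kam_states_eval[OF c a(5)] by auto
next
  fix ta j B assume "t1 = Abs ta" "\<pi>1 = []"
  then show ?thesis using k kam_abs_nil_final by blast
qed

definition eval_states :: "lterm \<Rightarrow> nat \<Rightarrow> proc multiset set" where
  "eval_states t n = {M. \<exists>t1 \<pi>1. kam\<^sup>*\<^sup>* (t, []) (t1, \<pi>1) \<and> M \<in> kam_states t1 \<pi>1 n}"

lemma eval_states_step: "M \<in> eval_states t n \<Longrightarrow> mtau M M' \<Longrightarrow> M' \<in> eval_states t n"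
proof -
  assume "M \<in> eval_states t n" "mtau M M'"
  then obtain t1 \<pi>1 where a: "kam\<^sup>*\<^sup>* (t, []) (t1, \<pi>1)" "M \<in> kam_states t1 \<pi>1 n"
    unfolding eval_states_def by blast
  from kam_states_step[OF a(2) \<open>mtau M M'\<close>] show ?thesis
  proof
    assume "M' \<in> kam_states t1 \<pi>1 n" then show ?thesis using a unfolding eval_states_def by blast
  next
    assume "\<exists>t2 \<pi>2. kam (t1, \<pi>1) (t2, \<pi>2) \<and> M' \<in> kam_states t2 \<pi>2 n"
    then obtain t2 \<pi>2 where "kam (t1, \<pi>1) (t2, \<pi>2)" "M' \<in> kam_states t2 \<pi>2 n" by blast
    moreover have "kam\<^sup>*\<^sup>* (t, []) (t2, \<pi>2)" using a(1) \<open>kam (t1, \<pi>1) (t2, \<pi>2)\<close>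
      by (rule rtranclp.rtrancl_into_rtrancl)
    ultimately show ?thesis unfolding eval_states_def by blast
  qed
qed

lemma kam_states_kams: "kam\<^sup>*\<^sup>* c1 c2 \<Longrightarrow> M \<in> kam_states (fst c1) (snd c1) n \<Longrightarrow>
  \<exists>M2 \<in> kam_states (fst c2) (snd c2) n. mtau\<^sup>*\<^sup>* M M2"
proof (induction arbitrary: M rule: converse_rtranclp_induct)
  case base then show ?case by blast
next
  case (step c1 c1')
  obtain M1 where "M1 \<in> kam_states (fst c1') (snd c1') n" "mtau\<^sup>*\<^sup>* M M1"
    using kam_states_progress[OF step(4), of "fst c1'" "snd c1'"] step(1) by auto
  then show ?case using step(3)[OF \<open>M1 \<in> _\<close>] by (meson rtranclp_trans)
qed

lemma eval_states_to_abs: "M \<in> eval_states t n \<Longrightarrow> kam\<^sup>*\<^sup>* (t, []) (Abs t', []) \<Longrightarrow>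
  \<exists>j B. represents [j] B t' \<and> mtau\<^sup>*\<^sup>* M (lambda_wait_st j B n)"
proof -
  assume "M \<in> eval_states t n" "kam\<^sup>*\<^sup>* (t, []) (Abs t', [])"
  then obtain t1 \<pi>1 where a: "kam\<^sup>*\<^sup>* (t, []) (t1, \<pi>1)" "M \<in> kam_states t1 \<pi>1 n"
    unfolding eval_states_def by blast
  have "kam\<^sup>*\<^sup>* (t1, \<pi>1) (Abs t', [])"
    using kam_final[OF a(1) \<open>kam\<^sup>*\<^sup>* (t, []) (Abs t', [])\<close>] kam_abs_nil_final by blast
  from kam_states_kams[OF this] a(2) obtain M2 where m2: "M2 \<in> kam_states (Abs t') [] n"
    "mtau\<^sup>*\<^sup>* M M2" by auto
  from m2(1)[unfolded kam_states_def] show ?thesis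
  proof (elim UnE CollectE exE conjE disjE)
    fix P S assume e: "M2 = eval_st P S n" "represents [] P (Abs t')" "represents_stack S []"
    then have "S = tr_empty" by (auto elim: represents_stack.cases)
    from represents_cases[OF e(2)] obtain j B where jb: "P = tr_abs j B" "represents [j] B t'"
      by auto
    have "mtau M2 (abs_nil_st j B n)"
      using e jb \<open>S = tr_empty\<close> eval_abs_nil_step represents_abs_body by auto
    moreover have "mtau (abs_nil_st j B n) (lambda_wait_st j B n)" using abs_nil_step by auto
    ultimately show ?thesis using m2(2) jb(2)
      by (meson rtranclp.rtrancl_into_rtrancl)
  next
    fix t1 j B assume "Abs t' = Abs t1" "[] = []" "represents [j] B t1" "M2 = abs_nil_st j B n"
    moreover have "mtau (abs_nil_st j B n) (lambda_wait_st j B n)" using abs_nil_step by auto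
    ultimately show ?thesis using m2(2) by (metis rtranclp.rtrancl_into_rtrancl lterm.inject)
  next
    fix t1 j B assume "Abs t' = Abs t1" "[] = []" "represents [j] B t1" "M2 = lambda_wait_st j B n"
    then show ?thesis using m2(2) by auto
  qed (auto)
qed

lemma eval_states_to_var: "M \<in> eval_states t n \<Longrightarrow> kam\<^sup>*\<^sup>* (t, []) (FVar f, \<pi>) \<Longrightarrow>
  \<exists>S. represents_stack S \<pi> \<and> mtau\<^sup>*\<^sup>* M (eval_st (num f) S n)"
proof -
  assume "M \<in> eval_states t n" "kam\<^sup>*\<^sup>* (t, []) (FVar f, \<pi>)"
  then obtain t1 \<pi>1 where a: "kam\<^sup>*\<^sup>* (t, []) (t1, \<pi>1)" "M \<in> kam_states t1 \<pi>1 n"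
    unfolding eval_states_def by blast
  have "kam\<^sup>*\<^sup>* (t1, \<pi>1) (FVar f, \<pi>)"
    using kam_final[OF a(1) \<open>kam\<^sup>*\<^sup>* (t, []) (FVar f, \<pi>)\<close>] kam_fvar_final by blast
  from kam_states_kams[OF this] a(2) obtain M2 where m2: "M2 \<in> kam_states (FVar f) \<pi> n"
    "mtau\<^sup>*\<^sup>* M M2" by auto
  from m2(1)[unfolded kam_states_def] show ?thesis
  proof (elim UnE CollectE exE conjE disjE)
    fix P S assume e: "M2 = eval_st P S n" "represents [] P (FVar f)" "represents_stack S \<pi>"
    from represents_cases[OF e(2)] have "P = num f" by auto
    then show ?thesis using e m2(2) by blast
  qed auto
qed

lemma outs_in_H_mbarb: "outs_in_H M \<Longrightarrow> mbarb H M \<mu> \<longleftrightarrow> (\<exists>a x Q. \<mu> = BIn a \<and> (a, x, Q) \<in> flags M)"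
  by (cases \<mu>) (auto simp: outs_in_H_def flags_def)

lemma kam_states_outs: "M \<in> kam_states t \<pi> n \<Longrightarrow> outs_in_H M"
proof -
  assume "M \<in> kam_states t \<pi> n"
  from this[unfolded kam_states_def] show ?thesis
    by (elim UnE CollectE exE conjE disjE)
      (simp_all add: outs_in_H_states outs_in_H_eval represents_not_Out)
qed

lemma eval_states_outs: "M \<in> eval_states t n \<Longrightarrow> outs_in_H M"
  unfolding eval_states_def using kam_states_outs by blast

lemma eval_states_flags: "M \<in> eval_states t n \<Longrightarrow> fl \<in> flags M \<Longrightarrow>
   (\<exists>t' j B. kam\<^sup>*\<^sup>* (t, [])
     (Abs t', []) \<and> represents [j] B t' \<and> M = lambda_wait_st j B n \<and>
     fl = (''lambda'', PW, restart_body)) \<or>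
   (\<exists>f \<pi> S. kam\<^sup>*\<^sup>* (t, []) (FVar f, \<pi>) \<and> represents_stack S \<pi> \<and> M = eval_st (num f) S n)"
proof -
  assume "M \<in> eval_states t n" "fl \<in> flags M"
  then obtain t1 \<pi>1 where a: "kam\<^sup>*\<^sup>* (t, []) (t1, \<pi>1)" "M \<in> kam_states t1 \<pi>1 n"
    unfolding eval_states_def by blast
  from a(2)[unfolded kam_states_def] show ?thesis
  proof (elim UnE CollectE exE conjE disjE)
    fix P S assume e: "M = eval_st P S n" "represents [] P t1" "represents_stack S \<pi>1"
    from represents_cases[OF e(2)] show ?thesis
    proof (elim disjE exE conjE)
      fix f assume "t1 = FVar f" "P = num f"
      then show ?thesis using e a by blast
    qed (use e \<open>fl \<in> flags M\<close> flags_silent in auto)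
  next
    fix ta j B assume "t1 = Abs ta" "\<pi>1 = []" "represents [j] B ta" "M = lambda_wait_st j B n"
    then show ?thesis using a \<open>fl \<in> flags M\<close> flags_lambda_wait by auto
  qed (use \<open>fl \<in> flags M\<close> flags_silent in auto)
qed

text \<open>Evaluation of t starts either after an enter flag, or after a \<lambda>-flag, in which case
  t is the body t' of the abstraction opened with the fresh variable m and the counter has been
  incremented to n = Suc m.\<close>

definition start_states :: "lterm \<Rightarrow> nat \<Rightarrow> proc multiset set" where
  "start_states t n = {enter_st P S1 n | P S1. represents [] P t \<and> (\<exists>\<pi>. represents_stack S1 \<pi>)}
    \<union> {M. \<exists>m t' j B. n = Suc m \<and> t = opn m t' \<and> represents [j] B t' \<and>
          (M = restart1_st j B m \<or> M = restart2_st j B m \<or> M = restart3_st (subst B (PL j)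
            (num m)) m)}"

definition run_states :: "lterm \<Rightarrow> nat \<Rightarrow> proc multiset set" where
  "run_states t n = start_states t n \<union> eval_states t n"

lemma eval_states_eval: "represents [] P t \<Longrightarrow> eval_st P tr_empty n \<in> eval_states t n"
  unfolding eval_states_def using kam_states_eval represents_stack.rep_nil by blast

lemma start_states_step: "M \<in> start_states t n \<Longrightarrow> mtau M M' \<Longrightarrow> M' \<in> run_states t n"
proof -
  assume M: "M \<in> start_states t n" and st: "mtau M M'"
  from M[unfolded start_states_def] show ?thesis
  proof (elim UnE CollectE exE conjE disjE)
    fix P S1 \<pi> assume a: "M = enter_st P S1 n" "represents [] P t" "represents_stack S1 \<pi>"
    then have "M' = eval_st P tr_empty n" using st enter_step represents_closed_thread by auto
    then show ?thesis unfolding run_states_def using eval_states_eval a by blast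
  next
    fix m t' j B assume a: "n = Suc m" "t = opn m t'" "represents [j] B t'" "M = restart1_st j B m"
    then have "M' = restart2_st j B m" using st restart1_step by auto
    then show ?thesis unfolding run_states_def start_states_def using a by blast
  next
    fix m t' j B assume a: "n = Suc m" "t = opn m t'" "represents [j] B t'" "M = restart2_st j B m"
    then have "M' = restart3_st (subst B (PL j) (num m)) m" using st restart2_step by auto
    then show ?thesis unfolding run_states_def start_states_def using a by blast
  next
    fix m t' j B assume a: "n = Suc m" "t = opn m t'" "represents [j] B t'"
      "M = restart3_st (subst B (PL j) (num m)) m"
    have c: "represents [] (subst B (PL j) (num m)) t"
      using represents_subst0[OF a(3) represents.rep_num] a(2) by simp
    then have "M' = eval_st (subst B (PL j) (num m)) tr_empty n"
      using st a restart3_step represents_closed_thread by auto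
    then show ?thesis unfolding run_states_def using eval_states_eval c by blast
  qed
qed

lemma start_states_progress: "M \<in> start_states t n \<Longrightarrow>
  \<exists>P. represents [] P t \<and> mtau\<^sup>*\<^sup>* M (eval_st P tr_empty n)"
proof -
  assume M: "M \<in> start_states t n"
  from M[unfolded start_states_def] show ?thesis
  proof (elim UnE CollectE exE conjE disjE)
    fix P S1 \<pi> assume a: "M = enter_st P S1 n" "represents [] P t" "represents_stack S1 \<pi>"
    then have "mtau M (eval_st P tr_empty n)" using enter_step represents_closed_thread by auto
    then show ?thesis using a by blast
  next
    fix m t' j B assume a: "n = Suc m" "t = opn m t'"  "represents [j] B t'"
    have c: "represents [] (subst B (PL j) (num m)) t"
      using represents_subst0[OF a(3) represents.rep_num] a(2) by simp
    have s3: "mtau (restart3_st (subst B (PL j) (num m)) m) (eval_st (subst B (PL j)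
      (num m)) tr_empty n)"
      using a restart3_step represents_closed_thread[OF c] by auto
    have s2: "mtau (restart2_st j B m) (restart3_st (subst B (PL j) (num m)) m)" using restart2_step
      by auto
    have s1: "mtau (restart1_st j B m) (restart2_st j B m)" using restart1_step by auto
    {
      assume "M = restart1_st j B m"
      then show ?thesis using s1 s2 s3 c
        by (meson converse_rtranclp_into_rtranclp rtranclp.rtrancl_refl)
    next
      assume "M = restart2_st j B m"
      then show ?thesis using s2 s3 c
        by (meson converse_rtranclp_into_rtranclp rtranclp.rtrancl_refl)
    next
      assume "M = restart3_st (subst B (PL j) (num m)) m"
      then show ?thesis using s3 c by (meson converse_rtranclp_into_rtranclp rtranclp.rtrancl_refl)
    }
  qed
qed

lemma start_states_flags: "M \<in> start_states t n \<Longrightarrow> flags M = {}"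
  unfolding start_states_def using flags_silent by auto

lemma start_states_outs: "M \<in> start_states t n \<Longrightarrow> outs_in_H M"
  unfolding start_states_def using outs_in_H_states by auto

lemma run_states_step: "M \<in> run_states t n \<Longrightarrow> mtau M M' \<Longrightarrow> M' \<in> run_states t n"
proof -
  assume a: "M \<in> run_states t n" "mtau M M'"
  show ?thesis
  proof (cases "M \<in> start_states t n")
    case True then show ?thesis using start_states_step a(2) by blast
  next
    case False then have "M \<in> eval_states t n" using a(1) unfolding run_states_def by blast
    then show ?thesis using eval_states_step[OF _ a(2)] unfolding run_states_def by blast
  qed
qed

lemma run_states_eval_states: "M \<in> run_states t n \<Longrightarrow> \<exists>M'. mtau\<^sup>*\<^sup>* M M' \<and> M' \<in> eval_states t n"
proof -
  assume a: "M \<in> run_states t n"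
  show ?thesis
  proof (cases "M \<in> start_states t n")
    case True
    then obtain P where "represents [] P t" "mtau\<^sup>*\<^sup>* M (eval_st P tr_empty n)"
      using start_states_progress by blast
    then show ?thesis using eval_states_eval by blast
  next
    case False then show ?thesis using a unfolding run_states_def by blast
  qed
qed

lemma run_states_to_abs: "M \<in> run_states t n \<Longrightarrow> kam\<^sup>*\<^sup>* (t, []) (Abs t', []) \<Longrightarrow>
  \<exists>j B. represents [j] B t' \<and> mtau\<^sup>*\<^sup>* M (lambda_wait_st j B n)"
proof -
  assume a: "M \<in> run_states t n" "kam\<^sup>*\<^sup>* (t, []) (Abs t', [])"
  obtain M1 where m1: "mtau\<^sup>*\<^sup>* M M1" "M1 \<in> eval_states t n" using run_states_eval_states[OF a(1)]
    by blast
  obtain j B where "represents [j] B t'" "mtau\<^sup>*\<^sup>* M1 (lambda_wait_st j B n)"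
    using eval_states_to_abs[OF m1(2) a(2)] by blast
  then show ?thesis using rtranclp_trans[OF m1(1)] by blast
qed

lemma run_states_to_var: "M \<in> run_states t n \<Longrightarrow> kam\<^sup>*\<^sup>* (t, []) (FVar f, \<pi>) \<Longrightarrow>
  \<exists>S. represents_stack S \<pi> \<and> mtau\<^sup>*\<^sup>* M (eval_st (num f) S n)"
proof -
  assume a: "M \<in> run_states t n" "kam\<^sup>*\<^sup>* (t, []) (FVar f, \<pi>)"
  obtain M1 where m1: "mtau\<^sup>*\<^sup>* M M1" "M1 \<in> eval_states t n" using run_states_eval_states[OF a(1)]
    by blast
  obtain S where "represents_stack S \<pi>" "mtau\<^sup>*\<^sup>* M1 (eval_st (num f) S n)"
    using eval_states_to_var[OF m1(2) a(2)] by blast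
  then show ?thesis using rtranclp_trans[OF m1(1)] by blast
qed

lemma run_states_outs: "M \<in> run_states t n \<Longrightarrow> outs_in_H M"
  unfolding run_states_def using start_states_outs[of M t n] eval_states_outs[of M t n] by blast

lemma run_states_flags: "M \<in> run_states t n \<Longrightarrow> fl \<in> flags M \<Longrightarrow>
   (\<exists>t' j B. kam\<^sup>*\<^sup>* (t, [])
     (Abs t', []) \<and> represents [j] B t' \<and> M = lambda_wait_st j B n \<and>
     fl = (''lambda'', PW, restart_body)) \<or>
   (\<exists>f \<pi> S. kam\<^sup>*\<^sup>* (t, []) (FVar f, \<pi>) \<and> represents_stack S \<pi> \<and> M = eval_st (num f) S n)"
proof -
  assume a: "M \<in> run_states t n" "fl \<in> flags M"
  then have "M \<in> eval_states t n" unfolding run_states_def using start_states_flags[of M t n]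
    by auto
  then show ?thesis using eval_states_flags[OF _ a(2)] by blast
qed

text \<open>When a variable has been counted down to z, the machine switches to continuation mode and
  traverses the stack \<pi>: for each component, an internal choice either enters it (enter_states)
  or skips to the rest of the stack (skip_states).\<close>

definition cont_states :: "lterm list \<Rightarrow> nat \<Rightarrow> proc multiset set" where
  "cont_states \<pi> n = {M. \<exists>S. represents_stack S \<pi> \<and> (M = init_st S n \<or> M = rec_st S n \<or>
    M = cont_st S n)}
    \<union> {M. \<exists>u \<pi>' P S1. \<pi> = u # \<pi>' \<and> represents [] P u \<and> represents_stack S1 \<pi>' \<and>
      (M = cont_hd_st P S1 n \<or> M = cont_b_st P S1 n \<or> M = choice_st P S1 n)}
    \<union> {M. \<pi> = [] \<and> (M = done_b_st n \<or> M = done_wait_st n)}"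

definition enter_states :: "lterm \<Rightarrow> lterm list \<Rightarrow> nat \<Rightarrow> proc multiset set" where
  "enter_states u \<pi> n = {M. \<exists>P S1. represents [] P u \<and> represents_stack S1 \<pi> \<and>
    (M = chose_enter_st P S1 n \<or> M = enter_wait_st P S1 n)}"

definition skip_states :: "lterm list \<Rightarrow> nat \<Rightarrow> proc multiset set" where
  "skip_states \<pi> n = {M. \<exists>P u S1. represents [] P u \<and> represents_stack S1 \<pi> \<and>
    (M = chose_skip_st P S1 n \<or> M = skip_wait_st S1 n)}"

definition var_states :: "nat \<Rightarrow> lterm list \<Rightarrow> nat \<Rightarrow> proc multiset set" where
  "var_states f \<pi> n = {eval_st (num f) S n | S. represents_stack S \<pi>}"

lemma cont_states_init: "represents_stack S \<pi> \<Longrightarrow> init_st S n \<in> cont_states \<pi> n"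
  unfolding cont_states_def by blast

lemma cont_states_step: "M \<in> cont_states \<pi> n \<Longrightarrow> mtau M M' \<Longrightarrow> M' \<in> cont_states \<pi> n \<or>
   (\<exists>u \<pi>' P S1. \<pi> = u # \<pi>' \<and> represents [] P u \<and> represents_stack S1 \<pi>' \<and> M = choice_st P S1 n \<and>
     (M' = chose_enter_st P S1 n \<or> M' = chose_skip_st P S1 n))"
proof -
  assume M: "M \<in> cont_states \<pi> n" and st: "mtau M M'"
  from M[unfolded cont_states_def] show ?thesis
  proof (elim UnE CollectE exE conjE disjE)
    fix S assume "represents_stack S \<pi>" "M = init_st S n"
    then show ?thesis using st init_step unfolding cont_states_def by auto
  next
    fix S assume "represents_stack S \<pi>" "M = rec_st S n"
    then show ?thesis using st rec_step unfolding cont_states_def by auto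
  next
    fix S assume a: "represents_stack S \<pi>" "M = cont_st S n"
    from a(1) show ?thesis
    proof (cases rule: represents_stack.cases)
      case rep_nil then show ?thesis using st a cont_nil_step unfolding cont_states_def by auto
    next
      case (rep_cons P u S1 \<pi>')
      then show ?thesis using st a cont_cons_step unfolding cont_states_def by auto
    qed
  next
    fix u \<pi>' P S1 assume "\<pi> = u # \<pi>'" "represents [] P u" "represents_stack S1 \<pi>'"
      "M = cont_hd_st P S1 n"
    then show ?thesis using st cont_hd_step unfolding cont_states_def by auto
  next
    fix u \<pi>' P S1 assume "\<pi> = u # \<pi>'" "represents [] P u" "represents_stack S1 \<pi>'"
      "M = cont_b_st P S1 n"
    then show ?thesis using st cont_b_step unfolding cont_states_def by auto
  next
    fix u \<pi>' P S1 assume "\<pi> = u # \<pi>'" "represents [] P u" "represents_stack S1 \<pi>'"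
      "M = choice_st P S1 n"
    then show ?thesis using st choice_step by blast
  next
    assume "\<pi> = []" "M = done_b_st n"
    then show ?thesis using st done_b_step unfolding cont_states_def by auto
  next
    assume "\<pi> = []" "M = done_wait_st n"
    then show ?thesis using st done_wait_stuck by auto
  qed
qed

lemmas init_to_rec = init_step[THEN iffD2, OF refl]

lemmas rec_to_cont = rec_step[THEN iffD2, OF refl]

lemmas cont_to_cont_hd = cont_cons_step[THEN iffD2, OF refl]

lemmas cont_to_done_b = cont_nil_step[THEN iffD2, OF refl]

lemmas cont_hd_to_cont_b = cont_hd_step[THEN iffD2, OF refl]

lemmas cont_b_to_choice = cont_b_step[THEN iffD2, OF refl]

lemmas done_b_to_done_wait = done_b_step[THEN iffD2, OF refl]

lemmas chose_enter_to_wait = chose_enter_step[THEN iffD2, OF refl]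

lemmas chose_skip_to_wait = chose_skip_step[THEN iffD2, OF refl]

lemma choice_to_chose_enter: "mtau (choice_st P S1 n) (chose_enter_st P S1 n)"
  by (simp add: choice_step)

lemma choice_to_chose_skip: "mtau (choice_st P S1 n) (chose_skip_st P S1 n)"
  by (simp add: choice_step)

lemma cont_states_to_choice: "M \<in> cont_states (u # \<pi>') n \<Longrightarrow>
  \<exists>P S1. represents [] P u \<and> represents_stack S1 \<pi>' \<and> mtau\<^sup>*\<^sup>* M (choice_st P S1 n)"
proof -
  assume M: "M \<in> cont_states (u # \<pi>') n"
  have fromZ3: "mtau\<^sup>*\<^sup>* (cont_hd_st P S1 n) (choice_st P S1 n)" for P S1
    by (rule converse_rtranclp_into_rtranclp[of mtau, OF cont_hd_to_cont_b r_into_rtranclp[of mtau,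
      OF cont_b_to_choice]])
  have fromZ2: "\<exists>P S1. represents [] P u \<and> represents_stack S1 \<pi>' \<and> mtau\<^sup>*\<^sup>* (cont_st S n)
    (choice_st P S1 n)" if "represents_stack S (u # \<pi>')" for S
  proof -
    from that obtain P S1 where "S = Par (Out ''hd'' P) (Out ''c'' S1)" "represents [] P u"
      "represents_stack S1 \<pi>'"
      by (cases rule: represents_stack.cases) auto
    then show ?thesis using converse_rtranclp_into_rtranclp[of mtau, OF cont_to_cont_hd fromZ3]
      by blast
  qed
  from M[unfolded cont_states_def] show ?thesis
  proof (elim UnE CollectE exE conjE disjE)
    fix S assume "represents_stack S (u # \<pi>')" "M = init_st S n"
    then show ?thesis
      using fromZ2 converse_rtranclp_into_rtranclp[of mtau,
      OF init_to_rec converse_rtranclp_into_rtranclp[of mtau, OF rec_to_cont]] by metis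
  next
    fix S assume "represents_stack S (u # \<pi>')" "M = rec_st S n"
    then show ?thesis using fromZ2 converse_rtranclp_into_rtranclp[of mtau, OF rec_to_cont] by metis
  next
    fix S assume "represents_stack S (u # \<pi>')" "M = cont_st S n"
    then show ?thesis using fromZ2 by metis
  next
    fix u1 \<pi>1 P S1 assume "u # \<pi>' = u1 # \<pi>1" "represents [] P u1" "represents_stack S1 \<pi>1"
      "M = cont_hd_st P S1 n"
    then show ?thesis using fromZ3 by blast
  next
    fix u1 \<pi>1 P S1 assume "u # \<pi>' = u1 # \<pi>1" "represents [] P u1" "represents_stack S1 \<pi>1"
      "M = cont_b_st P S1 n"
    then show ?thesis using r_into_rtranclp[of mtau, OF cont_b_to_choice] by blast
  next
    fix u1 \<pi>1 P S1 assume "u # \<pi>' = u1 # \<pi>1" "represents [] P u1" "represents_stack S1 \<pi>1"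
      "M = choice_st P S1 n"
    then show ?thesis by blast
  qed auto
qed

lemma cont_states_to_done_wait: "M \<in> cont_states [] n \<Longrightarrow> mtau\<^sup>*\<^sup>* M (done_wait_st n)"
proof -
  assume M: "M \<in> cont_states [] n"
  have fromZ2: "mtau\<^sup>*\<^sup>* (cont_st S n) (done_wait_st n)" if "represents_stack S []" for S
  proof -
    have "S = tr_empty" using that by (auto elim: represents_stack.cases)
    then show ?thesis
      using converse_rtranclp_into_rtranclp[of mtau, OF cont_to_done_b r_into_rtranclp[of mtau,
      OF done_b_to_done_wait]] by simp
  qed
  from M[unfolded cont_states_def] show ?thesis
  proof (elim UnE CollectE exE conjE disjE)
    fix S assume "represents_stack S []" "M = init_st S n"
    then show ?thesis
      using fromZ2 converse_rtranclp_into_rtranclp[of mtau,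
      OF init_to_rec converse_rtranclp_into_rtranclp[of mtau, OF rec_to_cont]] by metis
  next
    fix S assume "represents_stack S []" "M = rec_st S n"
    then show ?thesis using fromZ2 converse_rtranclp_into_rtranclp[of mtau, OF rec_to_cont] by metis
  next
    fix S assume "represents_stack S []" "M = cont_st S n"
    then show ?thesis using fromZ2 by metis
  next
    assume "M = done_b_st n" then show ?thesis
      using r_into_rtranclp[of mtau, OF done_b_to_done_wait] by blast
  qed auto
qed

lemma cont_states_flags: "M \<in> cont_states \<pi> n \<Longrightarrow> fl \<in> flags M \<Longrightarrow>
  \<pi> = [] \<and> M = done_wait_st n \<and> fl = (''done'', PW, Nil)"
  unfolding cont_states_def using flags_silent flags_done_wait by auto

lemma cont_states_outs: "M \<in> cont_states \<pi> n \<Longrightarrow> outs_in_H M"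
  unfolding cont_states_def using outs_in_H_states by auto

lemma enter_states_step: "M \<in> enter_states u \<pi> n \<Longrightarrow> mtau M M' \<Longrightarrow> M' \<in> enter_states u \<pi> n"
proof -
  assume "M \<in> enter_states u \<pi> n" "mtau M M'"
  then obtain P S1 where a: "represents [] P u" "represents_stack S1 \<pi>"
    "M = chose_enter_st P S1 n \<or> M = enter_wait_st P S1 n" unfolding enter_states_def by blast
  then have "M' = enter_wait_st P S1 n" using \<open>mtau M M'\<close> chose_enter_step enter_wait_stuck by blast
  then show ?thesis using a unfolding enter_states_def by blast
qed

lemma enter_states_to_wait: "M \<in> enter_states u \<pi> n \<Longrightarrow>
  \<exists>P S1. represents [] P u \<and> represents_stack S1 \<pi> \<and> mtau\<^sup>*\<^sup>* M (enter_wait_st P S1 n)"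
proof -
  assume "M \<in> enter_states u \<pi> n"
  then obtain P S1 where a: "represents [] P u" "represents_stack S1 \<pi>"
    "M = chose_enter_st P S1 n \<or> M = enter_wait_st P S1 n" unfolding enter_states_def by blast
  then have "mtau\<^sup>*\<^sup>* M (enter_wait_st P S1 n)"
    using r_into_rtranclp[of mtau, OF chose_enter_to_wait] by blast
  then show ?thesis using a by blast
qed

lemma enter_states_flags: "M \<in> enter_states u \<pi> n \<Longrightarrow> fl \<in> flags M \<Longrightarrow>
   \<exists>P S1. represents [] P u \<and> represents_stack S1 \<pi> \<and> M = enter_wait_st P S1 n \<and>
     fl = (''enter'', PW, Inp ''c'' PW (Par P (Out ''c'' tr_empty)))"
proof -
  assume "M \<in> enter_states u \<pi> n" "fl \<in> flags M"
  then obtain P S1 where a: "represents [] P u" "represents_stack S1 \<pi>"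
    "M = chose_enter_st P S1 n \<or> M = enter_wait_st P S1 n" unfolding enter_states_def by blast
  then have "M = enter_wait_st P S1 n" using \<open>fl \<in> flags M\<close> flags_silent by auto
  then show ?thesis using a \<open>fl \<in> flags M\<close> flags_enter_wait by auto
qed

lemma enter_states_outs: "M \<in> enter_states u \<pi> n \<Longrightarrow> outs_in_H M"
  unfolding enter_states_def using outs_in_H_states by auto

lemma skip_states_step: "M \<in> skip_states \<pi> n \<Longrightarrow> mtau M M' \<Longrightarrow> M' \<in> skip_states \<pi> n"
proof -
  assume "M \<in> skip_states \<pi> n" "mtau M M'"
  then obtain P u S1 where a: "represents [] P u" "represents_stack S1 \<pi>"
    "M = chose_skip_st P S1 n \<or> M = skip_wait_st S1 n" unfolding skip_states_def by blast
  then have "M' = skip_wait_st S1 n" using \<open>mtau M M'\<close> chose_skip_step skip_wait_stuck by blast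
  then show ?thesis using a unfolding skip_states_def by blast
qed

lemma skip_states_to_wait: "M \<in> skip_states \<pi> n \<Longrightarrow>
  \<exists>S1. represents_stack S1 \<pi> \<and> mtau\<^sup>*\<^sup>* M (skip_wait_st S1 n)"
proof -
  assume "M \<in> skip_states \<pi> n"
  then obtain P u S1 where a: "represents [] P u" "represents_stack S1 \<pi>"
    "M = chose_skip_st P S1 n \<or> M = skip_wait_st S1 n" unfolding skip_states_def by blast
  then have "mtau\<^sup>*\<^sup>* M (skip_wait_st S1 n)" using r_into_rtranclp[of mtau, OF chose_skip_to_wait]
    by blast
  then show ?thesis using a by blast
qed

lemma skip_states_flags: "M \<in> skip_states \<pi> n \<Longrightarrow> fl \<in> flags M \<Longrightarrow>
   \<exists>S1. represents_stack S1 \<pi> \<and> M = skip_wait_st S1 n \<and> fl = (''skip'', PW, Out ''init'' Nil)"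
proof -
  assume "M \<in> skip_states \<pi> n" "fl \<in> flags M"
  then obtain P u S1 where a: "represents [] P u" "represents_stack S1 \<pi>"
    "M = chose_skip_st P S1 n \<or> M = skip_wait_st S1 n" unfolding skip_states_def by blast
  then have "M = skip_wait_st S1 n" using \<open>fl \<in> flags M\<close> flags_silent by auto
  then show ?thesis using a \<open>fl \<in> flags M\<close> flags_skip_wait by auto
qed

lemma skip_states_outs: "M \<in> skip_states \<pi> n \<Longrightarrow> outs_in_H M"
  unfolding skip_states_def using outs_in_H_states by auto

lemma var_states_stuck: "M \<in> var_states f \<pi> n \<Longrightarrow> \<not> mtau M M'"
  unfolding var_states_def using eval_num_stuck by auto

lemma var_states_outs: "M \<in> var_states f \<pi> n \<Longrightarrow> outs_in_H M"
  unfolding var_states_def using outs_in_H_eval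
    by (auto simp: num.simps) (metis num.elims proc.distinct(1))

section \<open>Soundness\<close>

inductive sound_rel :: "proc multiset \<Rightarrow> proc multiset \<Rightarrow> bool" where
  run: "nf_equiv t s \<Longrightarrow> \<forall>f \<in> fv t \<union> fv s. f < n \<Longrightarrow> A \<in> run_states t n \<Longrightarrow> A' \<in> run_states s n \<Longrightarrow>
    sound_rel A A'"
| var: "list_all2 nf_equiv \<pi> \<pi>' \<Longrightarrow> \<forall>f \<in> fv_list \<pi> \<union> fv_list \<pi>'. f < n \<Longrightarrow>
    A \<in> var_states f \<pi> n \<Longrightarrow> A' \<in> var_states f \<pi>' n \<Longrightarrow> sound_rel A A'"
| cont: "list_all2 nf_equiv \<pi> \<pi>' \<Longrightarrow> \<forall>f \<in> fv_list \<pi> \<union> fv_list \<pi>'. f < n \<Longrightarrow>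
    A \<in> cont_states \<pi> n \<Longrightarrow> A' \<in> cont_states \<pi>' n \<Longrightarrow> sound_rel A A'"
| enter: "nf_equiv u u' \<Longrightarrow> \<forall>f \<in> fv u \<union> fv u'. f < n \<Longrightarrow>
    A \<in> enter_states u \<pi> n \<Longrightarrow> A' \<in> enter_states u' \<pi>' n \<Longrightarrow> sound_rel A A'"
| skip: "list_all2 nf_equiv \<pi> \<pi>' \<Longrightarrow> \<forall>f \<in> fv_list \<pi> \<union> fv_list \<pi>'. f < n \<Longrightarrow>
    A \<in> skip_states \<pi> n \<Longrightarrow> A' \<in> skip_states \<pi>' n \<Longrightarrow> sound_rel A A'"
| dead: "sound_rel (dead_st n) (dead_st n')"

lemma sound_rel_sym: "sound_rel A A' \<Longrightarrow> sound_rel A' A"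
proof (induction rule: sound_rel.induct)
  case (run t s n A A')
  then show ?case by (intro sound_rel.run[of s t]) (auto intro: nf_equiv_sym)
next
  case (var \<pi> \<pi>' n A f A')
  then show ?case by (intro sound_rel.var[of \<pi>' \<pi>]) (auto intro: list_all2_nf_equiv_sym)
next
  case (cont \<pi> \<pi>' n A A')
  then show ?case by (intro sound_rel.cont[of \<pi>' \<pi>]) (auto intro: list_all2_nf_equiv_sym)
next
  case (enter u u' n A \<pi> A' \<pi>')
  then show ?case by (intro sound_rel.enter[of u' u]) (auto intro: nf_equiv_sym)
next
  case (skip \<pi> \<pi>' n A A')
  then show ?case by (intro sound_rel.skip[of \<pi>' \<pi>]) (auto intro: list_all2_nf_equiv_sym)
qed (rule sound_rel.dead)

definition input_ok :: "proc multiset \<Rightarrow> proc multiset \<Rightarrow> bool" where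
  "input_ok A A' \<longleftrightarrow>
    (\<forall>a x Q. (a, x, Q) \<in> flags A \<longrightarrow> (\<exists>W' x' Q'. mtau\<^sup>*\<^sup>* A' W' \<and> (a, x', Q') \<in> flags W' \<and>
      (\<forall>R. sound_rel (A - {#Inp a x Q#} + threads (subst Q x R))
        (W' - {#Inp a x' Q'#} + threads (subst Q' x' R)))))"

definition tau_ok :: "proc multiset \<Rightarrow> proc multiset \<Rightarrow> bool" where
  "tau_ok A A' \<longleftrightarrow> (\<forall>A1. mtau A A1 \<longrightarrow> (\<exists>A1'. mtau\<^sup>*\<^sup>* A' A1' \<and> sound_rel A1 A1'))"

text \<open>All flags of the translation discard their argument, so a context input on a flag
  channel leaves a residual that does not depend on what the context sent.\<close>

lemma input_okI:
  assumes "flags A = {(a, PW, Q)}" and "flags W' = {(a, PW, Q')}" and "fvp Q = {}" and "fvp Q' = {}"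
    and "mtau\<^sup>*\<^sup>* A' W'" and "A - {#Inp a PW Q#} + threads Q = B" and
      "W' - {#Inp a PW Q'#} + threads Q' = B'"
    and "sound_rel B B'"
  shows "input_ok A A'"
  unfolding input_ok_def
proof (intro allI impI)
  fix a0 x0 Q0 assume "(a0, x0, Q0) \<in> flags A"
  then have "a0 = a" "x0 = PW" "Q0 = Q" using assms(1) by auto
  then show "\<exists>W' x' Q'. mtau\<^sup>*\<^sup>* A' W' \<and> (a0, x', Q') \<in> flags W' \<and>
      (\<forall>R. sound_rel (A - {#Inp a0 x0 Q0#} + threads (subst Q0 x0 R))
        (W' - {#Inp a0 x' Q'#} + threads (subst Q' x' R)))"
    using assms by (intro exI[of _ W'] exI[of _ PW] exI[of _ Q']) auto
qed

lemma input_ok_mtaus: "input_ok A W \<Longrightarrow> mtau\<^sup>*\<^sup>* A' W \<Longrightarrow> input_ok A A'"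
  unfolding input_ok_def using rtranclp_trans[of mtau A' W] by blast

lemma fv_opn: "fv (opn n t') \<subseteq> fv t' \<union> {n}"
  using fv_open[of 0 "FVar n" t'] by auto

lemma fv_bound_opn:
  assumes "fv t' \<subseteq> fv t" and "fv s' \<subseteq> fv s" and "\<forall>f \<in> fv t \<union> fv s. f < n"
  shows "\<forall>f \<in> fv (opn n t') \<union> fv (opn n s'). f < Suc n"
proof
  fix f assume "f \<in> fv (opn n t') \<union> fv (opn n s')"
  then have "f \<in> fv t \<union> fv s \<or> f = n" using fv_opn[of n t'] fv_opn[of n s'] assms(1,2) by blast
  then show "f < Suc n" using assms(3) less_SucI by blast
qed

lemma run_states_restart1: "represents [j] B t' \<Longrightarrow> restart1_st j B m \<in> run_states (opn m t') (Suc m)"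
  unfolding run_states_def start_states_def by auto

lemma run_states_enter:
  "represents [] P u \<Longrightarrow> represents_stack S1 \<pi> \<Longrightarrow> enter_st P S1 n \<in> run_states u n"
  unfolding run_states_def start_states_def by auto

text \<open>The counter n exceeds every free variable, so it serves as the fresh variable with which
  both bodies are opened; this is where the side condition of the theorem is used.\<close>

lemma lambda_wait_input_ok:
  assumes eq: "nf_equiv t s" and fvb: "\<forall>f \<in> fv t \<union> fv s. f < n"
    and k: "kam\<^sup>*\<^sup>* (t, []) (Abs t', [])" and c: "represents [j] B t'" and A': "A' \<in> run_states s n"
  shows "input_ok (lambda_wait_st j B n) A'"
proof -
  have "n \<notin> fv t" "n \<notin> fv s" using fvb by auto
  from nf_equiv_abs_fresh[OF eq k this] obtain s' where
    s': "kam\<^sup>*\<^sup>* (s, []) (Abs s', [])" "nf_equiv (opn n t') (opn n s')" by blast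
  from run_states_to_abs[OF A' s'(1)] obtain j' B' where
    c': "represents [j'] B' s'" "mtau\<^sup>*\<^sup>* A' (lambda_wait_st j' B' n)" by blast
  have "\<forall>f \<in> fv (opn n t') \<union> fv (opn n s'). f < Suc n"
    using fv_bound_opn kams_abs_fv[OF k] kams_abs_fv[OF s'(1)] fvb by blast
  then have "sound_rel (restart1_st j B n) (restart1_st j' B' n)"
    using sound_rel.run[OF s'(2)] run_states_restart1 c c'(1) by blast
  from input_okI[OF flags_lambda_wait flags_lambda_wait _ _ c'(2) lambda_wait_input
    lambda_wait_input this]
  show ?thesis by simp
qed

lemma var_input_ok:
  assumes eq: "list_all2 nf_equiv \<pi> \<pi>'" and fvb: "\<forall>f \<in> fv_list \<pi> \<union> fv_list \<pi>'. f < n"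
    and S: "represents_stack S \<pi>" and S': "represents_stack S' \<pi>'"
  shows "input_ok (eval_st (num f) S n) (eval_st (num f) S' n)"
proof (cases f)
  case 0
  have "sound_rel (init_st S n) (init_st S' n)"
    using sound_rel.cont[OF eq fvb cont_states_init[OF S] cont_states_init[OF S']] .
  from input_okI[OF flags_eval_zero flags_eval_zero _ _ _ eval_zero_input eval_zero_input this]
  have "input_ok (eval_st (num 0) S n) (eval_st (num 0) S' n)" by simp
  then show ?thesis using 0 by simp
next
  case (Suc g)
  have "sound_rel (eval_st (num g) S n) (eval_st (num g) S' n)"
    using sound_rel.var[OF eq fvb] S S' unfolding var_states_def by blast
  from input_okI[OF flags_eval_suc flags_eval_suc _ _ _ eval_suc_input eval_suc_input this]
  have "input_ok (eval_st (num (Suc g)) S n) (eval_st (num (Suc g)) S' n)" by simp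
  then show ?thesis using Suc by simp
qed

lemma run_input_ok:
  assumes eq: "nf_equiv t s" and fvb: "\<forall>f \<in> fv t \<union> fv s. f < n"
    and A: "A \<in> run_states t n" and A': "A' \<in> run_states s n"
  shows "input_ok A A'"
proof (cases "flags A = {}")
  case True
  then show ?thesis unfolding input_ok_def by blast
next
  case False
  then obtain fl where "fl \<in> flags A" by blast
  from run_states_flags[OF A this] show ?thesis
  proof (elim disjE exE conjE)
    fix t' j B assume "kam\<^sup>*\<^sup>* (t, []) (Abs t', [])" "represents [j] B t'"
      "A = lambda_wait_st j B n"
    then show ?thesis using lambda_wait_input_ok[OF eq fvb _ _ A'] by blast
  next
    fix f \<pi> S assume k: "kam\<^sup>*\<^sup>* (t, [])
      (FVar f, \<pi>)" and S: "represents_stack S \<pi>" and e: "A = eval_st (num f) S n"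
    from nf_equiv_var[OF eq k] obtain \<pi>' where
      p: "kam\<^sup>*\<^sup>* (s, []) (FVar f, \<pi>')" "list_all2 nf_equiv \<pi> \<pi>'" by blast
    from run_states_to_var[OF A' p(1)] obtain S' where
      S': "represents_stack S' \<pi>'" "mtau\<^sup>*\<^sup>* A' (eval_st (num f) S' n)" by blast
    have "\<forall>f \<in> fv_list \<pi> \<union> fv_list \<pi>'. f < n"
      using kams_var_fv_list[OF k] kams_var_fv_list[OF p(1)] fvb by blast
    then show ?thesis using var_input_ok[OF p(2) _ S S'(1)] input_ok_mtaus S'(2) e by blast
  qed
qed

lemma cont_input_ok:
  assumes eq: "list_all2 nf_equiv \<pi> \<pi>'" and A: "A \<in> cont_states \<pi> n" and A': "A' \<in> cont_states \<pi>' n"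
  shows "input_ok A A'"
proof (cases "flags A = {}")
  case True
  then show ?thesis unfolding input_ok_def by blast
next
  case False
  then obtain fl where "fl \<in> flags A" by blast
  with cont_states_flags[OF A] have "\<pi> = []" "A = done_wait_st n" by auto
  moreover from this(1) have "mtau\<^sup>*\<^sup>* A' (done_wait_st n)" using eq cont_states_to_done_wait A'
    by auto
  ultimately show ?thesis
    using input_okI[OF flags_done_wait flags_done_wait _ _ _ done_wait_input done_wait_input
      sound_rel.dead]
    by simp
qed

lemma enter_input_ok:
  assumes eq: "nf_equiv u u'" and fvb: "\<forall>f \<in> fv u \<union> fv u'. f < n"
    and A: "A \<in> enter_states u \<pi> n" and A': "A' \<in> enter_states u' \<pi>' n"
  shows "input_ok A A'"
proof (cases "flags A = {}")
  case True
  then show ?thesis unfolding input_ok_def by blast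
next
  case False
  then obtain fl where "fl \<in> flags A" by blast
  from enter_states_flags[OF A this] obtain P S1 where
    e: "represents [] P u" "represents_stack S1 \<pi>" "A = enter_wait_st P S1 n" by blast
  from enter_states_to_wait[OF A'] obtain P' S1' where
    e': "represents [] P' u'" "represents_stack S1' \<pi>'" "mtau\<^sup>*\<^sup>* A' (enter_wait_st P' S1' n)"
      by blast
  have "sound_rel (enter_st P S1 n) (enter_st P' S1' n)"
    using sound_rel.run[OF eq fvb run_states_enter[OF e(1,2)] run_states_enter[OF e'(1,2)]] .
  from input_okI[OF flags_enter_wait flags_enter_wait _ _ e'(3) enter_wait_input enter_wait_input
    this]
  show ?thesis unfolding e(3) by (simp add: represents_closed[OF e(1)] represents_closed[OF e'(1)])
qed

lemma skip_input_ok: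
  assumes eq: "list_all2 nf_equiv \<pi> \<pi>'" and fvb: "\<forall>f \<in> fv_list \<pi> \<union> fv_list \<pi>'. f < n"
    and A: "A \<in> skip_states \<pi> n" and A': "A' \<in> skip_states \<pi>' n"
  shows "input_ok A A'"
proof (cases "flags A = {}")
  case True
  then show ?thesis unfolding input_ok_def by blast
next
  case False
  then obtain fl where "fl \<in> flags A" by blast
  from skip_states_flags[OF A this] obtain S1 where e: "represents_stack S1 \<pi>"
    "A = skip_wait_st S1 n"
    by blast
  from skip_states_to_wait[OF A'] obtain S1' where
    e': "represents_stack S1' \<pi>'" "mtau\<^sup>*\<^sup>* A' (skip_wait_st S1' n)" by blast
  have "sound_rel (init_st S1 n) (init_st S1' n)"
    using sound_rel.cont[OF eq fvb cont_states_init[OF e(1)] cont_states_init[OF e'(1)]] .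
  from input_okI[OF flags_skip_wait flags_skip_wait _ _ e'(2) skip_wait_input skip_wait_input this]
  show ?thesis unfolding e(2) by simp
qed

lemma cont_states_choice_partner:
  assumes "list_all2 nf_equiv (u # \<pi>1) \<pi>'" and "A' \<in> cont_states \<pi>' n"
  obtains u' \<pi>1' P' S1' where "\<pi>' = u' # \<pi>1'" "nf_equiv u u'" "list_all2 nf_equiv \<pi>1 \<pi>1'"
    "represents [] P' u'" "represents_stack S1' \<pi>1'" "mtau\<^sup>*\<^sup>* A' (choice_st P' S1' n)"
proof -
  obtain u' \<pi>1' where "\<pi>' = u' # \<pi>1'" "nf_equiv u u'" "list_all2 nf_equiv \<pi>1 \<pi>1'"
    using assms(1) by (cases \<pi>') auto
  with cont_states_to_choice assms(2) that show thesis by blast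
qed

lemma cont_tau_ok:
  assumes eq: "list_all2 nf_equiv \<pi> \<pi>'" and fvb: "\<forall>f \<in> fv_list \<pi> \<union> fv_list \<pi>'. f < n"
    and A: "A \<in> cont_states \<pi> n" and A': "A' \<in> cont_states \<pi>' n"
  shows "tau_ok A A'"
  unfolding tau_ok_def
proof (intro allI impI)
  fix A1 assume st: "mtau A A1"
  from cont_states_step[OF A st] show "\<exists>A1'. mtau\<^sup>*\<^sup>* A' A1' \<and> sound_rel A1 A1'"
  proof
    assume "A1 \<in> cont_states \<pi> n"
    then show ?thesis using sound_rel.cont[OF eq fvb _ A'] by blast
  next
    assume "\<exists>u \<pi>1 P S1. \<pi> = u # \<pi>1 \<and> represents [] P u \<and> represents_stack S1 \<pi>1 \<and>
      A = choice_st P S1 n \<and>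
      (A1 = chose_enter_st P S1 n \<or> A1 = chose_skip_st P S1 n)"
    then obtain u \<pi>1 P S1 where e: "\<pi> = u # \<pi>1" "represents [] P u" "represents_stack S1 \<pi>1"
      and A1: "A1 = chose_enter_st P S1 n \<or> A1 = chose_skip_st P S1 n" by blast
    from cont_states_choice_partner[OF eq[unfolded e(1)] A'] obtain u' \<pi>1' P' S1' where
      p: "\<pi>' = u' # \<pi>1'" "nf_equiv u u'" "list_all2 nf_equiv \<pi>1 \<pi>1'" "represents [] P' u'"
        "represents_stack S1' \<pi>1'" "mtau\<^sup>*\<^sup>* A' (choice_st P' S1' n)" .
    have fb: "\<forall>f \<in> fv u \<union> fv u'. f < n" "\<forall>f \<in> fv_list \<pi>1 \<union> fv_list \<pi>1'. f < n"
      using fvb e(1) p(1) by (auto simp: fv_list_Cons)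
    have "sound_rel (chose_enter_st P S1 n) (chose_enter_st P' S1' n)"
      using sound_rel.enter[OF p(2) fb(1)] e p unfolding enter_states_def by blast
    moreover have "sound_rel (chose_skip_st P S1 n) (chose_skip_st P' S1' n)"
      using sound_rel.skip[OF p(3) fb(2)] e p unfolding skip_states_def by blast
    moreover have "mtau\<^sup>*\<^sup>* A' (chose_enter_st P' S1' n)" "mtau\<^sup>*\<^sup>* A' (chose_skip_st P' S1' n)"
      using p(6) choice_step by (auto intro: rtranclp.rtrancl_into_rtrancl)
    ultimately show ?thesis using A1 by blast
  qed
qed

lemma sound_rel_input_ok: "sound_rel A A' \<Longrightarrow> input_ok A A'"
proof (induction rule: sound_rel.induct)
  case (run t s n A A')
  then show ?case by (rule run_input_ok)
next
  case (var \<pi> \<pi>' n A f A')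
  then show ?case using var_input_ok unfolding var_states_def by blast
next
  case (cont \<pi> \<pi>' n A A')
  then show ?case by (intro cont_input_ok)
next
  case (enter u u' n A \<pi> A' \<pi>')
  then show ?case by (rule enter_input_ok)
next
  case (skip \<pi> \<pi>' n A A')
  then show ?case by (rule skip_input_ok)
next
  case (dead n n')
  then show ?case unfolding input_ok_def using flags_silent by simp
qed

lemma sound_rel_tau_ok: "sound_rel A A' \<Longrightarrow> tau_ok A A'"
proof (induction rule: sound_rel.induct)
  case (run t s n A A')
  then show ?case unfolding tau_ok_def using run_states_step sound_rel.run by blast
next
  case (var \<pi> \<pi>' n A f A')
  then show ?case unfolding tau_ok_def using var_states_stuck by blast
next
  case (cont \<pi> \<pi>' n A A')
  then show ?case by (rule cont_tau_ok)
next
  case (enter u u' n A \<pi> A' \<pi>')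
  then show ?case unfolding tau_ok_def using enter_states_step sound_rel.enter by blast
next
  case (skip \<pi> \<pi>' n A A')
  then show ?case unfolding tau_ok_def using skip_states_step sound_rel.skip by blast
next
  case (dead n n')
  then show ?case unfolding tau_ok_def using dead_stuck by blast
qed

lemma sound_rel_outs_in_H: "sound_rel A A' \<Longrightarrow> outs_in_H A"
  by (induction rule: sound_rel.induct)
    (auto intro: run_states_outs var_states_outs cont_states_outs enter_states_outs skip_states_outs
      outs_in_H_states)

lemma ctx_bisim_sound_rel: "ctx_bisim H sound_rel"
  unfolding ctx_bisim_def
proof (intro conjI allI impI)
  show "symp sound_rel" unfolding symp_def using sound_rel_sym by blast
next
  fix A A' \<mu> assume r: "sound_rel A A'" and b: "mbarb H A \<mu>"
  from b obtain a x Q where "\<mu> = BIn a" "(a, x, Q) \<in> flags A"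
    using outs_in_H_mbarb sound_rel_outs_in_H[OF r] by blast
  then obtain W' x' Q' where "mtau\<^sup>*\<^sup>* A' W'" "(a, x', Q') \<in> flags W'"
    using sound_rel_input_ok[OF r] unfolding input_ok_def by blast
  then show "\<exists>A''. mtau\<^sup>*\<^sup>* A' A'' \<and> mbarb H A'' \<mu>" using \<open>\<mu> = BIn a\<close> unfolding flags_def by auto
next
  fix A A' A1 assume "sound_rel A A'" "mtau A A1"
  then show "\<exists>A1'. mtau\<^sup>*\<^sup>* A' A1' \<and> sound_rel A1 A1'" using sound_rel_tau_ok unfolding tau_ok_def
    by blast
next
  fix A A' a x Q N R assume r: "sound_rel A A'" and e: "A = add_mset (Inp a x Q) N" and h: "a \<notin> H"
  then have "(a, x, Q) \<in> flags A" unfolding flags_def by simp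
  then obtain W' x' Q' where w: "mtau\<^sup>*\<^sup>* A' W'" "(a, x', Q') \<in> flags W'"
    "sound_rel (A - {#Inp a x Q#} + threads (subst Q x R))
      (W' - {#Inp a x' Q'#} + threads (subst Q' x' R))"
    using sound_rel_input_ok[OF r] unfolding input_ok_def by blast
  moreover have "W' = add_mset (Inp a x' Q') (W' - {#Inp a x' Q'#})" using w(2) unfolding flags_def
    by simp
  ultimately show "\<exists>x' Q' N'. mtau\<^sup>*\<^sup>* A' (add_mset (Inp a x' Q') N') \<and>
      sound_rel (N + threads (subst Q x R)) (N' + threads (subst Q' x' R))"
    using e by (metis add_mset_remove_trivial)
next
  fix A A' a R assume "sound_rel A A'" "Out a R \<in># A"
  then show "a \<in> H" using sound_rel_outs_in_H unfolding outs_in_H_def by blast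
qed

lemma threads_tr_ev: "well_formed t \<Longrightarrow> threads (tr_ev t [] n) = eval_st (tr 0 t) tr_empty n"
  using represents_threads[OF represents_tr0[of t]]
  by (simp add: tr_ev_def eval_st_def machine_threads_def rec_proc_def add_mset_commute)

lemma run_states_tr: "well_formed t \<Longrightarrow> eval_st (tr 0 t) tr_empty n \<in> run_states t n"
  using eval_states_eval represents_tr0 unfolding run_states_def by blast

theorem nf_equiv_imp_hbisim:
  assumes "well_formed t" and "well_formed s" and "nf_equiv t s" and "\<forall>f \<in> fv t \<union> fv s. f < n"
  shows "hbisim H (tr_ev t [] n) (tr_ev s [] n)"
proof -
  have "sound_rel (threads (tr_ev t [] n)) (threads (tr_ev s [] n))"
    using sound_rel.run[OF assms(3,4) run_states_tr run_states_tr] threads_tr_ev assms(1,2) by simp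
  then show ?thesis by (rule ctx_bisim_hbisim[OF ctx_bisim_sound_rel])
qed

section \<open>Completeness\<close>

lemma flags_add_out[simp]: "flags (add_mset (Out a R) M) = flags M"
  unfolding flags_def by auto

definition wflag :: "proc multiset \<Rightarrow> name \<Rightarrow> bool" where
  "wflag N a \<longleftrightarrow> (\<exists>N' x Q. mtau\<^sup>*\<^sup>* N N' \<and> (a, x, Q) \<in> flags N')"

lemma mbarb_flag: "mbarb H M (BIn a) \<longleftrightarrow> (\<exists>x Q. (a, x, Q) \<in> flags M)"
  unfolding flags_def by auto

lemma hbisim_mset_wflag: "hbisim_mset H M N \<Longrightarrow> wflag M a \<Longrightarrow> wflag N a"
  unfolding wflag_def using hbisim_mset_wbarb mbarb_flag by metis

lemma wflag_steps: "mtau\<^sup>*\<^sup>* M M' \<Longrightarrow> (a, x, Q) \<in> flags M' \<Longrightarrow> wflag M a"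
  unfolding wflag_def by blast

lemma hbisim_mset_flag: "hbisim_mset H M N \<Longrightarrow> (a, x, Q) \<in> flags M \<Longrightarrow>
  \<exists>N' x' Q'. mtau\<^sup>*\<^sup>* N N' \<and> (a, x', Q') \<in> flags N'"
  using hbisim_mset_wflag wflag_steps[OF rtranclp.rtrancl_refl] unfolding wflag_def by blast

lemma enter_states_steps: "mtau\<^sup>*\<^sup>* M M' \<Longrightarrow> M \<in> enter_states u \<pi> n \<Longrightarrow> M' \<in> enter_states u \<pi> n"
  by (induction rule: rtranclp_induct) (auto intro: enter_states_step)

lemma skip_states_steps: "mtau\<^sup>*\<^sup>* M M' \<Longrightarrow> M \<in> skip_states \<pi> n \<Longrightarrow> M' \<in> skip_states \<pi> n"
  by (induction rule: rtranclp_induct) (auto intro: skip_states_step)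

lemma cont_states_nil_steps: "mtau\<^sup>*\<^sup>* M M' \<Longrightarrow> M \<in> cont_states [] n \<Longrightarrow> M' \<in> cont_states [] n"
proof (induction rule: rtranclp_induct)
  case (step y z) then show ?case using cont_states_step[OF step(3) step(2)] by auto
qed simp

lemma run_states_steps: "mtau\<^sup>*\<^sup>* M M' \<Longrightarrow> M \<in> run_states t n \<Longrightarrow> M' \<in> run_states t n"
  by (induction rule: rtranclp_induct) (auto intro: run_states_step)

lemma wflag_enter_states: "M \<in> enter_states u \<pi> n \<Longrightarrow> wflag M a \<Longrightarrow> a = ''enter''"
  unfolding wflag_def using enter_states_steps enter_states_flags by blast

lemma wflag_skip_states: "M \<in> skip_states \<pi> n \<Longrightarrow> wflag M a \<Longrightarrow> a = ''skip''"
  unfolding wflag_def using skip_states_steps skip_states_flags by blast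

lemma wflag_cont_states_nil: "M \<in> cont_states [] n \<Longrightarrow> wflag M a \<Longrightarrow> a = ''done''"
  unfolding wflag_def using cont_states_nil_steps cont_states_flags by blast

definition cont_mode_states :: "lterm list \<Rightarrow> nat \<Rightarrow> proc multiset set" where
  "cont_mode_states \<pi> n = cont_states \<pi> n \<union> {M. \<exists>u \<pi>1. \<pi> = u # \<pi>1 \<and> (M \<in> enter_states u \<pi>1 n \<or>
    M \<in> skip_states \<pi>1 n)}"

lemma cont_mode_cont_states: "M \<in> cont_states \<pi> n \<Longrightarrow> M \<in> cont_mode_states \<pi> n"
  unfolding cont_mode_states_def by (rule UnI1)

lemma cont_mode_enter_states: "M \<in> enter_states u \<pi>1 n \<Longrightarrow> M \<in> cont_mode_states (u # \<pi>1) n"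
  unfolding cont_mode_states_def by (rule UnI2) simp

lemma cont_mode_skip_states: "M \<in> skip_states \<pi>1 n \<Longrightarrow> M \<in> cont_mode_states (u # \<pi>1) n"
  unfolding cont_mode_states_def by (rule UnI2) simp

lemma cont_mode_cases: "M \<in> cont_mode_states \<pi> n \<Longrightarrow> M \<notin> cont_states \<pi> n \<Longrightarrow>
  \<exists>u \<pi>1. \<pi> = u # \<pi>1 \<and> (M \<in> enter_states u \<pi>1 n \<or> M \<in> skip_states \<pi>1 n)"
  unfolding cont_mode_states_def by simp

lemma cont_mode_step: "M \<in> cont_mode_states \<pi> n \<Longrightarrow> mtau M M' \<Longrightarrow> M' \<in> cont_mode_states \<pi> n"
proof -
  assume a: "M \<in> cont_mode_states \<pi> n" "mtau M M'"
  show ?thesis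
  proof (cases "M \<in> cont_states \<pi> n")
    case True
    from cont_states_step[OF True a(2)] show ?thesis
    proof (elim disjE exE conjE)
      assume "M' \<in> cont_states \<pi> n" then show ?thesis by (rule cont_mode_cont_states)
    next
      fix u \<pi>1 P S1 assume e: "\<pi> = u # \<pi>1" "represents [] P u" "represents_stack S1 \<pi>1"
        "M = choice_st P S1 n" "M' = chose_enter_st P S1 n"
      then have "M' \<in> enter_states u \<pi>1 n" unfolding enter_states_def by blast
      then show ?thesis using e(1) cont_mode_enter_states by simp
    next
      fix u \<pi>1 P S1 assume e: "\<pi> = u # \<pi>1" "represents [] P u" "represents_stack S1 \<pi>1"
        "M = choice_st P S1 n" "M' = chose_skip_st P S1 n"
      then have "M' \<in> skip_states \<pi>1 n" unfolding skip_states_def by blast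
      then show ?thesis using e(1) cont_mode_skip_states by simp
    qed
  next
    case False
    then obtain u \<pi>1 where u: "\<pi> = u # \<pi>1" "M \<in> enter_states u \<pi>1 n \<or> M \<in> skip_states \<pi>1 n"
      using cont_mode_cases a(1) by blast
    from u(2) show ?thesis
    proof
      assume "M \<in> enter_states u \<pi>1 n" then show ?thesis
        using enter_states_step[OF _ a(2)] cont_mode_enter_states u(1) by simp
    next
      assume "M \<in> skip_states \<pi>1 n" then show ?thesis
        using skip_states_step[OF _ a(2)] cont_mode_skip_states u(1) by simp
    qed
  qed
qed

lemma cont_mode_steps: "mtau\<^sup>*\<^sup>* M M' \<Longrightarrow> M \<in> cont_mode_states \<pi> n \<Longrightarrow> M' \<in> cont_mode_states \<pi> n"
  by (induction rule: rtranclp_induct) (auto intro: cont_mode_step)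

lemma cont_mode_flags: "Y \<in> cont_mode_states \<pi> n \<Longrightarrow> (a, x, Q) \<in> flags Y \<Longrightarrow>
   (a = ''done'' \<and> \<pi> = []) \<or> (\<exists>u \<pi>1. \<pi> = u # \<pi>1 \<and> ((a = ''enter'' \<and> Y \<in> enter_states u \<pi>1 n) \<or>
     (a = ''skip'' \<and> Y \<in> skip_states \<pi>1 n)))"
proof -
  assume a: "Y \<in> cont_mode_states \<pi> n" "(a, x, Q) \<in> flags Y"
  show ?thesis
  proof (cases "Y \<in> cont_states \<pi> n")
    case True then show ?thesis using cont_states_flags[OF True a(2)] by auto
  next
    case False
    then obtain u \<pi>1 where u: "\<pi> = u # \<pi>1" "Y \<in> enter_states u \<pi>1 n \<or> Y \<in> skip_states \<pi>1 n"
      using cont_mode_cases a(1) by blast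
    from u(2) show ?thesis
    proof
      assume "Y \<in> enter_states u \<pi>1 n" then show ?thesis using enter_states_flags[OF _ a(2)] u(1)
        by blast
    next
      assume "Y \<in> skip_states \<pi>1 n" then show ?thesis using skip_states_flags[OF _ a(2)] u(1)
        by blast
    qed
  qed
qed

lemma choice_reach: "mtau\<^sup>*\<^sup>* (choice_st P S1 n) X \<Longrightarrow> represents [] P u \<Longrightarrow> represents_stack S1 \<pi>1 \<Longrightarrow>
   X = choice_st P S1 n \<or> X \<in> enter_states u \<pi>1 n \<or> X \<in> skip_states \<pi>1 n"
proof -
  assume a: "mtau\<^sup>*\<^sup>* (choice_st P S1 n) X" "represents [] P u" "represents_stack S1 \<pi>1"
  from a(1) show ?thesis
  proof (cases rule: converse_rtranclpE)
    case base then show ?thesis by simp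
  next
    case (step M)
    then have "M = chose_enter_st P S1 n \<or> M = chose_skip_st P S1 n" using choice_step by blast
    then show ?thesis
    proof
      assume "M = chose_enter_st P S1 n"
      then have "M \<in> enter_states u \<pi>1 n" unfolding enter_states_def using a by blast
      then show ?thesis using enter_states_steps step(2) by blast
    next
      assume "M = chose_skip_st P S1 n"
      then have "M \<in> skip_states \<pi>1 n" unfolding skip_states_def using a by blast
      then show ?thesis using skip_states_steps step(2) by blast
    qed
  qed
qed

text \<open>The states just after a context has triggered a z- or a skip-flag: their only move
  enters continuation mode on the stack S.\<close>

definition pre_init_states :: "proc \<Rightarrow> nat \<Rightarrow> proc multiset set" where
  "pre_init_states S n = {M. (\<forall>M'. mtau M M' \<longleftrightarrow>
    M' = init_st S n) \<and> (\<forall>x Q. (''done'', x, Q) \<notin> flags M \<and> (''enter'', x, Q) \<notin> flags M)}"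

lemma pre_init_reach: "M \<in> pre_init_states S n \<Longrightarrow> represents_stack S \<pi> \<Longrightarrow> mtau\<^sup>*\<^sup>* M Y \<Longrightarrow>
  Y = M \<or> Y \<in> cont_mode_states \<pi> n"
proof -
  assume a: "M \<in> pre_init_states S n" "represents_stack S \<pi>" "mtau\<^sup>*\<^sup>* M Y"
  have u: "\<And>M'. mtau M M' \<longleftrightarrow> M' = init_st S n" using a(1) unfolding pre_init_states_def by blast
  from mtaus_from_deterministic[OF a(3) u] show ?thesis
  proof
    assume "mtau\<^sup>*\<^sup>* (init_st S n) Y"
    moreover have "init_st S n \<in> cont_mode_states \<pi> n" using cont_states_init[OF a(2)]
      by (rule cont_mode_cont_states)
    ultimately show ?thesis using cont_mode_steps by blast
  qed simp
qed

lemma pre_init_wflag: "M \<in> pre_init_states S n \<Longrightarrow> represents_stack S \<pi> \<Longrightarrow> wflag M a \<Longrightarrow>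
  a = ''done'' \<or> a = ''enter'' \<Longrightarrow>
   \<exists>Y x Q. Y \<in> cont_mode_states \<pi> n \<and> (a, x, Q) \<in> flags Y"
proof -
  assume a: "M \<in> pre_init_states S n" "represents_stack S \<pi>" "wflag M a"
    "a = ''done'' \<or> a = ''enter''"
  then obtain Y x Q where y: "mtau\<^sup>*\<^sup>* M Y" "(a, x, Q) \<in> flags Y" unfolding wflag_def by blast
  from pre_init_reach[OF a(1,2) y(1)] show ?thesis
  proof
    assume "Y = M" then show ?thesis using y(2) a(1,4) unfolding pre_init_states_def by blast
  next
    assume "Y \<in> cont_mode_states \<pi> n" then show ?thesis using y(2) by blast
  qed
qed

definition hb_rel :: "lterm \<Rightarrow> lterm \<Rightarrow> bool" where
  "hb_rel t s \<longleftrightarrow> well_formed t \<and> well_formed s \<and>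
     (\<exists>n. (\<forall>f \<in> fv t \<union> fv s. f < n) \<and> (\<exists>A A'. A \<in> run_states t n \<and> A' \<in> run_states s n \<and>
       hbisim_mset H A A'))"

lemma hb_relI: "well_formed t \<Longrightarrow> well_formed s \<Longrightarrow> \<forall>f \<in> fv t \<union> fv s. f < n \<Longrightarrow> A \<in> run_states t n \<Longrightarrow>
  A' \<in> run_states s n \<Longrightarrow> hbisim_mset H A A' \<Longrightarrow> hb_rel t s"
  unfolding hb_rel_def by blast

lemma choice_to_enter_wait: "mtau\<^sup>*\<^sup>* (choice_st P S1 n) (enter_wait_st P S1 n)"
  by (rule converse_rtranclp_into_rtranclp[of mtau,
    OF choice_to_chose_enter r_into_rtranclp[of mtau, OF chose_enter_to_wait]])

lemma choice_to_skip_wait: "mtau\<^sup>*\<^sup>* (choice_st P S1 n) (skip_wait_st S1 n)"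
  by (rule converse_rtranclp_into_rtranclp[of mtau, OF choice_to_chose_skip r_into_rtranclp[of mtau,
    OF chose_skip_to_wait]])

lemma wflag_choice_enter: "wflag (choice_st P S1 n) ''enter''"
  using wflag_steps[OF choice_to_enter_wait] flags_enter_wait by blast

lemma wflag_choice_skip: "wflag (choice_st P S1 n) ''skip''"
  using wflag_steps[OF choice_to_skip_wait] flags_skip_wait by blast

lemma hbisim_mset_add_flag:
  "hbisim_mset H W W' \<Longrightarrow> a \<notin> H \<Longrightarrow> hbisim_mset H (add_mset (Out a Nil) W) (add_mset (Out a Nil) W')"
  using hbisim_mset_add[of H W W' "Out a Nil"] by simp

lemma hbisim_mset_fire:
  assumes "hbisim_mset H W W'" and "a \<notin> H" and "mtau (add_mset (Out a Nil) W) X1"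
    and "\<And>M. mtau (add_mset (Out a Nil) W') M \<longleftrightarrow> M = Y1"
  shows "\<exists>X Y. mtau\<^sup>*\<^sup>* X1 X \<and> mtau\<^sup>*\<^sup>* Y1 Y \<and> hbisim_mset H X Y"
  using hbisim_mset_sync[OF hbisim_mset_add_flag[OF assms(1,2)] assms(3,4)] .

lemma hbisim_mset_flag_stuck:
  assumes h: "hbisim_mset H A A'" and "mtau\<^sup>*\<^sup>* A W" and "(a, x, Q) \<in> flags W" and "\<And>M. \<not> mtau W M"
  shows "\<exists>W' x' Q'. mtau\<^sup>*\<^sup>* A' W' \<and> (a, x', Q') \<in> flags W' \<and> hbisim_mset H W W'"
proof -
  obtain Y1 where y1: "mtau\<^sup>*\<^sup>* A' Y1" "hbisim_mset H W Y1" using hbisim_mset_taus[OF h assms(2)]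
    by blast
  obtain Y2 x' Q' where y2: "mtau\<^sup>*\<^sup>* Y1 Y2" "(a, x', Q') \<in> flags Y2"
    using hbisim_mset_flag[OF y1(2) assms(3)] by blast
  have "hbisim_mset H W Y2" using hbisim_mset_stuck[OF y1(2) y2(1)] assms(4) by blast
  then show ?thesis using rtranclp_trans[of mtau, OF y1(1) y2(1)] y2(2) by blast
qed

lemma cont_mode_enter_skip:
  assumes "Y \<in> cont_mode_states \<pi> n" and "wflag Y ''enter''" and "wflag Y ''skip''"
  shows "Y \<in> cont_states \<pi> n \<and> \<pi> \<noteq> []"
proof (cases "Y \<in> cont_states \<pi> n")
  case True
  moreover have "\<pi> \<noteq> []"
  proof
    assume "\<pi> = []"
    then have "''enter'' = ''done''" using wflag_cont_states_nil True assms(2) by blast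
    then show False by simp
  qed
  ultimately show ?thesis by blast
next
  case False
  then obtain u \<pi>1 where "Y \<in> enter_states u \<pi>1 n \<or> Y \<in> skip_states \<pi>1 n"
    using cont_mode_cases assms(1) by blast
  then have "''skip'' = ''enter'' \<or> ''enter'' = ''skip''"
    using wflag_enter_states[of Y u \<pi>1 n "''skip''"] wflag_skip_states[of Y \<pi>1 n "''enter''"]
      assms(2,3)
    by blast
  then show ?thesis by simp
qed

text \<open>After the first flag of a stack traversal, the partner must be facing a choice for a
  nonempty stack: only a choice state can still exhibit both the enter and the skip flag.\<close>

lemma pre_init_choice_partner:
  assumes Y0: "Y0 \<in> pre_init_states S' n" and S': "represents_stack S' \<pi>'" and y: "mtau\<^sup>*\<^sup>* Y0 Y"
    and "wflag Y ''enter''" and "wflag Y ''skip''"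
  shows "\<exists>u' \<pi>1' P' S1'. \<pi>' = u' # \<pi>1' \<and> represents [] P' u' \<and> represents_stack S1' \<pi>1' \<and>
    mtau\<^sup>*\<^sup>* Y (choice_st P' S1' n)"
  using pre_init_reach[OF Y0 S' y]
proof
  assume "Y = Y0"
  then obtain Y' x Q where "Y' \<in> cont_mode_states \<pi>' n" "(''enter'', x, Q) \<in> flags Y'"
    using pre_init_wflag[OF Y0 S'] assms(4) by blast
  then obtain u' \<pi>1' where \<pi>': "\<pi>' = u' # \<pi>1'" using cont_mode_flags by blast
  have init: "mtau Y0 (init_st S' n)" using Y0 unfolding pre_init_states_def by blast
  obtain P' S1' where P': "represents [] P' u'" "represents_stack S1' \<pi>1'"
      "mtau\<^sup>*\<^sup>* (init_st S' n) (choice_st P' S1' n)"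
    using cont_states_to_choice cont_states_init[OF S'] \<pi>' by blast
  have "mtau\<^sup>*\<^sup>* Y0 (choice_st P' S1' n)" using init P'(3) by (rule converse_rtranclp_into_rtranclp)
  then show ?thesis using \<open>Y = Y0\<close> \<pi>' P'(1,2) by blast
next
  assume "Y \<in> cont_mode_states \<pi>' n"
  then have "Y \<in> cont_states \<pi>' n" "\<pi>' \<noteq> []" using cont_mode_enter_skip assms(4,5) by blast+
  then show ?thesis using cont_states_to_choice by (cases \<pi>') blast+
qed

lemma choice_reach_enter_skip:
  "mtau\<^sup>*\<^sup>* (choice_st P S1 n) X \<Longrightarrow> represents [] P u \<Longrightarrow> represents_stack S1 \<pi>1 \<Longrightarrow>
   wflag X ''enter'' \<Longrightarrow> wflag X ''skip'' \<Longrightarrow> X = choice_st P S1 n"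
proof -
  assume a: "mtau\<^sup>*\<^sup>* (choice_st P S1 n) X" "represents [] P u" "represents_stack S1 \<pi>1"
    "wflag X ''enter''" "wflag X ''skip''"
  have "X \<notin> enter_states u \<pi>1 n" using wflag_enter_states[of X u \<pi>1 n "''skip''"] a(5) by auto
  moreover have "X \<notin> skip_states \<pi>1 n" using wflag_skip_states[of X \<pi>1 n "''enter''"] a(4) by auto
  ultimately show ?thesis using choice_reach[OF a(1-3)] by blast
qed

lemma choice_reach_enter_wait:
  assumes "mtau\<^sup>*\<^sup>* (choice_st P S1 n) Y" and "represents [] P u" and "represents_stack S1 \<pi>1"
    and "wflag Y ''enter''"
  shows "\<exists>P' S1'. represents [] P' u \<and> represents_stack S1' \<pi>1 \<and>
    mtau\<^sup>*\<^sup>* Y (enter_wait_st P' S1' n)"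
  using choice_reach[OF assms(1-3)]
proof (elim disjE)
  assume "Y = choice_st P S1 n"
  then show ?thesis using choice_to_enter_wait assms(2,3) by blast
next
  assume "Y \<in> skip_states \<pi>1 n"
  then have "''enter'' = ''skip''" using wflag_skip_states assms(4) by blast
  then show ?thesis by simp
qed (use enter_states_to_wait in blast)

lemma choice_reach_skip_wait:
  assumes "mtau\<^sup>*\<^sup>* (choice_st P S1 n) Y" and "represents [] P u" and "represents_stack S1 \<pi>1"
    and "wflag Y ''skip''"
  shows "\<exists>S1'. represents_stack S1' \<pi>1 \<and> mtau\<^sup>*\<^sup>* Y (skip_wait_st S1' n)"
  using choice_reach[OF assms(1-3)]
proof (elim disjE)
  assume "Y = choice_st P S1 n"
  then show ?thesis using choice_to_skip_wait assms(3) by blast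
next
  assume "Y \<in> enter_states u \<pi>1 n"
  then have "''skip'' = ''enter''" using wflag_enter_states assms(4) by blast
  then show ?thesis by simp
qed (use skip_states_to_wait in blast)

lemma hbisim_choice_hb_rel:
  assumes h: "hbisim_mset H (choice_st P S1 n) (choice_st P' S1' n)"
    and P: "represents [] P u" "represents_stack S1 \<pi>1" and P': "represents [] P' u'"
      "represents_stack S1' \<pi>1'"
    and fb: "\<forall>f \<in> fv u \<union> fv u'. f < n"
  shows "hb_rel u u'"
proof -
  obtain Y where y: "mtau\<^sup>*\<^sup>* (choice_st P' S1' n) Y" "hbisim_mset H (enter_wait_st P S1 n) Y"
    using hbisim_mset_taus[OF h choice_to_enter_wait] by blast
  have "wflag Y ''enter''" using hbisim_mset_wflag[OF y(2)] flags_enter_wait unfolding wflag_def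
    by blast
  then obtain P'' S1'' where e: "represents [] P'' u'" "represents_stack S1'' \<pi>1'"
      "mtau\<^sup>*\<^sup>* Y (enter_wait_st P'' S1'' n)"
    using choice_reach_enter_wait[OF y(1) P'] by blast
  have "hbisim_mset H (enter_wait_st P S1 n) (enter_wait_st P'' S1'' n)"
    using hbisim_mset_stuck[OF y(2) e(3)] enter_wait_stuck by blast
  moreover have "''enter'' \<notin> H" by (simp add: H_def)
  moreover have "mtau (add_mset (Out ''enter'' Nil) (enter_wait_st P S1 n)) (enter_st P S1 n)"
    using enter_wait_fire represents_closed_thread[OF P(1)] by blast
  moreover have "\<And>M. mtau (add_mset (Out ''enter'' Nil) (enter_wait_st P'' S1'' n)) M \<longleftrightarrow>
    M = enter_st P'' S1'' n"
    using enter_wait_fire represents_closed_thread[OF e(1)] by blast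
  ultimately obtain X1 Y1 where xy: "mtau\<^sup>*\<^sup>* (enter_st P S1 n) X1"
    "mtau\<^sup>*\<^sup>* (enter_st P'' S1'' n) Y1"
      "hbisim_mset H X1 Y1"
    using hbisim_mset_fire by blast
  show ?thesis
    using hb_relI[OF represents_well_formed[OF P(1)] represents_well_formed[OF e(1)] fb
        run_states_steps[OF xy(1) run_states_enter[OF P]] run_states_steps[OF xy(2)
          run_states_enter[OF e(1,2)]] xy(3)] .
qed

lemma skip_fire_pre_init: "add_mset (Out ''skip'' Nil) (skip_wait_st S n) \<in> pre_init_states S n"
  unfolding pre_init_states_def using skip_wait_fire flags_skip_wait by auto

lemma zero_fire_pre_init: "add_mset (Out ''z'' Nil) (eval_st (num 0) S n) \<in> pre_init_states S n"
  unfolding pre_init_states_def using eval_zero_fire flags_eval_zero by auto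

lemma hbisim_choice_skip:
  assumes h: "hbisim_mset H (choice_st P S1 n) (choice_st P' S1' n)"
    and P': "represents [] P' u'" "represents_stack S1' \<pi>1'"
  shows "\<exists>S1''. represents_stack S1'' \<pi>1' \<and>
    hbisim_mset H (add_mset (Out ''skip'' Nil) (skip_wait_st S1 n)) (add_mset (Out ''skip'' Nil)
      (skip_wait_st S1'' n))"
proof -
  obtain Y where y: "mtau\<^sup>*\<^sup>* (choice_st P' S1' n) Y" "hbisim_mset H (skip_wait_st S1 n) Y"
    using hbisim_mset_taus[OF h choice_to_skip_wait] by blast
  have "wflag Y ''skip''" using hbisim_mset_wflag[OF y(2)] flags_skip_wait unfolding wflag_def
    by blast
  then obtain S1'' where e: "represents_stack S1'' \<pi>1'" "mtau\<^sup>*\<^sup>* Y (skip_wait_st S1'' n)"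
    using choice_reach_skip_wait[OF y(1) P'] by blast
  have "hbisim_mset H (skip_wait_st S1 n) (skip_wait_st S1'' n)"
    using hbisim_mset_stuck[OF y(2) e(2)] skip_wait_stuck by blast
  moreover have "''skip'' \<notin> H" by (simp add: H_def)
  ultimately show ?thesis using e(1) hbisim_mset_add_flag by blast
qed

lemma hbisim_pre_init_choices:
  assumes S: "represents_stack S (u # \<pi>1)" and S': "represents_stack S' \<pi>'"
    and X0: "X0 \<in> pre_init_states S n" and Y0: "Y0 \<in> pre_init_states S' n" and
      h: "hbisim_mset H X0 Y0"
  obtains P S1 u' \<pi>1' P' S1' where "\<pi>' = u' # \<pi>1'" "represents [] P u" "represents_stack S1 \<pi>1"
    "represents [] P' u'" "represents_stack S1' \<pi>1'" "hbisim_mset H (choice_st P S1 n)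
      (choice_st P' S1' n)"
proof -
  obtain P S1 where P: "represents [] P u" "represents_stack S1 \<pi>1" "mtau\<^sup>*\<^sup>* (init_st S n)
    (choice_st P S1 n)"
    using cont_states_to_choice cont_states_init[OF S] by blast
  have "mtau X0 (init_st S n)" using X0 unfolding pre_init_states_def by blast
  then have "mtau\<^sup>*\<^sup>* X0 (choice_st P S1 n)" using P(3) by (rule converse_rtranclp_into_rtranclp)
  then obtain Y where y: "mtau\<^sup>*\<^sup>* Y0 Y" "hbisim_mset H (choice_st P S1 n) Y"
    using hbisim_mset_taus h by blast
  have "wflag Y ''enter''" "wflag Y ''skip''"
    using hbisim_mset_wflag[OF y(2)] wflag_choice_enter wflag_choice_skip by blast+
  then obtain u' \<pi>1' P' S1' where P': "\<pi>' = u' # \<pi>1'" "represents [] P' u'"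
    "represents_stack S1' \<pi>1'"
      "mtau\<^sup>*\<^sup>* Y (choice_st P' S1' n)"
    using pre_init_choice_partner[OF Y0 S' y(1)] by blast
  obtain X where x: "mtau\<^sup>*\<^sup>* (choice_st P S1 n) X" "hbisim_mset H (choice_st P' S1' n) X"
    using hbisim_mset_taus[OF hbisim_mset_sym[OF y(2)] P'(4)] by blast
  then have "X = choice_st P S1 n"
    using choice_reach_enter_skip[OF x(1) P(1,2)] hbisim_mset_wflag[OF x(2)] wflag_choice_enter
      wflag_choice_skip
    by blast
  then have "hbisim_mset H (choice_st P S1 n) (choice_st P' S1' n)" using x(2) hbisim_mset_sym
    by blast
  then show thesis by (rule that[OF P'(1) P(1,2) P'(2,3)])
qed

lemma hbisim_pre_init_stacks:
  assumes "represents_stack S \<pi>" and "represents_stack S' \<pi>'" and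
    "\<forall>f \<in> fv_list \<pi> \<union> fv_list \<pi>'. f < n"
    and "X0 \<in> pre_init_states S n" and "Y0 \<in> pre_init_states S' n" and "hbisim_mset H X0 Y0"
  shows "list_all2 hb_rel \<pi> \<pi>'"
  using assms
proof (induction \<pi> arbitrary: S \<pi>' S' X0 Y0 rule: list.induct)
  case Nil
  have "mtau X0 (init_st S n)" using Nil(4) unfolding pre_init_states_def by blast
  then have "mtau\<^sup>*\<^sup>* X0 (done_wait_st n)"
    using cont_states_to_done_wait[OF cont_states_init[OF Nil(1)]]
      by (rule converse_rtranclp_into_rtranclp)
  then have "wflag X0 ''done''" using flags_done_wait unfolding wflag_def by blast
  then obtain Y x Q where "Y \<in> cont_mode_states \<pi>' n" "(''done'', x, Q) \<in> flags Y"
    using pre_init_wflag[OF Nil(5,2)] hbisim_mset_wflag[OF Nil(6)] by blast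
  then show ?case using cont_mode_flags by fastforce
next
  case (Cons u \<pi>1)
  obtain P S1 u' \<pi>1' P' S1' where c: "\<pi>' = u' # \<pi>1'" "represents [] P u" "represents_stack S1 \<pi>1"
      "represents [] P' u'" "represents_stack S1' \<pi>1'" "hbisim_mset H (choice_st P S1 n)
        (choice_st P' S1' n)"
    by (rule hbisim_pre_init_choices[OF Cons.prems(1,2,4,5,6)])
  have fb: "\<forall>f \<in> fv u \<union> fv u'. f < n" "\<forall>f \<in> fv_list \<pi>1 \<union> fv_list \<pi>1'. f < n"
    using Cons.prems(3) c(1) by (auto simp: fv_list_Cons)
  obtain S1'' where "represents_stack S1'' \<pi>1'"
      "hbisim_mset H (add_mset (Out ''skip'' Nil) (skip_wait_st S1 n)) (add_mset (Out ''skip'' Nil)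
        (skip_wait_st S1'' n))"
    using hbisim_choice_skip[OF c(6,4,5)] by blast
  then have "list_all2 hb_rel \<pi>1 \<pi>1'"
    using Cons.IH[OF c(3) _ fb(2) skip_fire_pre_init skip_fire_pre_init] by blast
  then show ?case using hbisim_choice_hb_rel[OF c(6,2,3,4,5) fb(1)] c(1) by simp
qed

lemma hbisim_eval_var:
  assumes "hbisim_mset H (eval_st (num f) S n) (eval_st (num g) S' n)"
    and "represents_stack S \<pi>" and "represents_stack S' \<pi>'" and "\<forall>f \<in> fv_list \<pi> \<union> fv_list \<pi>'. f < n"
  shows "f = g \<and> list_all2 hb_rel \<pi> \<pi>'"
  using assms
proof (induction f arbitrary: g)
  case 0
  obtain N x' Q' where "mtau\<^sup>*\<^sup>* (eval_st (num g) S' n) N" "(''z'', x', Q') \<in> flags N"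
    using hbisim_mset_flag[OF 0(1)] flags_eval_zero by blast
  then have "(''z'', x', Q') \<in> flags (eval_st (num g) S' n)" using mtaus_from_stuck eval_num_stuck
    by metis
  then have g0: "g = 0" using flags_eval_suc by (cases g) auto
  have "''z'' \<notin> H" by (simp add: H_def)
  then have "hbisim_mset H (add_mset (Out ''z'' Nil) (eval_st (num 0) S n))
    (add_mset (Out ''z'' Nil) (eval_st (num 0) S' n))"
    using hbisim_mset_add_flag 0(1) g0 by blast
  then show ?case using hbisim_pre_init_stacks[OF 0(2,3,4) zero_fire_pre_init zero_fire_pre_init] g0
    by blast
next
  case (Suc f)
  obtain N x' Q' where "mtau\<^sup>*\<^sup>* (eval_st (num g) S' n) N" "(''suc'', x', Q') \<in> flags N"
    using hbisim_mset_flag[OF Suc(2)] flags_eval_suc by blast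
  then have "(''suc'', x', Q') \<in> flags (eval_st (num g) S' n)" using mtaus_from_stuck eval_num_stuck
    by metis
  then obtain g' where g': "g = Suc g'" using flags_eval_zero by (cases g) auto
  have "''suc'' \<notin> H" by (simp add: H_def)
  then have "\<exists>X Y. mtau\<^sup>*\<^sup>* (eval_st (num f) S n) X \<and> mtau\<^sup>*\<^sup>* (eval_st (num g') S' n) Y \<and>
    hbisim_mset H X Y"
    using hbisim_mset_fire[OF Suc(2)[unfolded g']] eval_suc_fire by blast
  then have "hbisim_mset H (eval_st (num f) S n) (eval_st (num g') S' n)"
    using mtaus_from_stuck eval_num_stuck by blast
  then show ?case using Suc.IH[OF _ Suc(3,4,5)] g' by blast
qed

lemma run_states_lambda_flag: "Y \<in> run_states s n \<Longrightarrow> (''lambda'', x, Q) \<in> flags Y \<Longrightarrow>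
   \<exists>s' j B. kam\<^sup>*\<^sup>* (s, []) (Abs s', []) \<and> represents [j] B s' \<and> Y = lambda_wait_st j B n"
proof -
  assume a: "Y \<in> run_states s n" "(''lambda'', x, Q) \<in> flags Y"
  from run_states_flags[OF a] show ?thesis
  proof (elim disjE exE conjE)
    fix f \<pi> S assume "Y = eval_st (num f) S n"
    then show ?thesis using a(2) flags_eval_zero flags_eval_suc by (cases f) auto
  qed blast
qed

lemma run_states_var_flag: "Y \<in> run_states s n \<Longrightarrow> (a, x, Q) \<in> flags Y \<Longrightarrow> a \<noteq> ''lambda'' \<Longrightarrow>
   \<exists>g \<pi> S. kam\<^sup>*\<^sup>* (s, []) (FVar g, \<pi>) \<and> represents_stack S \<pi> \<and> Y = eval_st (num g) S n"
proof -
  assume a: "Y \<in> run_states s n" "(a, x, Q) \<in> flags Y" "a \<noteq> ''lambda''"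
  from run_states_flags[OF a(1,2)] show ?thesis
  proof (elim disjE exE conjE)
    fix t' j B assume "(a, x, Q) = (''lambda'', PW, restart_body)" then show ?thesis using a(3)
      by simp
  qed blast
qed

lemma hb_rel_sym: "hb_rel t s \<Longrightarrow> hb_rel s t"
  unfolding hb_rel_def using hbisim_mset_sym by blast

lemma hb_rel_abs:
  assumes r: "hb_rel t s" and k: "kam\<^sup>*\<^sup>* (t, []) (Abs t', [])"
  shows "\<exists>s'. kam\<^sup>*\<^sup>* (s, []) (Abs s', []) \<and> (\<exists>f. f \<notin> fv t' \<union> fv s' \<and> hb_rel (opn f t') (opn f s'))"
proof -
  obtain n A A' where rr: "\<forall>f \<in> fv t \<union> fv s. f < n" "A \<in> run_states t n" "A' \<in> run_states s n"
      "hbisim_mset H A A'"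
    using r unfolding hb_rel_def by blast
  obtain j B where jb: "represents [j] B t'" "mtau\<^sup>*\<^sup>* A (lambda_wait_st j B n)"
    using run_states_to_abs[OF rr(2) k] by blast
  obtain W x' Q' where w: "mtau\<^sup>*\<^sup>* A' W" "(''lambda'', x', Q') \<in> flags W"
      "hbisim_mset H (lambda_wait_st j B n) W"
    using hbisim_mset_flag_stuck[OF rr(4) jb(2) _ lambda_wait_stuck] flags_lambda_wait by blast
  obtain s' j' B' where s': "kam\<^sup>*\<^sup>* (s, []) (Abs s', [])" "represents [j'] B' s'"
    "W = lambda_wait_st j' B' n"
    using run_states_lambda_flag[OF run_states_steps[OF w(1) rr(3)] w(2)] by blast
  have "''lambda'' \<notin> H" by (simp add: H_def)
  then obtain X Y where xy: "mtau\<^sup>*\<^sup>* (restart1_st j B n) X" "mtau\<^sup>*\<^sup>* (restart1_st j' B' n) Y"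
    "hbisim_mset H X Y"
    using hbisim_mset_fire[OF w(3)[unfolded s'(3)]] lambda_wait_fire by blast
  have ft: "fv t' \<subseteq> fv t" "fv s' \<subseteq> fv s" using kams_abs_fv k s'(1) by auto
  have "well_formed (opn n t')" "well_formed (opn n s')"
    using represents_well_formed[OF represents_subst0[OF jb(1) represents.rep_num]]
      represents_well_formed[OF represents_subst0[OF s'(2) represents.rep_num]] by auto
  then have "hb_rel (opn n t') (opn n s')"
    using hb_relI fv_bound_opn[OF ft rr(1)] run_states_steps[OF xy(1) run_states_restart1[OF jb(1)]]
      run_states_steps[OF xy(2) run_states_restart1[OF s'(2)]] xy(3) by blast
  moreover have "n \<notin> fv t' \<union> fv s'" using ft rr(1) by auto
  ultimately show ?thesis using s'(1) by blast
qed

lemma hb_rel_var: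
  assumes r: "hb_rel t s" and k: "kam\<^sup>*\<^sup>* (t, []) (FVar f, \<pi>)"
  shows "\<exists>\<pi>'. kam\<^sup>*\<^sup>* (s, []) (FVar f, \<pi>') \<and> list_all2 hb_rel \<pi> \<pi>'"
proof -
  obtain n A A' where rr: "\<forall>f \<in> fv t \<union> fv s. f < n" "A \<in> run_states t n" "A' \<in> run_states s n"
      "hbisim_mset H A A'"
    using r unfolding hb_rel_def by blast
  obtain S where S: "represents_stack S \<pi>" "mtau\<^sup>*\<^sup>* A (eval_st (num f) S n)"
    using run_states_to_var[OF rr(2) k] by blast
  obtain a x Q where fl: "(a, x, Q) \<in> flags (eval_st (num f) S n)" "a \<noteq> ''lambda''"
    using flags_eval_zero flags_eval_suc by (cases f) auto
  obtain W x' Q' where w: "mtau\<^sup>*\<^sup>* A' W" "(a, x', Q') \<in> flags W"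
    "hbisim_mset H (eval_st (num f) S n) W"
    using hbisim_mset_flag_stuck[OF rr(4) S(2) fl(1) eval_num_stuck] by blast
  obtain g \<pi>' S' where s': "kam\<^sup>*\<^sup>* (s, []) (FVar g, \<pi>')" "represents_stack S' \<pi>'"
    "W = eval_st (num g) S' n"
    using run_states_var_flag[OF run_states_steps[OF w(1) rr(3)] w(2) fl(2)] by blast
  have "\<forall>f \<in> fv_list \<pi> \<union> fv_list \<pi>'. f < n"
    using kams_var_fv_list[OF k] kams_var_fv_list[OF s'(1)] rr(1) by blast
  then have "f = g \<and> list_all2 hb_rel \<pi> \<pi>'" using hbisim_eval_var w(3) s'(3) S(1) s'(2) by blast
  then show ?thesis using s'(1) by blast
qed

lemma nf_bisim_hb_rel: "nf_bisim hb_rel"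
  unfolding nf_bisim_def symp_def using hb_rel_sym hb_rel_abs hb_rel_var by blast

theorem hbisim_imp_nf_equiv:
  assumes "well_formed t" and "well_formed s" and "hbisim H (tr_ev t [] n) (tr_ev s [] n)"
    and "\<forall>f \<in> fv t \<union> fv s. f < n"
  shows "nf_equiv t s"
proof -
  have "hbisim_mset H (eval_st (tr 0 t) tr_empty n) (eval_st (tr 0 s) tr_empty n)"
    unfolding hbisim_mset_def using assms(1-3) threads_tr_ev by blast
  then have "hb_rel t s" using hb_relI[OF assms(1,2,4) run_states_tr run_states_tr] assms(1,2)
    by blast
  then show ?thesis by (rule nf_bisim_imp_nf_equiv[OF nf_bisim_hb_rel])
qed

lemma finite_fv: "finite (fv t)"
  by (induction t) auto

theorem corollary4p15:
  assumes "well_formed t" and "well_formed s"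
  shows "nf_equiv t s \<longleftrightarrow>
         (\<exists>n. (\<forall>f \<in> fv t \<union> fv s. f < n) \<and> hbisim H (tr_ev t [] n) (tr_ev s [] n))"
proof
  assume "nf_equiv t s"
  moreover obtain n where "\<forall>f \<in> fv t \<union> fv s. f < n"
    using finite_nat_set_iff_bounded finite_fv by (meson finite_UnI)
  ultimately show "\<exists>n. (\<forall>f \<in> fv t \<union> fv s. f < n) \<and> hbisim H (tr_ev t [] n) (tr_ev s [] n)"
    using nf_equiv_imp_hbisim[OF assms] by blast
next
  assume "\<exists>n. (\<forall>f \<in> fv t \<union> fv s. f < n) \<and> hbisim H (tr_ev t [] n) (tr_ev s [] n)"
  then show "nf_equiv t s" using hbisim_imp_nf_equiv[OF assms] by blast
qed

end
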